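(* For any eigenfunction $\phi$ and any adjoint eigenfunction $\psi$ of the dmKP hierarchy, \[ \phi(n,t)=\operatorname{res}_{\lambda}\Big(w(n,t,\lambda)\,S\big(\phi(n,t'),\Delta w^{*}(n,t',\lambda)\big)\Big),\qquad \psi(n,t)=\operatorname{res}_{\lambda}\Big(w^{*}(n,t,\lambda)\,\hat S\big(\Delta w(n,t',\lambda),\psi(n+1,t')\big)\Big). \]
   Context: $\varGamma g(n)=g(n+1)$, $\varGamma^{-1}g(n)=g(n-1)$, $\Delta=\varGamma-I$, $\Delta^*=\varGamma^{-1}-I$; pseudo-difference operators $\sum_{i\le m}a_i\Delta^i$ are multiplied by $\Delta^{k}\circ g=\sum_{i\ge0}\binom ki (\Delta^{i}g)(n+k-i)\Delta^{k-i}$; the adjoint satisfies $(a\Delta^k)^*=(\Delta^* )^k a$; $(A)_{\ge1}$ is the part with positive powers of $\Delta$, $(A)_{\le0}$ the rest; $\operatorname{res}_\Delta$ is the coefficient of $\Delta^{-1}$ and $\operatorname{res}_\lambda$ the coefficient of $\lambda^{-1}$. The dmKP hierarchy is $\partial_{t_i}L=[(L^i)_{\ge1},L]$, $L=Z\Delta Z^{-1}=\Delta+u_0+u_1\Delta^{-1}+\cdots$, $Z=z_0+z_1\Delta^{-1}+\cdots$, $\partial_{t_i}Z=-(L^i)_{\le0}Z$. With $\xi(t,\lambda)=\sum_k t_k\lambda^k$, the wave function is $w(n,t,\lambda)=Z(n)(1+\lambda)^ne^{\xi(t,\lambda)}$ and the adjoint wave function is $w^*(n,t,\lambda)=(Z^{-1}(n-1)\Delta^{-1})^*(1+\lambda)^{-n}e^{-\xi(t,\lambda)}$.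 An eigenfunction $\phi$ satisfies $\phi_{t_i}=(L^i)_{\ge1}(\phi)$ and an adjoint eigenfunction $\psi$ satisfies $\psi_{t_i}=-(\Delta^{-1}(L^i)^*_{\ge1}\Delta)(\psi)$ for all $i$. The squared eigenfunction potential $S(\phi,\Delta\psi)$ is a function with $\Delta S(\phi,\Delta\psi)=\phi\,(\Delta\psi)$ and $\partial_{t_i}S(\phi,\Delta\psi)=\operatorname{res}_{\Delta}(\varGamma\Delta^{-1}(\Delta\psi)(L^{i})_{\geq1}\phi\Delta^{-1})$; the second potential is $\hat S(\Delta\phi,\varGamma\psi)=\phi\psi-S(\phi,\Delta\psi)$, which satisfies $\Delta\hat S(\Delta\phi,\varGamma\psi)=(\Delta\phi)\varGamma\psi$. (The wave function $w(\cdot,\lambda)$ is an eigenfunction and $w^*(\cdot,\lambda)$ an adjoint eigenfunction, so these potentials apply to them.) *)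

theory Defs
  imports "HOL-Analysis.Analysis" "HOL-Computational_Algebra.Formal_Laurent_Series"
begin

text \<open>Times are t = (t_1, t_2, ...), a function nat => real (t 0 is unused).
  Partial derivative in t_i.\<close>

definition pd :: "nat \<Rightarrow> ((nat \<Rightarrow> real) \<Rightarrow> real) \<Rightarrow> (nat \<Rightarrow> real) \<Rightarrow> real" where
  "pd i f t = deriv (\<lambda>s. f (t(i := s))) (t i)"

definition pdiff :: "nat \<Rightarrow> ((nat \<Rightarrow> real) \<Rightarrow> real) \<Rightarrow> (nat \<Rightarrow> real) \<Rightarrow> bool" where
  "pdiff i f t \<longleftrightarrow> (\<lambda>s. f (t(i := s))) differentiable (at (t i))"

definition ibinom :: "int \<Rightarrow> nat \<Rightarrow> int" where
  "ibinom k r = (if k \<ge> 0 then int (nat k choose r)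
                 else (-1) ^ r * int ((nat (- k) + r - 1) choose r))"

definition fdiff :: "nat \<Rightarrow> (int \<Rightarrow> 'a::comm_ring_1) \<Rightarrow> int \<Rightarrow> 'a" where
  "fdiff r g n = (\<Sum>s\<le>r. of_int ((-1) ^ (r - s) * int (r choose s)) * g (n + int s))"

definition bdiff :: "nat \<Rightarrow> (int \<Rightarrow> 'a::comm_ring_1) \<Rightarrow> int \<Rightarrow> 'a" where
  "bdiff r g n = (\<Sum>s\<le>r. of_int ((-1) ^ (r - s) * int (r choose s)) * g (n - int s))"

text \<open>A k n = coefficient of Delta^k at lattice site n.\<close>
type_synonym 'a pdo = "int \<Rightarrow> int \<Rightarrow> 'a"

definition pdo_bounded :: "'a::zero pdo \<Rightarrow> bool" where
  "pdo_bounded A \<longleftrightarrow> (\<exists>m. \<forall>k>m. \<forall>n. A k n = 0)"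

definition pdo_deg :: "'a::zero pdo \<Rightarrow> int" where
  "pdo_deg A = (SOME m. \<forall>k>m. \<forall>n. A k n = 0)"

text \<open>Product, using  Delta^i o b = sum_r binom(i,r) (Delta^r b)(n+i-r) Delta^(i-r).\<close>
definition pdo_mult :: "'a::comm_ring_1 pdo \<Rightarrow> 'a pdo \<Rightarrow> 'a pdo" where
  "pdo_mult A B j n =
     (\<Sum>r\<in>{0..nat (pdo_deg A + pdo_deg B - j)}.
        \<Sum>i\<in>{j + int r - pdo_deg B .. pdo_deg A}.
          A i n * of_int (ibinom i r) * fdiff r (B (j - i + int r)) (n + i - int r))"

definition pdo_one :: "'a::{zero,one} pdo" where
  "pdo_one k n = (if k = 0 then 1 else 0)"

definition pdo_Delta :: "'a::{zero,one} pdo" where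
  "pdo_Delta k n = (if k = 1 then 1 else 0)"

definition pdo_Delta_inv :: "'a::{zero,one} pdo" where
  "pdo_Delta_inv k n = (if k = -1 then 1 else 0)"

definition pdo_Gamma :: "'a::{zero,one} pdo" where
  "pdo_Gamma k n = (if k = 0 \<or> k = 1 then 1 else 0)"

definition pdo_fun :: "(int \<Rightarrow> 'a::zero) \<Rightarrow> 'a pdo" where
  "pdo_fun f k n = (if k = 0 then f n else 0)"

primrec pdo_pow :: "'a::comm_ring_1 pdo \<Rightarrow> nat \<Rightarrow> 'a pdo" where
  "pdo_pow A 0 = pdo_one"
| "pdo_pow A (Suc m) = pdo_mult (pdo_pow A m) A"

definition pdo_pos :: "'a::zero pdo \<Rightarrow> 'a pdo" where
  "pdo_pos A k n = (if k \<ge> 1 then A k n else 0)"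

definition pdo_nonpos :: "'a::zero pdo \<Rightarrow> 'a pdo" where
  "pdo_nonpos A k n = (if k \<le> 0 then A k n else 0)"

definition pdo_res :: "'a pdo \<Rightarrow> int \<Rightarrow> 'a" where
  "pdo_res A n = A (-1) n"

definition pdo_map :: "('a \<Rightarrow> 'b) \<Rightarrow> 'a pdo \<Rightarrow> 'b pdo" where
  "pdo_map h A k n = h (A k n)"

definition pdo_apply :: "'a::comm_ring_1 pdo \<Rightarrow> (int \<Rightarrow> 'a) \<Rightarrow> int \<Rightarrow> 'a" where
  "pdo_apply A f n = (\<Sum>k\<in>{0..nat (pdo_deg A)}. A (int k) n * fdiff k f n)"

text \<open>For  A = sum_{k>=1} a_k Delta^k :  (Delta^{-1} A^* Delta) f, where
  A^* = sum_k (Delta^* )^k a_k and Delta^{-1} (Delta^* )^k = (-1)^k Gamma^{-k} Delta^{k-1}.\<close>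
definition adj_conj_apply :: "'a::comm_ring_1 pdo \<Rightarrow> (int \<Rightarrow> 'a) \<Rightarrow> int \<Rightarrow> 'a" where
  "adj_conj_apply A f n =
     (\<Sum>k\<in>{1..nat (pdo_deg A)}. (-1) ^ k *
         fdiff (k - 1) (\<lambda>m. A (int k) m * (f (m + 1) - f m)) (n - int k))"

type_synonym tpdo = "(nat \<Rightarrow> real) \<Rightarrow> real pdo"

definition Lax :: "tpdo \<Rightarrow> tpdo \<Rightarrow> tpdo" where
  "Lax Z Zi t = pdo_mult (pdo_mult (Z t) pdo_Delta) (Zi t)"

text \<open>Z = z_0 + z_1 Delta^{-1} + ..., Zi = Z^{-1}, L = Z Delta Z^{-1} = Delta + u_0 + ...,
  and the dressing equations  d_{t_i} Z = -(L^i)_{<=0} Z .\<close>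
definition dmKP_dressing :: "tpdo \<Rightarrow> tpdo \<Rightarrow> bool" where
  "dmKP_dressing Z Zi \<longleftrightarrow>
     (\<forall>t k n. k > 0 \<longrightarrow> Z t k n = 0 \<and> Zi t k n = 0) \<and>
     (\<forall>t. pdo_mult (Z t) (Zi t) = pdo_one \<and> pdo_mult (Zi t) (Z t) = pdo_one) \<and>
     (\<forall>t n. Lax Z Zi t 1 n = 1) \<and>
     (\<forall>i\<ge>1. \<forall>t k n. pdiff i (\<lambda>s. Z s k n) t \<and>
        pd i (\<lambda>s. Z s k n) t = - pdo_mult (pdo_nonpos (pdo_pow (Lax Z Zi t) i)) (Z t) k n)"

definition eigenfunction :: "tpdo \<Rightarrow> ((nat \<Rightarrow> real) \<Rightarrow> int \<Rightarrow> real) \<Rightarrow> bool" where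
  "eigenfunction L \<phi> \<longleftrightarrow>
     (\<forall>i\<ge>1. \<forall>t n. pdiff i (\<lambda>s. \<phi> s n) t \<and>
        pd i (\<lambda>s. \<phi> s n) t = pdo_apply (pdo_pos (pdo_pow (L t) i)) (\<phi> t) n)"

definition adjoint_eigenfunction :: "tpdo \<Rightarrow> ((nat \<Rightarrow> real) \<Rightarrow> int \<Rightarrow> real) \<Rightarrow> bool" where
  "adjoint_eigenfunction L \<psi> \<longleftrightarrow>
     (\<forall>i\<ge>1. \<forall>t n. pdiff i (\<lambda>s. \<psi> s n) t \<and>
        pd i (\<lambda>s. \<psi> s n) t = - adj_conj_apply (pdo_pos (pdo_pow (L t) i)) (\<psi> t) n)"

section \<open>lambda-dependent objects as formal Laurent series in X = lambda^{-1}\<close>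

text \<open>(1+lambda)^n = lambda^n (1+lambda^{-1})^n = X^{-n} (1+X)^n\<close>
definition onepl :: "int \<Rightarrow> real fls" where
  "onepl n = fls_shift n (fps_to_fls (Abs_fps (\<lambda>r. of_int (ibinom n r))))"

text \<open>w(n,t,lambda) = what Z t n * e^{xi(t,lambda)}:
  Z(n) (1+lambda)^n = sum_j z_j(n) lambda^{-j} (1+lambda)^n.\<close>
definition what :: "tpdo \<Rightarrow> (nat \<Rightarrow> real) \<Rightarrow> int \<Rightarrow> real fls" where
  "what Z t n = fps_to_fls (Abs_fps (\<lambda>j. Z t (- int j) n)) * onepl n"

text \<open>For an operator sum_{k<=-1} (Delta^* )^k c_k, its action on (1+lambda)^{-n}, using
  (Delta^* )^k o c = sum_r binom(k,r) ((Delta^* )^r c)(n-k+r) (Delta^* )^{k-r}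
  and (Delta^* )(1+lambda)^{-n} = lambda (1+lambda)^{-n}.\<close>
definition adj_act_neg :: "real pdo \<Rightarrow> int \<Rightarrow> real fls" where
  "adj_act_neg C n = fps_to_fls (Abs_fps (\<lambda>m. if m = 0 then 0 else
       (\<Sum>k\<in>{- int m .. -1}. of_int (ibinom k (nat (k + int m))) *
           bdiff (nat (k + int m)) (C k) (n + int m)))) * onepl (- n)"

text \<open>w^*(n,t,lambda) = wstarhat Zi t n * e^{-xi(t,lambda)} with
  w^* = (Z^{-1}(n-1) Delta^{-1})^* (1+lambda)^{-n} e^{-xi}; the adjoint operator is
  sum_j (Delta^* )^{-j-1} zinv_j(n-1).\<close>
definition wstarhat :: "tpdo \<Rightarrow> (nat \<Rightarrow> real) \<Rightarrow> int \<Rightarrow> real fls" where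
  "wstarhat Zi t n = adj_act_neg (\<lambda>k m. if k \<le> -1 then Zi t (k + 1) (m - 1) else 0) n"

text \<open>Squared eigenfunction potential S(f, Delta g) of lambda-dependent functions
  (values in real fls) whose common exponential factor is e^{eps xi(t,lambda)}:
  S = sigma * e^{eps xi}.\<close>
definition sq_pot :: "tpdo \<Rightarrow> real \<Rightarrow> ((nat \<Rightarrow> real) \<Rightarrow> int \<Rightarrow> real fls)
     \<Rightarrow> ((nat \<Rightarrow> real) \<Rightarrow> int \<Rightarrow> real fls) \<Rightarrow> ((nat \<Rightarrow> real) \<Rightarrow> int \<Rightarrow> real fls) \<Rightarrow> bool" where
  "sq_pot L eps f g \<sigma> \<longleftrightarrow>
     (\<forall>n. \<exists>d. \<forall>t k. k < d \<longrightarrow> fls_nth (\<sigma> t n) k = 0) \<and>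
     (\<forall>t n. \<sigma> t (n + 1) - \<sigma> t n = f t n * (g t (n + 1) - g t n)) \<and>
     (\<forall>i\<ge>1. \<forall>t n k. pdiff i (\<lambda>s. fls_nth (\<sigma> s n) k) t \<and>
        pd i (\<lambda>s. fls_nth (\<sigma> s n) k) t + eps * fls_nth (\<sigma> t n) (k + int i) =
          fls_nth (pdo_res (pdo_mult (pdo_mult (pdo_mult (pdo_mult pdo_Gamma pdo_Delta_inv)
                      (pdo_fun (\<lambda>m. g t (m + 1) - g t m)))
                   (pdo_mult (pdo_map fls_const (pdo_pos (pdo_pow (L t) i))) (pdo_fun (f t))))
                 pdo_Delta_inv) n) k)"

text \<open>Formal t'-derivative of F(t') e^{eps xi(t',lambda)} : (d_i F + eps lambda^i F) e^{eps xi}.\<close>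
definition pd_fls :: "nat \<Rightarrow> ((nat \<Rightarrow> real) \<Rightarrow> int \<Rightarrow> real fls) \<Rightarrow> (nat \<Rightarrow> real) \<Rightarrow> int \<Rightarrow> real fls" where
  "pd_fls i F t n = Abs_fls (\<lambda>k. pd i (\<lambda>s. fls_nth (F s n) k) t)"

definition Dtw :: "real \<Rightarrow> nat \<Rightarrow> ((nat \<Rightarrow> real) \<Rightarrow> int \<Rightarrow> real fls) \<Rightarrow> (nat \<Rightarrow> real) \<Rightarrow> int \<Rightarrow> real fls" where
  "Dtw eps i F t n = pd_fls i F t n + fls_const eps * fls_X_inv ^ i * F t n"

primrec Dtw_list :: "real \<Rightarrow> nat list \<Rightarrow> ((nat \<Rightarrow> real) \<Rightarrow> int \<Rightarrow> real fls) \<Rightarrow> (nat \<Rightarrow> real) \<Rightarrow> int \<Rightarrow> real fls" where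
  "Dtw_list eps [] F = F"
| "Dtw_list eps (i # is) F = Dtw eps i (Dtw_list eps is F)"

end

theory Submission
  imports Defs
begin

text \<open>
  Everything rests on the bilinear identity \<open>res\<^sub>\<lambda> w(a) w\<^sup>*(b) = [b \<le> a]\<close> (exponential
  factors cancelled), which is the operator identity \<open>Z Z\<^sup>-\<^sup>1 = 1\<close> read through the action of
  difference operators on the powers \<open>(1 + \<lambda>)\<^sup>n\<close>. Pairing the defining relation
  \<open>\<Delta>S = \<phi> \<Delta>w\<^sup>*\<close> with \<open>w(a)\<close>, the residues \<open>res\<^sub>\<lambda> w(a) S(m)\<close> telescope in \<open>m\<close>: they are
  constant for \<open>m \<le> a\<close>, jump by \<open>\<phi>(a)\<close> at \<open>m = a\<close>, and vanish for \<open>m > a\<close> because the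
  \<open>t\<^sub>1\<close>-flow of the potential forces \<open>S(m)\<close> to start at \<open>\<lambda>\<^sup>-\<^sup>m\<^sup>-\<^sup>1\<close>. The formula for \<open>\<psi>\<close> is obtained
  in the same way from the second potential.

  Independence of \<open>t'\<close> is proved one derivative at a time: by the product rule, the flow
  \<open>w\<^sub>t\<^sub>j = (L\<^sup>j)\<^sub>+ w\<close> cancels against the eigenfunction equation of \<open>\<phi>\<close>. The adjoint flow
  \<open>w\<^sup>*\<^sub>t\<^sub>j = -(L\<^sup>j)\<^sub>+\<^sup>* w\<^sup>*\<close> needed for \<open>\<psi>\<close> is itself deduced from the flow of \<open>w\<close>, the bilinear
  identity and the nondegeneracy of the pairing \<open>F \<mapsto> res\<^sub>\<lambda> w(a) F\<close>.

  Associativity of the operator product, behind \<open>L\<^sup>j Z = Z \<Delta>\<^sup>j\<close>, is proved by expanding operators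
  in powers of the shift \<open>\<Gamma> = 1 + \<Delta>\<close>, where multiplication becomes a convolution.
\<close>

section \<open>Finite differences\<close>

lemma ibinom_0[simp]: "ibinom k 0 = 1"
  by (simp add: ibinom_def)

lemma ibinom_pascal: "ibinom (k+1) (Suc r) = ibinom k (Suc r) + ibinom k r"
proof (cases "k \<ge> 0")
  case True
  then have "nat (k+1) = Suc (nat k)" by simp
  then show ?thesis using True by (simp add: ibinom_def)
next
  case False
  show ?thesis
  proof (cases "k = -1")
    case True
    then show ?thesis by (simp add: ibinom_def)
  next
    case False2: False
    define m where "m = nat (-k)"
    have m: "k = - int m" "m \<ge> 2" using False False2 by (auto simp: m_def)
    have k1: "k + 1 = - int (m - 1)" using m by simp
    have a: "nat (- (k+1)) = m - 1" using k1 m by simp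
    have b: "nat (-k) = m" using m by simp
    define q where "q = m + r - 1"
    have q: "m + r = Suc q" using m by (simp add: q_def)
    have c: "m - 1 + Suc r - 1 = q" "m + Suc r - 1 = Suc q" "m + r - 1 = q" "m + r - Suc 0 = q" "r + (m - 1) = q"
      using m by (auto simp: q_def)
    have d: "nat (int m - 1) = m - 1" using m by simp
    have f: "int (m + r choose Suc r) = int (q choose r) + int (q choose Suc r)"
      unfolding q by simp
    show ?thesis using False False2 m k1 f
      by (simp add: ibinom_def a b c d algebra_simps)
  qed
qed

lemma ibinom_pascal': "ibinom (1+k) (Suc r) = ibinom k (Suc r) + ibinom k r"
  using ibinom_pascal[of k r] by (simp only: add.commute)

lemma ibinom_negate_upper:
  assumes "k = int r - m - 1"
  shows "ibinom m r = (-1) ^ r * ibinom k r"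
proof (cases "m \<ge> 0")
  case True
  show ?thesis
  proof (cases "int r \<le> m")
    case True2: True
    then have "k < 0" using assms by simp
    have "nat (- k) + r - 1 = nat m" using assms True2 by auto
    then show ?thesis using True \<open>k < 0\<close> by (simp add: ibinom_def flip: power_mult_distrib)
  next
    case False
    then have "k \<ge> 0" using assms True by simp
    have "nat m < r" "nat k < r" using False assms True by auto
    then show ?thesis using True \<open>k \<ge> 0\<close> by (simp add: ibinom_def binomial_eq_0)
  qed
next
  case False
  then have "k \<ge> 0" using assms by simp
  have "nat k = nat (- m) + r - 1" using assms False by auto
  then show ?thesis using False \<open>k \<ge> 0\<close> by (simp add: ibinom_def flip: power_mult_distrib)
qed

lemma fdiff_0[simp]: "fdiff 0 g n = g n"
  by (simp add: fdiff_def)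

lemma fdiff_zero[simp]: "fdiff r (\<lambda>_. 0) n = 0"
  by (simp add: fdiff_def)

lemma fdiff_Suc: "fdiff (Suc r) g m = fdiff r g (m+1) - fdiff r g m"
proof -
  define A where "A s = (if s = 0 then 0 else of_int ((-1) ^ (Suc r - s) * int (r choose (s - 1))) * g (m + int s))" for s
  define B where "B s = of_int ((-1) ^ (Suc r - s) * int (r choose s)) * g (m + int s)" for s
  have 1: "fdiff (Suc r) g m = (\<Sum>s\<le>Suc r. A s + B s)"
    unfolding fdiff_def
  proof (rule sum.cong[OF refl])
    fix s assume "s \<in> {..Suc r}"
    show "of_int ((-1) ^ (Suc r - s) * int (Suc r choose s)) * g (m + int s) = A s + B s"
    proof (cases s)
      case 0 then show ?thesis by (simp add: A_def B_def)
    next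
      case (Suc s') then show ?thesis by (simp add: A_def B_def algebra_simps)
    qed
  qed
  have 2: "(\<Sum>s\<le>Suc r. A s) = fdiff r g (m+1)"
    unfolding fdiff_def by (subst sum.atMost_Suc_shift) (simp add: A_def algebra_simps)
  have 3: "(\<Sum>s\<le>Suc r. B s) = - fdiff r g m"
  proof -
    have "(\<Sum>s\<le>Suc r. B s) = (\<Sum>s\<le>r. B s)" by (simp add: B_def binomial_eq_0)
    also have "\<dots> = (\<Sum>s\<le>r. - (of_int ((-1) ^ (r - s) * int (r choose s)) * g (m + int s)))"
    proof (rule sum.cong[OF refl])
      fix s assume "s \<in> {..r}"
      then have "Suc r - s = Suc (r - s)" by auto
      then show "B s = - (of_int ((-1) ^ (r - s) * int (r choose s)) * g (m + int s))"
        by (simp add: B_def)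
    qed
    finally show ?thesis by (simp add: fdiff_def sum_negf)
  qed
  show ?thesis using 1 2 3 by (simp add: sum.distrib)
qed

lemma fdiff_const: "fdiff r (\<lambda>_. c) n = (if r = 0 then c else 0)"
  by (induction r arbitrary: n) (simp_all add: fdiff_Suc)

lemma fdiff_cong: "(\<And>s. s \<le> r \<Longrightarrow> f (n + int s) = g (n + int s)) \<Longrightarrow> fdiff r f n = fdiff r g n"
  unfolding fdiff_def by (rule sum.cong) auto

lemma fdiff_delta:
  "fdiff r (\<lambda>m. if m = y then c else 0) x
     = (if x \<le> y \<and> y \<le> x + int r then of_int ((-1) ^ (r - nat (y - x)) * int (r choose nat (y - x))) * c else 0)"
proof -
  have "fdiff r (\<lambda>m. if m = y then c else 0) x = (\<Sum>s\<le>r. if s = nat (y - x) \<and> x \<le> y then of_int ((-1) ^ (r - s) * int (r choose s)) * c else 0)"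
    unfolding fdiff_def by (rule sum.cong) auto
  also have "\<dots> = (if x \<le> y \<and> y \<le> x + int r then of_int ((-1) ^ (r - nat (y - x)) * int (r choose nat (y - x))) * c else 0)"
    by (cases "x \<le> y") (auto simp: sum.delta)
  finally show ?thesis .
qed

lemma fdiff_diff_fun: "fdiff r (\<lambda>m. f (m + 1) - f m) x = fdiff r f (x + 1) - fdiff r f x"
  unfolding fdiff_def by (simp add: sum_subtractf algebra_simps)

lemma bdiff_fdiff: "bdiff r g x = fdiff r (\<lambda>y. g (- y)) (- x)"
  unfolding bdiff_def fdiff_def by (rule sum.cong) auto

lemma bdiff_0[simp]: "bdiff 0 g x = g x"
  by (simp add: bdiff_def)

lemma bdiff_Suc: "bdiff (Suc r) g x = bdiff r g (x - 1) - bdiff r g x"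
  by (simp add: bdiff_fdiff fdiff_Suc)

lemma sum_eq_if_vanishing_outside:
  assumes "finite A" "finite B" "\<And>x. x \<in> A - B \<Longrightarrow> f x = 0" "\<And>x. x \<in> B - A \<Longrightarrow> f x = 0"
  shows "sum f A = sum f B"
  by (rule sum.mono_neutral_cong) (use assms in auto)

lemma sum_int_interval_shift: "(\<Sum>q\<in>{lo..hi::int}. f q) = (\<Sum>q\<in>{lo - d..hi - d}. f (q + d))"
  by (rule sum.reindex_bij_witness[of _ "\<lambda>q. q + d" "\<lambda>q. q - d"]) auto

section \<open>Pseudo-difference operators\<close>

definition pdo_deg_le :: "'a::zero pdo \<Rightarrow> int \<Rightarrow> bool" where
  "pdo_deg_le A d \<longleftrightarrow> (\<forall>k>d. \<forall>n. A k n = 0)"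

lemma pdo_deg_le_pdo_deg: "pdo_deg_le A d \<Longrightarrow> pdo_deg_le A (pdo_deg A)"
  unfolding pdo_deg_def pdo_deg_le_def by (rule someI)

lemma pdo_deg_le_mono: "pdo_deg_le A d \<Longrightarrow> d \<le> d' \<Longrightarrow> pdo_deg_le A d'"
  unfolding pdo_deg_le_def by auto

lemma pdo_deg_leD: "pdo_deg_le A d \<Longrightarrow> k > d \<Longrightarrow> A k n = 0"
  unfolding pdo_deg_le_def by auto

definition pdo_mult_term :: "'a::comm_ring_1 pdo \<Rightarrow> 'a pdo \<Rightarrow> int \<Rightarrow> int \<Rightarrow> nat \<Rightarrow> int \<Rightarrow> 'a" where
  "pdo_mult_term A B j n r i = A i n * of_int (ibinom i r) * fdiff r (B (j - i + int r)) (n + i - int r)"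

definition pdo_mult_sum :: "'a::comm_ring_1 pdo \<Rightarrow> 'a pdo \<Rightarrow> int \<Rightarrow> int \<Rightarrow> int \<Rightarrow> int \<Rightarrow> 'a" where
  "pdo_mult_sum A B a b j n = (\<Sum>r\<in>{0..nat (a + b - j)}. \<Sum>i\<in>{j + int r - b .. a}. pdo_mult_term A B j n r i)"

lemma pdo_mult_sum_Sigma: "pdo_mult_sum A B a b j n = (\<Sum>(r,i)\<in>Sigma {0..nat (a + b - j)} (\<lambda>r. {j + int r - b .. a}). pdo_mult_term A B j n r i)"
  unfolding pdo_mult_sum_def by (rule sum.Sigma) auto

lemma pdo_mult_term_eq_0:
  assumes "pdo_deg_le A a" "pdo_deg_le B b" "\<not> (i \<le> a \<and> j + int r - b \<le> i)"
  shows "pdo_mult_term A B j n r i = 0"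
proof (cases "i > a")
  case True then show ?thesis using assms(1) by (simp add: pdo_mult_term_def pdo_deg_leD)
next
  case False
  then have "j - i + int r > b" using assms(3) by auto
  then have "B (j - i + int r) = (\<lambda>_. 0)" using assms(2) by (auto simp: pdo_deg_leD)
  then show ?thesis by (simp add: pdo_mult_term_def)
qed

lemma pdo_mult_sum_bounds_mono:
  assumes "pdo_deg_le A a" "pdo_deg_le B b" "a \<le> a'" "b \<le> b'"
  shows "pdo_mult_sum A B a' b' j n = pdo_mult_sum A B a b j n"
  unfolding pdo_mult_sum_Sigma
  by (rule sum.mono_neutral_right) (use assms(3,4) pdo_mult_term_eq_0[OF assms(1,2)] in force)+

lemma pdo_mult_eq_sum_pdo_deg: "pdo_mult A B j n = pdo_mult_sum A B (pdo_deg A) (pdo_deg B) j n"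
  unfolding pdo_mult_def pdo_mult_sum_def pdo_mult_term_def ..

lemma pdo_mult_eq_sum:
  assumes "pdo_deg_le A a" "pdo_deg_le B b"
  shows "pdo_mult A B j n = pdo_mult_sum A B a b j n"
proof -
  have A: "pdo_deg_le A (pdo_deg A)" and B: "pdo_deg_le B (pdo_deg B)" using assms pdo_deg_le_pdo_deg by blast+
  have "pdo_mult A B j n = pdo_mult_sum A B (max a (pdo_deg A)) (max b (pdo_deg B)) j n"
    unfolding pdo_mult_eq_sum_pdo_deg by (rule pdo_mult_sum_bounds_mono[OF A B, symmetric]) auto
  also have "\<dots> = pdo_mult_sum A B a b j n"
    by (rule pdo_mult_sum_bounds_mono[OF assms]) auto
  finally show ?thesis .
qed

lemma pdo_deg_le_mult:
  assumes "pdo_deg_le A a" "pdo_deg_le B b"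
  shows "pdo_deg_le (pdo_mult A B) (a + b)"
  unfolding pdo_deg_le_def
proof (intro allI impI)
  fix k n assume "k > a + b"
  then have "nat (a + b - k) = 0" by simp
  moreover have "{k - b .. a} = {}"
    using \<open>k > a + b\<close> by auto
  ultimately show "pdo_mult A B k n = 0"
    by (simp add: pdo_mult_eq_sum[OF assms] pdo_mult_sum_def)
qed

definition pdo_monom :: "int \<Rightarrow> 'a::{zero,one} pdo" where
  "pdo_monom i k n = (if k = i then 1 else 0)"

lemma pdo_Delta_eq_monom: "pdo_Delta = pdo_monom 1"
  by (auto simp: pdo_Delta_def pdo_monom_def fun_eq_iff)

lemma pdo_one_eq_monom: "pdo_one = pdo_monom 0"
  by (auto simp: pdo_one_def pdo_monom_def fun_eq_iff)

lemma pdo_Delta_inv_eq_monom: "pdo_Delta_inv = pdo_monom (-1)"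
  by (auto simp: pdo_Delta_inv_def pdo_monom_def fun_eq_iff)

lemma pdo_deg_le_monom: "pdo_deg_le (pdo_monom i) i"
  by (simp add: pdo_deg_le_def pdo_monom_def)

lemma pdo_deg_le_Delta_inv: "pdo_deg_le (pdo_Delta_inv :: 'a::comm_ring_1 pdo) (-1)"
  by (simp add: pdo_Delta_inv_eq_monom pdo_deg_le_monom)

lemma pdo_deg_le_Gamma: "pdo_deg_le pdo_Gamma 1"
  by (simp add: pdo_deg_le_def pdo_Gamma_def)

lemma pdo_monom_mult_eq:
  assumes B: "pdo_deg_le B b" and N: "int N \<ge> i + b - j"
  shows "pdo_mult (pdo_monom i) B j n = (\<Sum>r\<le>N. of_int (ibinom i r) * fdiff r (B (j - i + int r)) (n + i - int r))"
proof -
  define b' where "b' = max b (int N + j - i)"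
  have B': "pdo_deg_le B b'" using B by (rule pdo_deg_le_mono) (simp add: b'_def)
  have "pdo_mult (pdo_monom i) B j n = pdo_mult_sum (pdo_monom i) B i b' j n"
    by (rule pdo_mult_eq_sum[OF pdo_deg_le_monom B'])
  also have "\<dots> = (\<Sum>r\<in>{0..nat (i + b' - j)}. of_int (ibinom i r) * fdiff r (B (j - i + int r)) (n + i - int r))"
    unfolding pdo_mult_sum_def
  proof (rule sum.cong[OF refl])
    fix r assume r: "r \<in> {0..nat (i + b' - j)}"
    have "i + b' - j \<ge> 0" by (simp add: b'_def)
    then have "{j + int r - b'..i} = insert i {j + int r - b'..i - 1}" using r by auto
    moreover have "(\<Sum>i'\<in>{j + int r - b'..i - 1}. pdo_mult_term (pdo_monom i) B j n r i') = 0"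
      by (rule sum.neutral) (auto simp: pdo_mult_term_def pdo_monom_def)
    ultimately show "(\<Sum>i'\<in>{j + int r - b'..i}. pdo_mult_term (pdo_monom i) B j n r i') = of_int (ibinom i r) * fdiff r (B (j - i + int r)) (n + i - int r)"
      by (simp add: pdo_mult_term_def pdo_monom_def)
  qed
  also have "\<dots> = (\<Sum>r\<le>N. of_int (ibinom i r) * fdiff r (B (j - i + int r)) (n + i - int r))"
  proof (rule sum_eq_if_vanishing_outside)
    fix r assume "r \<in> {0..nat (i + b' - j)} - {..N}"
    then have "j - i + int r > b" using N by auto
    then have "B (j - i + int r) = (\<lambda>_. 0)" using B by (auto simp: pdo_deg_leD)
    then show "of_int (ibinom i r) * fdiff r (B (j - i + int r)) (n + i - int r) = 0" by simp
  next
    fix r assume "r \<in> {..N} - {0..nat (i + b' - j)}"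
    then have False using N by (auto simp: b'_def)
    then show "of_int (ibinom i r) * fdiff r (B (j - i + int r)) (n + i - int r) = 0" ..
  qed auto
  finally show ?thesis .
qed

lemma pdo_deg_le_monom_mult: "pdo_deg_le B b \<Longrightarrow> pdo_deg_le (pdo_mult (pdo_monom i) B) (i + b)"
  using pdo_deg_le_mult[OF pdo_deg_le_monom] by blast

lemma pdo_one_mult:
  assumes "pdo_deg_le B b" shows "pdo_mult (pdo_monom 0) B = B"
proof (intro ext)
  fix j n
  have "pdo_mult (pdo_monom 0) B j n = (\<Sum>r\<le>nat (b - j). of_int (ibinom 0 r) * fdiff r (B (j - 0 + int r)) (n + 0 - int r))"
    by (rule pdo_monom_mult_eq[OF assms]) simp
  also have "\<dots> = B j n"
    by (subst sum.atMost_shift) (simp add: ibinom_def)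
  finally show "pdo_mult (pdo_monom 0) B j n = B j n" .
qed

lemma pdo_Delta_mult_eq:
  assumes "pdo_deg_le B b"
  shows "pdo_mult (pdo_monom 1) B j n = B (j - 1) (n + 1) + B j (n + 1) - B j n"
proof -
  have "pdo_mult (pdo_monom 1) B j n = (\<Sum>r\<le>Suc (nat (1 + b - j)). of_int (ibinom 1 r) * fdiff r (B (j - 1 + int r)) (n + 1 - int r))"
    by (rule pdo_monom_mult_eq[OF assms]) simp
  also have "\<dots> = (\<Sum>r\<le>1. of_int (ibinom 1 r) * fdiff r (B (j - 1 + int r)) (n + 1 - int r))"
    by (rule sum.mono_neutral_right) (auto simp: ibinom_def binomial_eq_0)
  also have "\<dots> = B (j - 1) (n + 1) + B j (n + 1) - B j n"
    by (simp add: ibinom_def fdiff_Suc)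
  finally show ?thesis .
qed

lemma pdo_Delta_mult_monom_mult:
  assumes B: "pdo_deg_le B b"
  shows "pdo_mult (pdo_monom 1) (pdo_mult (pdo_monom i) B) = pdo_mult (pdo_monom (i+1)) B"
proof (intro ext)
  fix j n
  define N where "N = nat (i + b - j + 2)"
  define t where "t r = fdiff r (B (j - (i+1) + int r)) (n + (i+1) - int r)" for r
  have t0: "t r = 0" if "r > N" for r
  proof -
    have "B (j - (i+1) + int r) = (\<lambda>_. 0)" using B that by (auto simp: pdo_deg_leD N_def)
    then show ?thesis by (simp add: t_def)
  qed
  have e1: "pdo_mult (pdo_monom i) B (j - 1) (n + 1) = (\<Sum>r\<le>N. of_int (ibinom i r) * t r)"
    by (subst pdo_monom_mult_eq[OF B]) (auto simp: N_def t_def algebra_simps)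
  have e2: "pdo_mult (pdo_monom i) B j m = (\<Sum>r\<le>N. of_int (ibinom i r) * fdiff r (B (j - i + int r)) (m + i - int r))" for m
    by (rule pdo_monom_mult_eq[OF B]) (simp add: N_def)
  have "pdo_mult (pdo_monom i) B j (n + 1) - pdo_mult (pdo_monom i) B j n
      = (\<Sum>r\<le>N. of_int (ibinom i r) * t (Suc r))"
    unfolding e2 sum_subtractf[symmetric] 
    by (rule sum.cong) (auto simp: t_def fdiff_Suc algebra_simps)
  also have "\<dots> = (\<Sum>r\<le>Suc N. (if r = 0 then 0 else of_int (ibinom i (r - 1))) * t r)"
    by (subst sum.atMost_Suc_shift) simp
  finally have e3: "pdo_mult (pdo_monom i) B j (n + 1) - pdo_mult (pdo_monom i) B j n = \<dots>" .
  have e1': "pdo_mult (pdo_monom i) B (j - 1) (n + 1) = (\<Sum>r\<le>Suc N. of_int (ibinom i r) * t r)"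
    unfolding e1 by (simp add: t0)
  have "pdo_mult (pdo_monom 1) (pdo_mult (pdo_monom i) B) j n
     = pdo_mult (pdo_monom i) B (j - 1) (n + 1) + (pdo_mult (pdo_monom i) B j (n + 1) - pdo_mult (pdo_monom i) B j n)"
    by (simp add: pdo_Delta_mult_eq[OF pdo_deg_le_monom_mult[OF B]])
  also have "\<dots> = (\<Sum>r\<le>Suc N. of_int (ibinom (i+1) r) * t r)"
    unfolding e1' e3 sum.distrib[symmetric]
  proof (rule sum.cong[OF refl])
    fix r show "of_int (ibinom i r) * t r + (if r = 0 then 0 else of_int (ibinom i (r - 1))) * t r = of_int (ibinom (i + 1) r) * t r"
      by (cases r) (simp_all add: ibinom_pascal ibinom_pascal' algebra_simps)
  qed
  also have "\<dots> = pdo_mult (pdo_monom (i+1)) B j n"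
    unfolding t_def by (rule pdo_monom_mult_eq[OF B, symmetric]) (simp add: N_def)
  finally show "pdo_mult (pdo_monom 1) (pdo_mult (pdo_monom i) B) j n = pdo_mult (pdo_monom (i+1)) B j n" .
qed

lemma pdo_mult_const_coeffs:
  assumes A: "pdo_deg_le A a" and B: "pdo_deg_le B b" and c: "\<And>k n. B k n = c k"
  shows "pdo_mult A B j n = (\<Sum>i\<in>{j - b..a}. A i n * c (j - i))"
proof -
  have Bc: "B = (\<lambda>k n. c k)" by (intro ext) (simp add: c)
  have "pdo_mult A B j n = pdo_mult_sum A B a b j n" by (rule pdo_mult_eq_sum[OF A B])
  also have "\<dots> = (\<Sum>r\<in>{0..nat (a + b - j)}. if r = 0 then (\<Sum>i\<in>{j - b..a}. A i n * c (j - i)) else 0)"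
    unfolding pdo_mult_sum_def
  proof (rule sum.cong[OF refl])
    fix r assume "r \<in> {0..nat (a + b - j)}"
    have "pdo_mult_term A B j n r i = (if r = 0 then A i n * c (j - i) else 0)" for i
      unfolding pdo_mult_term_def Bc fdiff_const by simp
    then show "(\<Sum>i\<in>{j + int r - b..a}. pdo_mult_term A B j n r i) = (if r = 0 then (\<Sum>i\<in>{j - b..a}. A i n * c (j - i)) else 0)"
      by simp
  qed
  also have "\<dots> = (\<Sum>i\<in>{j - b..a}. A i n * c (j - i))"
  proof (cases "a + b - j \<ge> 0")
    case True
    then have "0 \<in> {0..nat (a + b - j)}" by auto
    then show ?thesis by (simp add: sum.delta)
  next
    case False
    then have "{j - b..a} = {}" by auto
    then show ?thesis by simp
  qed
  finally show ?thesis .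
qed

lemma pdo_mult_monom_eq:
  assumes A: "pdo_deg_le A a"
  shows "pdo_mult A (pdo_monom m) j n = A (j - m) n"
proof -
  have "pdo_mult A (pdo_monom m) j n = (\<Sum>i\<in>{j - m..a}. A i n * (if j - i = m then 1 else 0))"
    by (rule pdo_mult_const_coeffs[OF A pdo_deg_le_monom]) (simp add: pdo_monom_def)
  also have "\<dots> = (\<Sum>i\<in>{j - m..a}. if i = j - m then A i n else 0)"
    by (rule sum.cong) auto
  also have "\<dots> = (if j - m \<le> a then A (j - m) n else 0)"
    by (simp add: sum.delta)
  also have "\<dots> = A (j - m) n" using A by (auto simp: pdo_deg_leD)
  finally show ?thesis .
qed

lemma pdo_mult_one: "pdo_deg_le A a \<Longrightarrow> pdo_mult A (pdo_monom 0) = A"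
  by (intro ext) (simp add: pdo_mult_monom_eq)

lemma pdo_monom_mult_monom: "pdo_mult (pdo_monom i) (pdo_monom m) = (pdo_monom (i + m) :: 'a::comm_ring_1 pdo)"
  by (intro ext) (simp add: pdo_mult_monom_eq[OF pdo_deg_le_monom] pdo_monom_def)

lemma pdo_deg_le_pow: "pdo_deg_le A a \<Longrightarrow> 0 \<le> a \<Longrightarrow> pdo_deg_le (pdo_pow A j) (int j * a)"
proof (induction j)
  case 0 then show ?case by (simp add: pdo_one_eq_monom pdo_deg_le_monom)
next
  case (Suc j)
  then have "pdo_deg_le (pdo_mult (pdo_pow A j) A) (int j * a + a)" by (intro pdo_deg_le_mult) auto
  then show ?case by (simp add: algebra_simps)
qed

lemma pdo_deg_le_pos: "pdo_deg_le A a \<Longrightarrow> pdo_deg_le (pdo_pos A) a"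
  by (simp add: pdo_deg_le_def pdo_pos_def)

lemma pdo_deg_le_nonpos: "pdo_deg_le (pdo_nonpos A) 0"
  by (simp add: pdo_deg_le_def pdo_nonpos_def)

lemma pdo_pos_add_nonpos: "(\<lambda>k n. pdo_pos A k n + pdo_nonpos A k n) = (A :: 'a::comm_ring_1 pdo)"
  by (auto simp: pdo_pos_def pdo_nonpos_def fun_eq_iff)

lemma pdo_deg_le_map: "pdo_deg_le A d \<Longrightarrow> pdo_deg_le (pdo_map fls_const A) d"
  by (simp add: pdo_deg_le_def pdo_map_def)

lemma pdo_apply_eq:
  assumes A: "pdo_deg_le A d"
  shows "pdo_apply A f n = (\<Sum>k\<in>{0..nat d}. A (int k) n * fdiff k f n)"
proof -
  have D: "pdo_deg_le A (pdo_deg A)" using pdo_deg_le_pdo_deg[OF A] .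
  have z: "A (int k) n * fdiff k f n = 0" if "pdo_deg_le A e" "int k > e" for e k
    using that by (simp add: pdo_deg_leD)
  show ?thesis unfolding pdo_apply_def
    by (rule sum_eq_if_vanishing_outside) (use z[OF D] z[OF A] in auto)
qed

lemma adj_conj_apply_eq:
  assumes A: "pdo_deg_le A d"
  shows "adj_conj_apply A f n = (\<Sum>k\<in>{1..nat d}. (-1) ^ k * fdiff (k - 1) (\<lambda>m. A (int k) m * (f (m + 1) - f m)) (n - int k))"
proof -
  have D: "pdo_deg_le A (pdo_deg A)" using pdo_deg_le_pdo_deg[OF A] .
  have z: "(-1) ^ k * fdiff (k - 1) (\<lambda>m. A (int k) m * (f (m + 1) - f m)) (n - int k) = 0" if "pdo_deg_le A e" "int k > e" for e k
  proof -
    have "(\<lambda>m. A (int k) m * (f (m + 1) - f m)) = (\<lambda>_. 0)" using that by (auto simp: pdo_deg_leD)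
    then show ?thesis by simp
  qed
  show ?thesis unfolding adj_conj_apply_def
    by (rule sum_eq_if_vanishing_outside) (use z[OF D] z[OF A] in auto)
qed

lemma adj_conj_apply_indicator_term:
  assumes k: "k \<ge> 1"
  shows "(-1) ^ k * fdiff (k - 1) (\<lambda>m. c m * ((if m + 1 \<le> a then 1 else 0) - (if m \<le> a then 1 else 0))) (b - int k)
       = c a * fdiff k (\<lambda>m. if b \<le> m then 1 else (0::real)) a"
proof -
  have L: "(\<lambda>m. c m * ((if m + 1 \<le> a then 1 else 0) - (if m \<le> a then 1 else (0::real)))) = (\<lambda>m. if m = a then - c a else 0)"
    by (auto simp: fun_eq_iff)
  have R0: "(\<lambda>m. (if b \<le> m + 1 then 1 else 0) - (if b \<le> m then 1 else (0::real))) = (\<lambda>m. if m = b - 1 then 1 else 0)"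
    by (auto simp: fun_eq_iff)
  obtain k' where k': "k = Suc k'" using k by (cases k) auto
  have R: "fdiff k (\<lambda>m. if b \<le> m then 1 else (0::real)) a = fdiff k' (\<lambda>m. if m = b - 1 then 1 else 0) a"
    unfolding k' fdiff_Suc fdiff_diff_fun[symmetric] R0 ..
  show ?thesis
  proof (cases "a \<le> b - 1 \<and> b - 1 \<le> a + int k'")
    case True
    define u where "u = nat (b - 1 - a)"
    have u: "u \<le> k'" "nat (a - (b - int k)) = k' - u" using True k' by (auto simp: u_def)
    have s: "(k' choose (k' - u)) = (k' choose u)" using u by (simp add: binomial_symmetric[symmetric])
    have sg: "(-1::real) ^ Suc k' * - ((-1) ^ (k' - (k' - u))) = (-1) ^ (k' - u)"
      using u by (auto simp: le_iff_add power_add)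
    have T2: "b - int k \<le> a \<and> a \<le> b - int k + int k'" using True k' by auto
    have u2: "nat (b - (1 + a)) = u" by (simp add: u_def)
    show ?thesis unfolding L R fdiff_delta using True T2 u s sg k'
      by (simp add: u_def[symmetric] u2 algebra_simps)
  next
    case False
    then have "\<not> (b - int k \<le> a \<and> a \<le> b - int k + int k')" using k' by auto
    have F2: "\<not> (a \<le> b - 1 \<and> b - 1 \<le> a + int k')" using False by simp
    show ?thesis unfolding L R fdiff_delta
      by (subst if_not_P[OF F2], subst if_not_P) (use \<open>\<not> (b - int k \<le> a \<and> a \<le> b - int k + int k')\<close> k' in auto)
  qed
qed

theorem adj_conj_apply_indicator:
  assumes A: "pdo_deg_le A d" and A0: "\<And>k n. k \<le> 0 \<Longrightarrow> A k n = 0"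
  shows "adj_conj_apply A (\<lambda>m. if m \<le> a then 1 else 0) b = pdo_apply A (\<lambda>m. if b \<le> m then 1 else (0::real)) a"
proof -
  have "adj_conj_apply A (\<lambda>m. if m \<le> a then 1 else 0) b
      = (\<Sum>k\<in>{1..nat d}. A (int k) a * fdiff k (\<lambda>m. if b \<le> m then 1 else (0::real)) a)"
    unfolding adj_conj_apply_eq[OF A]
    by (rule sum.cong[OF refl]) (rule adj_conj_apply_indicator_term, simp)
  also have "\<dots> = pdo_apply A (\<lambda>m. if b \<le> m then 1 else (0::real)) a"
    unfolding pdo_apply_eq[OF A]
    by (rule sum_eq_if_vanishing_outside) (use A0 in auto)
  finally show ?thesis .
qed

section \<open>Expansion in powers of the shift and associativity\<close>

text \<open>\<open>\<Delta>\<^sup>k = (\<Gamma> - 1)\<^sup>k = (\<Sum>p. shift_coeff k p \<Gamma>\<^sup>p)\<close>; for \<open>k < 0\<close> this is the expansion in powers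
  of \<open>\<Gamma>\<^sup>-\<^sup>1\<close>, e.g. \<open>\<Delta>\<^sup>-\<^sup>1 = (\<Sum>p \<le> -1. \<Gamma>\<^sup>p)\<close>.\<close>
definition shift_coeff :: "int \<Rightarrow> int \<Rightarrow> int" where
  "shift_coeff k p = (if p \<le> k then (-1) ^ nat (k - p) * ibinom k (nat (k - p)) else 0)"

lemma shift_coeff_diag[simp]: "shift_coeff k k = 1"
  by (simp add: shift_coeff_def)

lemma shift_coeff_above: "p > k \<Longrightarrow> shift_coeff k p = 0"
  by (simp add: shift_coeff_def)

lemma shift_coeff_pascal: "shift_coeff (k+1) p = shift_coeff k (p - 1) - shift_coeff k p"
proof (cases "p \<le> k")
  case True
  define r where "r = nat (k - p)"
  have r1: "nat (k + 1 - p) = Suc r" "nat (k - (p - 1)) = Suc r" using True by (auto simp: r_def)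
  have "shift_coeff (k+1) p = (-1) ^ Suc r * ibinom (k+1) (Suc r)" using True by (simp add: shift_coeff_def r1)
  moreover have "shift_coeff k (p - 1) = (-1) ^ Suc r * ibinom k (Suc r)" using True by (simp add: shift_coeff_def r1)
  moreover have "shift_coeff k p = (-1) ^ r * ibinom k r" using True by (simp add: shift_coeff_def r_def)
  ultimately show ?thesis by (simp add: ibinom_pascal ibinom_pascal' algebra_simps)
next
  case False
  then show ?thesis by (cases "p = k + 1") (auto simp: shift_coeff_def)
qed

lemma shift_coeff_pascal': "shift_coeff (1+k) p = shift_coeff k (p - 1) - shift_coeff k p"
  using shift_coeff_pascal[of k p] by (simp only: add.commute[of k 1])

lemma shift_coeff_0: "shift_coeff 0 p = (if p = 0 then 1 else 0)"
  by (auto simp: shift_coeff_def ibinom_def)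

lemma shift_coeff_1: "shift_coeff 1 p = (if p = 1 then 1 else if p = 0 then -1 else 0)"
proof -
  have "p < 0 \<Longrightarrow> (Suc 0 choose nat (1 - p)) = 0" by (simp add: binomial_eq_0)
  then show ?thesis by (auto simp: shift_coeff_def ibinom_def)
qed

lemma shift_coeff_minus_1: "shift_coeff (-1) p = (if p \<le> -1 then 1 else 0)"
proof -
  have "p \<le> -1 \<Longrightarrow> (-1::int) ^ nat (- 1 - p) * (- 1) ^ nat (- 1 - p) = 1"
    by (simp flip: power_mult_distrib)
  moreover have "p \<le> -1 \<Longrightarrow> Suc (nat (- 1 - p)) - 1 = nat (-1 - p)" by simp
  ultimately show ?thesis by (auto simp: shift_coeff_def ibinom_def)
qed

text \<open>The coefficient of \<open>\<Gamma>\<^sup>p\<close> at site \<open>n\<close> when \<open>A\<close> is rewritten in powers of the shift. In these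
  coordinates the product becomes the convolution \<open>shift_conv\<close>, which is visibly associative.\<close>
definition shift_exp :: "'a::comm_ring_1 pdo \<Rightarrow> int \<Rightarrow> int \<Rightarrow> 'a" where
  "shift_exp A n p = (\<Sum>k\<in>{p..pdo_deg A}. A k n * of_int (shift_coeff k p))"

lemma shift_exp_bound_mono:
  assumes "pdo_deg_le A d" "d \<le> d'"
  shows "(\<Sum>k\<in>{p..d'}. A k n * of_int (shift_coeff k p)) = (\<Sum>k\<in>{p..d}. A k n * of_int (shift_coeff k p))"
  by (rule sum.mono_neutral_right) (use assms in \<open>auto simp: pdo_deg_leD\<close>)

lemma shift_exp_eq: assumes "pdo_deg_le A d" shows "shift_exp A n p = (\<Sum>k\<in>{p..d}. A k n * of_int (shift_coeff k p))"
proof -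
  have D: "pdo_deg_le A (pdo_deg A)" using pdo_deg_le_pdo_deg[OF assms] .
  have "shift_exp A n p = (\<Sum>k\<in>{p..max d (pdo_deg A)}. A k n * of_int (shift_coeff k p))"
    unfolding shift_exp_def by (rule shift_exp_bound_mono[OF D, symmetric]) simp
  also have "\<dots> = (\<Sum>k\<in>{p..d}. A k n * of_int (shift_coeff k p))"
    by (rule shift_exp_bound_mono[OF assms]) simp
  finally show ?thesis .
qed

definition shift_deg_le :: "(int \<Rightarrow> int \<Rightarrow> 'a::zero) \<Rightarrow> int \<Rightarrow> bool" where
  "shift_deg_le X d \<longleftrightarrow> (\<forall>p>d. \<forall>n. X n p = 0)"

lemma shift_deg_leD: "shift_deg_le X d \<Longrightarrow> p > d \<Longrightarrow> X n p = 0"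
  by (simp add: shift_deg_le_def)

lemma shift_deg_le_shift_exp: "pdo_deg_le A d \<Longrightarrow> shift_deg_le (shift_exp A) d"
  by (simp add: shift_deg_le_def shift_exp_eq)

definition shift_conv :: "int \<Rightarrow> int \<Rightarrow> (int \<Rightarrow> int \<Rightarrow> 'a::comm_ring_1) \<Rightarrow> (int \<Rightarrow> int \<Rightarrow> 'a) \<Rightarrow> int \<Rightarrow> int \<Rightarrow> 'a" where
  "shift_conv a b X Y n p = (\<Sum>q\<in>{p - b..a}. X n q * Y (n + q) (p - q))"

lemma shift_conv_bounds_mono:
  assumes "shift_deg_le X a" "shift_deg_le Y b" "a \<le> a'" "b \<le> b'"
  shows "shift_conv a' b' X Y n p = shift_conv a b X Y n p"
  unfolding shift_conv_def
proof (rule sum_eq_if_vanishing_outside)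
  fix q assume q: "q \<in> {p - b'..a'} - {p - b..a}"
  show "X n q * Y (n + q) (p - q) = 0"
  proof (cases "q > a")
    case True then show ?thesis using assms(1) by (simp add: shift_deg_leD)
  next
    case False then have "p - q > b" using q by auto
    then show ?thesis using assms(2) by (simp add: shift_deg_leD)
  qed
next
  fix q assume q: "q \<in> {p - b..a} - {p - b'..a'}"
  then show "X n q * Y (n + q) (p - q) = 0" using assms(3,4) by auto
qed auto

lemma shift_deg_le_shift_conv: "shift_deg_le (shift_conv a b X Y) (a + b)"
  by (auto simp: shift_deg_le_def shift_conv_def)

lemma shift_conv_assoc_left:
  assumes Y: "shift_deg_le Y b" and Z: "shift_deg_le Z c"
  shows "shift_conv (a + b) c (shift_conv a b X Y) Z n p
    = (\<Sum>q1\<in>{p - b - c..a}. \<Sum>q2\<in>{p - a - c..b}. X n q1 * Y (n + q1) q2 * Z (n + q1 + q2) (p - q1 - q2))"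
proof -
  define F where "F q1 q2 = X n q1 * Y (n + q1) q2 * Z (n + q1 + q2) (p - q1 - q2)" for q1 q2
  have "shift_conv (a + b) c (shift_conv a b X Y) Z n p
      = (\<Sum>q\<in>{p - c..a + b}. \<Sum>q1\<in>{q - b..a}. X n q1 * Y (n + q1) (q - q1) * Z (n + q) (p - q))"
    unfolding shift_conv_def sum_distrib_right by (simp add: mult.assoc)
  also have "\<dots> = (\<Sum>q\<in>{p - c..a + b}. \<Sum>q1\<in>{p - b - c..a}. X n q1 * Y (n + q1) (q - q1) * Z (n + q) (p - q))"
  proof (rule sum.cong[OF refl], rule sum_eq_if_vanishing_outside)
    fix q q1 assume "q \<in> {p - c..a + b}" "q1 \<in> {p - b - c..a} - {q - b..a}"
    then have "q - q1 > b" by auto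
    then show "X n q1 * Y (n + q1) (q - q1) * Z (n + q) (p - q) = 0" using Y by (simp add: shift_deg_leD)
  qed auto
  also have "\<dots> = (\<Sum>q1\<in>{p - b - c..a}. \<Sum>q\<in>{p - c..a + b}. X n q1 * Y (n + q1) (q - q1) * Z (n + q) (p - q))"
    by (rule sum.swap)
  also have "\<dots> = (\<Sum>q1\<in>{p - b - c..a}. \<Sum>q2\<in>{p - c - q1..a + b - q1}. F q1 q2)"
  proof (rule sum.cong[OF refl])
    fix q1
    show "(\<Sum>q\<in>{p - c..a + b}. X n q1 * Y (n + q1) (q - q1) * Z (n + q) (p - q)) = (\<Sum>q2\<in>{p - c - q1..a + b - q1}. F q1 q2)"
      by (subst sum_int_interval_shift[where d = q1]) (simp add: F_def algebra_simps)
  qed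
  also have "\<dots> = (\<Sum>q1\<in>{p - b - c..a}. \<Sum>q2\<in>{p - a - c..b}. F q1 q2)"
  proof (rule sum.cong[OF refl], rule sum_eq_if_vanishing_outside)
    fix q1 q2 assume "q1 \<in> {p - b - c..a}" "q2 \<in> {p - c - q1..a + b - q1} - {p - a - c..b}"
    then have "q2 > b" by auto
    then show "F q1 q2 = 0" using Y by (simp add: F_def shift_deg_leD)
  next
    fix q1 q2 assume "q1 \<in> {p - b - c..a}" "q2 \<in> {p - a - c..b} - {p - c - q1..a + b - q1}"
    then have "p - q1 - q2 > c" by auto
    then show "F q1 q2 = 0" using Z by (simp add: F_def shift_deg_leD)
  qed auto
  finally show ?thesis unfolding F_def .
qed

lemma shift_conv_assoc_right:
  assumes Z: "shift_deg_le Z c"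
  shows "shift_conv a (b + c) X (shift_conv b c Y Z) n p
    = (\<Sum>q1\<in>{p - b - c..a}. \<Sum>q2\<in>{p - a - c..b}. X n q1 * Y (n + q1) q2 * Z (n + q1 + q2) (p - q1 - q2))"
proof -
  define F where "F q1 q2 = X n q1 * Y (n + q1) q2 * Z (n + q1 + q2) (p - q1 - q2)" for q1 q2
  have "shift_conv a (b + c) X (shift_conv b c Y Z) n p = (\<Sum>q1\<in>{p - (b + c)..a}. \<Sum>q2\<in>{p - q1 - c..b}. F q1 q2)"
    by (simp add: shift_conv_def sum_distrib_left F_def algebra_simps)
  also have "\<dots> = (\<Sum>q1\<in>{p - b - c..a}. \<Sum>q2\<in>{p - a - c..b}. F q1 q2)"
  proof (rule sum.cong, simp, rule sum_eq_if_vanishing_outside)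
    fix q1 q2 assume "q1 \<in> {p - b - c..a}" "q2 \<in> {p - a - c..b} - {p - q1 - c..b}"
    then have "p - q1 - q2 > c" by auto
    then show "F q1 q2 = 0" using Z by (simp add: F_def shift_deg_leD)
  qed auto
  finally show ?thesis unfolding F_def .
qed

lemma shift_conv_assoc:
  assumes "shift_deg_le Y b" and "shift_deg_le Z c"
  shows "shift_conv (a + b) c (shift_conv a b X Y) Z n p = shift_conv a (b + c) X (shift_conv b c Y Z) n p"
  using shift_conv_assoc_left[OF assms] shift_conv_assoc_right[OF assms(2)] by simp

lemma shift_exp_monom: "shift_exp (pdo_monom i :: 'a::comm_ring_1 pdo) n p = of_int (shift_coeff i p)"
proof -
  have "shift_exp (pdo_monom i :: 'a pdo) n p = (\<Sum>k\<in>{p..i}. (if k = i then 1 else 0) * of_int (shift_coeff k p))"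
    by (simp add: shift_exp_eq[OF pdo_deg_le_monom] pdo_monom_def)
  also have "\<dots> = (\<Sum>k\<in>{p..i}. if k = i then of_int (shift_coeff k p) else 0)"
    by (rule sum.cong) auto
  also have "\<dots> = (if p \<le> i then of_int (shift_coeff i p) else 0)"
    by (simp add: sum.delta)
  also have "\<dots> = of_int (shift_coeff i p)" by (simp add: shift_coeff_above)
  finally show ?thesis .
qed

lemma shift_conv_Delta:
  assumes Y: "shift_deg_le Y d"
  shows "shift_conv 1 d (shift_exp (pdo_monom 1 :: 'a::comm_ring_1 pdo)) Y n p = Y (n + 1) (p - 1) - Y n p"
proof -
  have "shift_conv 1 d (shift_exp (pdo_monom 1 :: 'a pdo)) Y n p = shift_conv 1 (max d p) (shift_exp (pdo_monom 1 :: 'a pdo)) Y n p"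
    by (rule shift_conv_bounds_mono[OF shift_deg_le_shift_exp[OF pdo_deg_le_monom] Y, symmetric]) auto
  also have "\<dots> = (\<Sum>q\<in>{p - max d p..1}. (if q = 1 then Y (n + 1) (p - 1) else 0) - (if q = 0 then Y n p else 0))"
    unfolding shift_conv_def by (rule sum.cong) (auto simp: shift_exp_monom shift_coeff_1)
  also have "\<dots> = Y (n + 1) (p - 1) - Y n p"
    by (simp add: sum_subtractf sum.delta)
  finally show ?thesis .
qed

lemma shift_exp_Delta_mult:
  assumes X: "pdo_deg_le X d"
  shows "shift_exp (pdo_mult (pdo_monom 1) X) n p = shift_exp X (n + 1) (p - 1) - shift_exp X n p"
proof -
  have X1: "pdo_deg_le (pdo_mult (pdo_monom 1) X) (1 + d)" by (rule pdo_deg_le_monom_mult[OF X])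
  have "shift_exp (pdo_mult (pdo_monom 1) X) n p = (\<Sum>k\<in>{p..1 + d}. (X (k - 1) (n + 1) + X k (n + 1) - X k n) * of_int (shift_coeff k p))"
    by (simp add: shift_exp_eq[OF X1] pdo_Delta_mult_eq[OF X])
  also have "\<dots> = (\<Sum>k\<in>{p..1 + d}. X (k - 1) (n + 1) * of_int (shift_coeff k p)) + (\<Sum>k\<in>{p..1 + d}. X k (n + 1) * of_int (shift_coeff k p))
      - (\<Sum>k\<in>{p..1 + d}. X k n * of_int (shift_coeff k p))"
    by (simp add: algebra_simps sum.distrib sum_subtractf)
  also have "(\<Sum>k\<in>{p..1 + d}. X k n * of_int (shift_coeff k p)) = shift_exp X n p"
    by (rule shift_exp_eq[OF pdo_deg_le_mono[OF X], symmetric]) simp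
  also have "(\<Sum>k\<in>{p..1 + d}. X (k - 1) (n + 1) * of_int (shift_coeff k p)) = (\<Sum>k\<in>{p - 1..d}. X k (n + 1) * of_int (shift_coeff (k + 1) p))"
    by (subst sum_int_interval_shift[where d = 1]) simp
  also have "(\<Sum>k\<in>{p..1 + d}. X k (n + 1) * of_int (shift_coeff k p)) = (\<Sum>k\<in>{p - 1..d}. X k (n + 1) * of_int (shift_coeff k p))"
  proof (rule sum_eq_if_vanishing_outside)
    fix k assume "k \<in> {p..1 + d} - {p - 1..d}"
    then have "k > d" by auto
    then show "X k (n + 1) * of_int (shift_coeff k p) = 0" using X by (simp add: pdo_deg_leD)
  next
    fix k assume "k \<in> {p - 1..d} - {p..1 + d}"
    then have "k < p" by auto
    then show "X k (n + 1) * of_int (shift_coeff k p) = 0" by (simp add: shift_coeff_above)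
  qed auto
  also have "(\<Sum>k\<in>{p - 1..d}. X k (n + 1) * of_int (shift_coeff (k + 1) p)) + (\<Sum>k\<in>{p - 1..d}. X k (n + 1) * of_int (shift_coeff k p))
      = (\<Sum>k\<in>{p - 1..d}. X k (n + 1) * of_int (shift_coeff k (p - 1)))"
    by (simp add: sum.distrib[symmetric] shift_coeff_pascal algebra_simps)
  also have "\<dots> = shift_exp X (n + 1) (p - 1)"
    by (rule shift_exp_eq[OF X, symmetric])
  finally show ?thesis .
qed

lemma shift_exp_diff:
  assumes "pdo_deg_le A a" "pdo_deg_le B a"
  shows "shift_exp (\<lambda>k n. A k n - B k n) n p = shift_exp A n p - shift_exp B n p"
proof -
  have "pdo_deg_le (\<lambda>k n. A k n - B k n) a" using assms by (simp add: pdo_deg_le_def)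
  then show ?thesis by (simp add: shift_exp_eq[OF assms(1)] shift_exp_eq[OF assms(2)] shift_exp_eq algebra_simps sum_subtractf)
qed

lemma Delta_recursion_vanishes:
  fixes D :: "int \<Rightarrow> int \<Rightarrow> int \<Rightarrow> 'a::ab_group_add"
  assumes bounded: "\<And>i. shift_deg_le (D i) (i + b)"
    and D0: "\<And>n p. D 0 n p = 0"
    and DSuc: "\<And>i n p. D (i + 1) n p = D i (n + 1) (p - 1) - D i n p"
  shows "D i n p = 0"
proof -
  have down: "D i n p = 0" if next_zero: "\<And>n p. D (i + 1) n p = 0" for i n p
  proof -
    have "D i n p = D i (n - int m) (p + int m)" for m
    proof (induction m)
      case (Suc m)
      have "D i (n - int m - 1) (p + int m + 1) = D i (n - int m) (p + int m)"
        using next_zero[of "n - int m - 1" "p + int m + 1"] DSuc[of i "n - int m - 1" "p + int m + 1"] by simp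
      then show ?case using Suc by (simp add: algebra_simps)
    qed simp
    also have "D i (n - int (nat (i + b - p + 1))) (p + int (nat (i + b - p + 1))) = 0"
      using bounded[of i] by (rule shift_deg_leD) auto
    finally show ?thesis .
  qed
  have both_signs: "D (int m) n p = 0 \<and> D (- int m) n p = 0" for m n p
  proof (induction m arbitrary: n p)
    case (Suc m)
    then show ?case using DSuc[of "int m"] down[of "- int (Suc m)"] by (simp add: add.commute)
  qed (simp add: D0)
  show ?thesis
  proof (cases i rule: int_cases)
    case (neg m)
    then show ?thesis using both_signs[of "Suc m"] by simp
  qed (use both_signs in auto)
qed

lemma shift_exp_monom_mult:
  assumes B: "pdo_deg_le B b"
  shows "shift_exp (pdo_mult (pdo_monom i) B) n p = shift_conv i b (shift_exp (pdo_monom i :: 'a::comm_ring_1 pdo)) (shift_exp B) n p"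
proof -
  define D where "D i n p = shift_exp (pdo_mult (pdo_monom i) B) n p
      - shift_conv i b (shift_exp (pdo_monom i :: 'a pdo)) (shift_exp B) n p" for i n p
  have "D i n p = 0"
  proof (rule Delta_recursion_vanishes)
    fix i
    show "shift_deg_le (D i) (i + b)"
      using shift_deg_le_shift_exp[OF pdo_deg_le_monom_mult[OF B]] shift_deg_le_shift_conv
      unfolding shift_deg_le_def D_def by simp
  next
    fix n p
    have "shift_conv 0 b (shift_exp (pdo_monom 0 :: 'a pdo)) (shift_exp B) n p
        = (\<Sum>q\<in>{p - b..0}. if q = 0 then shift_exp B n p else 0)"
      unfolding shift_conv_def shift_exp_monom by (rule sum.cong) (auto simp: shift_coeff_0)
    also have "\<dots> = shift_exp B n p"
      by (cases "p - b \<le> 0") (auto simp: shift_deg_leD[OF shift_deg_le_shift_exp[OF B]])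
    finally show "D 0 n p = 0" by (simp add: D_def pdo_one_mult[OF B])
  next
    fix i n p
    have monom_Suc: "shift_exp (pdo_monom (1 + i) :: 'a pdo) = shift_conv 1 i (shift_exp (pdo_monom 1 :: 'a pdo)) (shift_exp (pdo_monom i))"
      by (intro ext) (simp add: shift_conv_Delta[OF shift_deg_le_shift_exp[OF pdo_deg_le_monom]] shift_exp_monom shift_coeff_pascal')
    have "shift_conv (i + 1) b (shift_exp (pdo_monom (i + 1) :: 'a pdo)) (shift_exp B) n p
        = shift_conv 1 (i + b) (shift_exp (pdo_monom 1 :: 'a pdo)) (shift_conv i b (shift_exp (pdo_monom i)) (shift_exp B)) n p"
      unfolding add.commute[of i 1] monom_Suc
      by (rule shift_conv_assoc[OF shift_deg_le_shift_exp[OF pdo_deg_le_monom] shift_deg_le_shift_exp[OF B]])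
    also have "\<dots> = shift_conv i b (shift_exp (pdo_monom i :: 'a pdo)) (shift_exp B) (n + 1) (p - 1)
        - shift_conv i b (shift_exp (pdo_monom i :: 'a pdo)) (shift_exp B) n p"
      by (rule shift_conv_Delta[OF shift_deg_le_shift_conv])
    finally show "D (i + 1) n p = D i (n + 1) (p - 1) - D i n p"
      by (simp add: D_def pdo_Delta_mult_monom_mult[OF B, symmetric] shift_exp_Delta_mult[OF pdo_deg_le_monom_mult[OF B]])
  qed
  then show ?thesis by (simp add: D_def)
qed

lemma pdo_mult_eq_sum_monom_mult:
  assumes A: "pdo_deg_le A a" and B: "pdo_deg_le B b"
  shows "pdo_mult A B j n = (\<Sum>i\<in>{j - b..a}. A i n * pdo_mult (pdo_monom i) B j n)"
proof -
  define N where "N = nat (a + b - j)"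
  have "(\<Sum>i\<in>{j - b..a}. A i n * pdo_mult (pdo_monom i) B j n) = (\<Sum>i\<in>{j - b..a}. \<Sum>r\<in>{0..N}. pdo_mult_term A B j n r i)"
  proof (rule sum.cong[OF refl])
    fix i assume "i \<in> {j - b..a}"
    then have "int N \<ge> i + b - j" by (auto simp: N_def)
    then show "A i n * pdo_mult (pdo_monom i) B j n = (\<Sum>r\<in>{0..N}. pdo_mult_term A B j n r i)"
      by (simp add: pdo_monom_mult_eq[OF B] sum_distrib_left pdo_mult_term_def atLeast0AtMost mult.assoc)
  qed
  also have "\<dots> = (\<Sum>r\<in>{0..N}. \<Sum>i\<in>{j - b..a}. pdo_mult_term A B j n r i)"
    by (rule sum.swap)
  also have "\<dots> = pdo_mult_sum A B a b j n"
    unfolding pdo_mult_sum_def N_def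
  proof (rule sum.cong[OF refl], rule sum_eq_if_vanishing_outside)
    fix r i assume "i \<in> {j - b..a} - {j + int r - b..a}"
    then show "pdo_mult_term A B j n r i = 0" by (intro pdo_mult_term_eq_0[OF A B]) auto
  next
    fix r i assume "r \<in> {0..nat (a + b - j)}" "i \<in> {j + int r - b..a} - {j - b..a}"
    then show "pdo_mult_term A B j n r i = 0" by auto
  qed auto
  finally show ?thesis by (simp add: pdo_mult_eq_sum[OF A B])
qed

lemma shift_exp_mult_eq_sum_monom_mult:
  assumes A: "pdo_deg_le A a" and B: "pdo_deg_le B b"
  shows "shift_exp (pdo_mult A B) n p = (\<Sum>i\<in>{p - b..a}. A i n * shift_exp (pdo_mult (pdo_monom i) B) n p)"
proof -
  have T: "pdo_deg_le (pdo_mult (pdo_monom i) B) (i + b)" for i by (rule pdo_deg_le_monom_mult[OF B])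
  have "shift_exp (pdo_mult A B) n p
      = (\<Sum>k\<in>{p..a + b}. (\<Sum>i\<in>{k - b..a}. A i n * pdo_mult (pdo_monom i) B k n) * of_int (shift_coeff k p))"
    by (simp add: shift_exp_eq[OF pdo_deg_le_mult[OF A B]] pdo_mult_eq_sum_monom_mult[OF A B])
  also have "\<dots> = (\<Sum>k\<in>{p..a + b}. \<Sum>i\<in>{p - b..a}. A i n * pdo_mult (pdo_monom i) B k n * of_int (shift_coeff k p))"
  proof (rule sum.cong[OF refl])
    fix k assume k: "k \<in> {p..a + b}"
    have "(\<Sum>i\<in>{k - b..a}. A i n * pdo_mult (pdo_monom i) B k n) = (\<Sum>i\<in>{p - b..a}. A i n * pdo_mult (pdo_monom i) B k n)"
    proof (rule sum_eq_if_vanishing_outside)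
      fix i assume "i \<in> {p - b..a} - {k - b..a}"
      then have "k > i + b" by auto
      then show "A i n * pdo_mult (pdo_monom i) B k n = 0" using T[of i] by (simp add: pdo_deg_leD)
    qed (use k in auto)
    then show "(\<Sum>i\<in>{k - b..a}. A i n * pdo_mult (pdo_monom i) B k n) * of_int (shift_coeff k p)
        = (\<Sum>i\<in>{p - b..a}. A i n * pdo_mult (pdo_monom i) B k n * of_int (shift_coeff k p))"
      by (simp add: sum_distrib_right)
  qed
  also have "\<dots> = (\<Sum>i\<in>{p - b..a}. \<Sum>k\<in>{p..a + b}. A i n * pdo_mult (pdo_monom i) B k n * of_int (shift_coeff k p))"
    by (rule sum.swap)
  also have "\<dots> = (\<Sum>i\<in>{p - b..a}. A i n * shift_exp (pdo_mult (pdo_monom i) B) n p)"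
  proof (rule sum.cong[OF refl])
    fix i assume "i \<in> {p - b..a}"
    then have "pdo_deg_le (pdo_mult (pdo_monom i) B) (a + b)" by (intro pdo_deg_le_mono[OF T]) auto
    then show "(\<Sum>k\<in>{p..a + b}. A i n * pdo_mult (pdo_monom i) B k n * of_int (shift_coeff k p))
        = A i n * shift_exp (pdo_mult (pdo_monom i) B) n p"
      by (simp add: shift_exp_eq sum_distrib_left mult.assoc)
  qed
  finally show ?thesis .
qed

theorem shift_exp_mult:
  assumes A: "pdo_deg_le A a" and B: "pdo_deg_le B b"
  shows "shift_exp (pdo_mult A B) n p = shift_conv a b (shift_exp A) (shift_exp B) n p"
proof -
  have "shift_exp (pdo_mult A B) n p = (\<Sum>i\<in>{p - b..a}. A i n * shift_exp (pdo_mult (pdo_monom i) B) n p)"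
    by (rule shift_exp_mult_eq_sum_monom_mult[OF A B])
  also have "\<dots> = (\<Sum>i\<in>{p - b..a}. \<Sum>q\<in>{p - b..a}. A i n * of_int (shift_coeff i q) * shift_exp B (n + q) (p - q))"
  proof (rule sum.cong[OF refl])
    fix i assume i: "i \<in> {p - b..a}"
    have "shift_exp (pdo_mult (pdo_monom i) B) n p = (\<Sum>q\<in>{p - b..i}. of_int (shift_coeff i q) * shift_exp B (n + q) (p - q))"
      by (simp add: shift_exp_monom_mult[OF B] shift_conv_def shift_exp_monom)
    also have "\<dots> = (\<Sum>q\<in>{p - b..a}. of_int (shift_coeff i q) * shift_exp B (n + q) (p - q))"
      by (rule sum_eq_if_vanishing_outside) (use i in \<open>auto simp: shift_coeff_above\<close>)
    finally show "A i n * shift_exp (pdo_mult (pdo_monom i) B) n p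
        = (\<Sum>q\<in>{p - b..a}. A i n * of_int (shift_coeff i q) * shift_exp B (n + q) (p - q))"
      by (simp add: sum_distrib_left mult.assoc)
  qed
  also have "\<dots> = (\<Sum>q\<in>{p - b..a}. \<Sum>i\<in>{p - b..a}. A i n * of_int (shift_coeff i q) * shift_exp B (n + q) (p - q))"
    by (rule sum.swap)
  also have "\<dots> = (\<Sum>q\<in>{p - b..a}. shift_exp A n q * shift_exp B (n + q) (p - q))"
  proof (rule sum.cong[OF refl])
    fix q assume q: "q \<in> {p - b..a}"
    have "shift_exp A n q = (\<Sum>i\<in>{p - b..a}. A i n * of_int (shift_coeff i q))"
      unfolding shift_exp_eq[OF A] by (rule sum_eq_if_vanishing_outside) (use q in \<open>auto simp: shift_coeff_above\<close>)
    then show "(\<Sum>i\<in>{p - b..a}. A i n * of_int (shift_coeff i q) * shift_exp B (n + q) (p - q))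
        = shift_exp A n q * shift_exp B (n + q) (p - q)"
      by (simp add: sum_distrib_right)
  qed
  finally show ?thesis by (simp add: shift_conv_def)
qed

lemma shift_exp_eq_0D:
  assumes A: "pdo_deg_le A d" and Z: "\<And>n p. shift_exp A n p = 0"
  shows "A k n = 0"
proof (induction "nat (d - k)" arbitrary: k rule: less_induct)
  case less
  show ?case
  proof (cases "k > d")
    case True then show ?thesis using A by (simp add: pdo_deg_leD)
  next
    case False
    then have "{k..d} = insert k {k + 1..d}" by auto
    moreover have "A k' n = 0" if "k' \<in> {k + 1..d}" for k' using less that by auto
    ultimately have "shift_exp A n k = A k n" by (simp add: shift_exp_eq[OF A])
    then show ?thesis using Z by simp
  qed
qed

lemma pdo_eqI_shift_exp:
  assumes A: "pdo_deg_le A a" and B: "pdo_deg_le B b" and E: "\<And>n p. shift_exp A n p = shift_exp B n p"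
  shows "A = B"
proof (intro ext)
  fix k n
  define c where "c = max a b"
  have A': "pdo_deg_le A c" and B': "pdo_deg_le B c" using A B by (auto intro: pdo_deg_le_mono simp: c_def)
  have D: "pdo_deg_le (\<lambda>k n. A k n - B k n) c" using A' B' by (simp add: pdo_deg_le_def)
  have "A k n - B k n = 0"
    using shift_exp_eq_0D[OF D, of k n] shift_exp_diff[OF A' B'] E by simp
  then show "A k n = B k n" by simp
qed

theorem pdo_mult_assoc:
  assumes A: "pdo_deg_le A a" and B: "pdo_deg_le B b" and C: "pdo_deg_le C c"
  shows "pdo_mult (pdo_mult A B) C = pdo_mult A (pdo_mult B C)"
proof (rule pdo_eqI_shift_exp[OF pdo_deg_le_mult[OF pdo_deg_le_mult[OF A B] C] pdo_deg_le_mult[OF A pdo_deg_le_mult[OF B C]]])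
  fix n p
  have "shift_exp (pdo_mult (pdo_mult A B) C) n p = shift_conv (a + b) c (shift_exp (pdo_mult A B)) (shift_exp C) n p"
    by (rule shift_exp_mult[OF pdo_deg_le_mult[OF A B] C])
  also have "shift_exp (pdo_mult A B) = shift_conv a b (shift_exp A) (shift_exp B)"
    by (intro ext) (rule shift_exp_mult[OF A B])
  also have "shift_conv (a + b) c (shift_conv a b (shift_exp A) (shift_exp B)) (shift_exp C) n p = shift_conv a (b + c) (shift_exp A) (shift_conv b c (shift_exp B) (shift_exp C)) n p"
    by (rule shift_conv_assoc[OF shift_deg_le_shift_exp[OF B] shift_deg_le_shift_exp[OF C]])
  also have "shift_conv b c (shift_exp B) (shift_exp C) = shift_exp (pdo_mult B C)"
    by (intro ext) (rule shift_exp_mult[OF B C, symmetric])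
  also have "shift_conv a (b + c) (shift_exp A) (shift_exp (pdo_mult B C)) n p = shift_exp (pdo_mult A (pdo_mult B C)) n p"
    by (rule shift_exp_mult[OF A pdo_deg_le_mult[OF B C], symmetric])
  finally show "shift_exp (pdo_mult (pdo_mult A B) C) n p = shift_exp (pdo_mult A (pdo_mult B C)) n p" .
qed

lemma pdo_mult_add_left:
  assumes A: "pdo_deg_le A a" and A': "pdo_deg_le A' a" and B: "pdo_deg_le B b"
  shows "pdo_mult (\<lambda>k n. A k n + A' k n) B j n = pdo_mult A B j n + pdo_mult A' B j n"
proof -
  have S: "pdo_deg_le (\<lambda>k n. A k n + A' k n) a" using A A' by (simp add: pdo_deg_le_def)
  show ?thesis
    by (simp add: pdo_mult_eq_sum[OF S B] pdo_mult_eq_sum[OF A B] pdo_mult_eq_sum[OF A' B] pdo_mult_sum_def pdo_mult_term_def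
        sum.distrib[symmetric] algebra_simps)
qed

lemma pdo_mult_eq_sum_nat:
  assumes A: "pdo_deg_le A a" and An: "\<And>k n. k < 0 \<Longrightarrow> A k n = 0" and B: "pdo_deg_le B b" and a: "0 \<le> a"
  shows "pdo_mult A B j n = (\<Sum>i\<in>{0..nat a}. A (int i) n * pdo_mult (pdo_monom (int i)) B j n)"
proof -
  have "pdo_mult A B j n = (\<Sum>i\<in>{j - b..a}. A i n * pdo_mult (pdo_monom i) B j n)"
    by (rule pdo_mult_eq_sum_monom_mult[OF A B])
  also have "\<dots> = (\<Sum>i\<in>{0..a}. A i n * pdo_mult (pdo_monom i) B j n)"
  proof (rule sum_eq_if_vanishing_outside)
    fix i assume "i \<in> {j - b..a} - {0..a}"
    then show "A i n * pdo_mult (pdo_monom i) B j n = 0" using An by auto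
  next
    fix i assume "i \<in> {0..a} - {j - b..a}"
    then have "j > i + b" by auto
    then show "A i n * pdo_mult (pdo_monom i) B j n = 0" using pdo_deg_le_monom_mult[OF B, of i] by (simp add: pdo_deg_leD)
  qed auto
  also have "\<dots> = (\<Sum>i\<in>{0..nat a}. A (int i) n * pdo_mult (pdo_monom (int i)) B j n)"
    by (rule sum.reindex_bij_witness[of _ int nat]) (use a in auto)
  finally show ?thesis .
qed

section \<open>Action on powers of 1 + \<lambda>\<close>

lemma onepl_nth: "fls_nth (onepl m) c = (if c + m \<ge> 0 then of_int (ibinom m (nat (c + m))) else 0)"
  by (simp add: onepl_def)

lemma onepl_0: "onepl 0 = 1"
proof (rule fls_eqI)
  fix c show "fls_nth (onepl 0) c = fls_nth 1 c"
    by (cases "c = 0") (auto simp: onepl_nth ibinom_def)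
qed

lemma fls_X_inv_times_nth: "fls_nth (fls_X_inv * (f :: 'a::comm_ring_1 fls)) c = fls_nth f (c + 1)"
  by (simp add: fls_X_inv_times_conv_shift)

lemma fls_times_X_inv_nth: "fls_nth ((f :: 'a::comm_ring_1 fls) * fls_X_inv) c = fls_nth f (c + 1)"
  by (simp add: fls_X_inv_times_conv_shift)

lemma onepl_Suc: "onepl (n + 1) = (1 + fls_X_inv) * onepl n"
proof (rule fls_eqI)
  fix c
  have R: "fls_nth ((1 + fls_X_inv) * onepl n) c = fls_nth (onepl n) c + fls_nth (onepl n) (c + 1)"
    by (simp add: distrib_right fls_X_inv_times_nth)
  show "fls_nth (onepl (n + 1)) c = fls_nth ((1 + fls_X_inv) * onepl n) c"
  proof (cases "c + n \<ge> 0")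
    case True
    define r where "r = nat (c + n)"
    have r: "nat (c + (n + 1)) = Suc r" "nat (c + 1 + n) = Suc r" using True by (auto simp: r_def)
    show ?thesis unfolding R onepl_nth using True
      by (simp add: r r_def[symmetric] ibinom_pascal)
  next
    case False
    show ?thesis
    proof (cases "c + n = -1")
      case True
      then have "c + (n + 1) = 0" "c + 1 + n = 0" by auto
      then show ?thesis unfolding R onepl_nth using True by (simp add: ibinom_def)
    next
      case False2: False
      then show ?thesis unfolding R onepl_nth using False by auto
    qed
  qed
qed

lemma one_plus_fls_X_inv_nonzero: "(1 + fls_X_inv :: real fls) \<noteq> 0"
proof
  assume "(1 + fls_X_inv :: real fls) = 0"
  then have "fls_nth (1 + fls_X_inv :: real fls) 0 = 0" by simp
  then show False by simp
qed

lemma onepl_add: "onepl (a + b) = onepl a * (onepl b :: real fls)"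
proof (induction b rule: int_induct[where k = 0])
  case base then show ?case by (simp add: onepl_0)
next
  case (step1 i)
  have "onepl (a + (i + 1)) = (1 + fls_X_inv) * onepl (a + i)"
    using onepl_Suc[of "a + i"] by (simp add: add.assoc)
  also have "\<dots> = onepl a * ((1 + fls_X_inv) * onepl i)" using step1 by (simp add: algebra_simps)
  also have "(1 + fls_X_inv) * onepl i = onepl (i + 1)" by (simp add: onepl_Suc)
  finally show ?case .
next
  case (step2 i)
  have "(1 + fls_X_inv) * onepl (a + (i - 1)) = onepl (a + i)"
    using onepl_Suc[of "a + (i - 1)"] by simp
  also have "\<dots> = onepl a * onepl i" by (rule step2)
  also have "onepl i = (1 + fls_X_inv) * onepl (i - 1)"
    using onepl_Suc[of "i - 1"] by simp
  finally have "(1 + fls_X_inv) * onepl (a + (i - 1)) = (1 + fls_X_inv) * (onepl a * onepl (i - 1))"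
    by (simp add: algebra_simps)
  then show ?case using one_plus_fls_X_inv_nonzero by simp
qed

lemma onepl_nth_shift_coeff: "fls_nth (onepl m) (1 + k) = (of_int (shift_coeff k (-1 - m)) :: real)"
proof (cases "1 + k + m \<ge> 0")
  case True
  define r where "r = nat (1 + k + m)"
  have r: "int r = 1 + k + m" using True by (simp add: r_def)
  have "ibinom m r = (-1) ^ r * ibinom k r" by (rule ibinom_negate_upper) (use r in simp)
  moreover have "nat (1 + k + m) = r" "nat (k - (-1 - m)) = r" using r by auto
  ultimately show ?thesis using True by (simp add: onepl_nth shift_coeff_def algebra_simps)
next
  case False
  then show ?thesis by (simp add: onepl_nth shift_coeff_def algebra_simps)
qed

lemma fls_mult_nth_bounded:
  fixes f g :: "'a::comm_ring_1 fls"
  assumes f: "\<And>x. x < a \<Longrightarrow> fls_nth f x = 0" and g: "\<And>x. x < b \<Longrightarrow> fls_nth g x = 0"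
  shows "fls_nth (f * g) c = (\<Sum>x\<in>{a..c - b}. fls_nth f x * fls_nth g (c - x))"
proof (cases "f = 0 \<or> g = 0")
  case True then show ?thesis by auto
next
  case False
  then have fa: "fls_subdegree f \<ge> a" and gb: "fls_subdegree g \<ge> b"
    using f g by (auto intro: fls_subdegree_geI)
  have "fls_nth (f * g) c = (\<Sum>x\<in>{fls_subdegree f..c - fls_subdegree g}. fls_nth f x * fls_nth g (c - x))"
    by (rule fls_times_nth(2))
  also have "\<dots> = (\<Sum>x\<in>{a..c - b}. fls_nth f x * fls_nth g (c - x))"
  proof (rule sum_eq_if_vanishing_outside)
    fix x assume "x \<in> {a..c - b} - {fls_subdegree f..c - fls_subdegree g}"
    then have "x < fls_subdegree f \<or> c - x < fls_subdegree g" by auto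
    then show "fls_nth f x * fls_nth g (c - x) = 0" by (auto simp: fls_eq0_below_subdegree)
  qed (use fa gb in auto)
  finally show ?thesis .
qed

definition pdo_symbol :: "'a::comm_ring_1 pdo \<Rightarrow> int \<Rightarrow> 'a fls" where
  "pdo_symbol A n = Abs_fls (\<lambda>c. A (- c) n)"

lemma pdo_symbol_nth: "pdo_deg_le A d \<Longrightarrow> fls_nth (pdo_symbol A n) c = A (- c) n"
  unfolding pdo_symbol_def
  by (rule nth_Abs_fls_lower_bound[where N = "- d"]) (auto simp: pdo_deg_leD)

lemma pdo_symbol_add:
  assumes "pdo_deg_le A a" "pdo_deg_le B a"
  shows "pdo_symbol (\<lambda>k n. A k n + B k n) n = pdo_symbol A n + pdo_symbol B n"
proof -
  have S: "pdo_deg_le (\<lambda>k n. A k n + B k n) a" using assms by (simp add: pdo_deg_le_def)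
  show ?thesis by (rule fls_eqI) (simp add: pdo_symbol_nth[OF S] pdo_symbol_nth[OF assms(1)] pdo_symbol_nth[OF assms(2)])
qed

text \<open>\<open>A\<close> applied to \<open>(1 + \<lambda>)\<^sup>n\<close>, as a Laurent series in \<open>\<lambda>\<^sup>-\<^sup>1\<close>; the symbol appears because
  \<open>\<Delta>\<^sup>k (1 + \<lambda>)\<^sup>n = \<lambda>\<^sup>k (1 + \<lambda>)\<^sup>n\<close>.\<close>
definition pdo_act :: "real pdo \<Rightarrow> int \<Rightarrow> real fls" where
  "pdo_act A n = pdo_symbol A n * onepl n"

lemma what_eq_pdo_act:
  assumes "\<And>k n. k > 0 \<Longrightarrow> Z t k n = 0"
  shows "what Z t n = pdo_act (Z t) n"
proof -
  have B: "pdo_deg_le (Z t) 0" using assms by (simp add: pdo_deg_le_def)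
  have "fps_to_fls (Abs_fps (\<lambda>j. Z t (- int j) n)) = pdo_symbol (Z t) n"
  proof (rule fls_eqI)
    fix c show "fls_nth (fps_to_fls (Abs_fps (\<lambda>j. Z t (- int j) n))) c = fls_nth (pdo_symbol (Z t) n) c"
      using assms[of "- c" n] by (simp add: pdo_symbol_nth[OF B])
  qed
  then show ?thesis by (simp add: what_def pdo_act_def)
qed

lemma pdo_act_add:
  assumes "pdo_deg_le A a" "pdo_deg_le B a"
  shows "pdo_act (\<lambda>k n. A k n + B k n) n = pdo_act A n + pdo_act B n"
  by (simp add: pdo_act_def pdo_symbol_add[OF assms] algebra_simps)

lemma pdo_act_mult_monom:
  assumes Z: "pdo_deg_le Z a"
  shows "pdo_act (pdo_mult Z (pdo_monom (int j))) n = fls_X_inv ^ j * pdo_act Z n"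
proof -
  have ZD: "pdo_deg_le (pdo_mult Z (pdo_monom (int j))) (a + int j)" by (rule pdo_deg_le_mult[OF Z pdo_deg_le_monom])
  have "pdo_symbol (pdo_mult Z (pdo_monom (int j))) n = fls_X_inv ^ j * pdo_symbol Z n"
  proof (rule fls_eqI)
    fix c show "fls_nth (pdo_symbol (pdo_mult Z (pdo_monom (int j))) n) c = fls_nth (fls_X_inv ^ j * pdo_symbol Z n) c"
      by (simp add: pdo_symbol_nth[OF ZD] pdo_symbol_nth[OF Z] pdo_mult_monom_eq[OF Z] fls_X_inv_power_times_conv_shift algebra_simps)
  qed
  then show ?thesis by (simp add: pdo_act_def mult.assoc)
qed

lemma pdo_act_Delta_mult:
  assumes B: "pdo_deg_le B b"
  shows "pdo_act (pdo_mult (pdo_monom 1) B) n = pdo_act B (n + 1) - pdo_act B n"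
proof -
  have "pdo_symbol (pdo_mult (pdo_monom 1) B) n = fls_X_inv * pdo_symbol B (n + 1) + pdo_symbol B (n + 1) - pdo_symbol B n"
  proof (rule fls_eqI)
    fix c
    show "fls_nth (pdo_symbol (pdo_mult (pdo_monom 1) B) n) c = fls_nth (fls_X_inv * pdo_symbol B (n + 1) + pdo_symbol B (n + 1) - pdo_symbol B n) c"
    proof -
      have e: "- (c + 1) = - c - 1" by simp
      show ?thesis
        by (simp add: pdo_symbol_nth[OF pdo_deg_le_monom_mult[OF B]] pdo_symbol_nth[OF B] fls_X_inv_times_nth pdo_Delta_mult_eq[OF B] e)
    qed
  qed
  then have "pdo_act (pdo_mult (pdo_monom 1) B) n = (fls_X_inv * pdo_symbol B (n + 1) + pdo_symbol B (n + 1) - pdo_symbol B n) * onepl n"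
    by (simp only: pdo_act_def)
  also have "\<dots> = pdo_symbol B (n + 1) * ((1 + fls_X_inv) * onepl n) - pdo_symbol B n * onepl n"
    by (simp add: algebra_simps)
  also have "\<dots> = pdo_act B (n + 1) - pdo_act B n"
    by (simp only: pdo_act_def onepl_Suc)
  finally show ?thesis .
qed

lemma pdo_act_monom_mult:
  assumes B: "pdo_deg_le B b"
  shows "pdo_act (pdo_mult (pdo_monom (int i)) B) n = fdiff i (pdo_act B) n"
proof (induction i arbitrary: n)
  case 0 then show ?case by (simp add: pdo_one_mult[OF B])
next
  case (Suc i)
  have "pdo_mult (pdo_monom (int (Suc i))) B = pdo_mult (pdo_monom 1) (pdo_mult (pdo_monom (int i)) B)"
    using pdo_Delta_mult_monom_mult[OF B, of "int i"] by (simp add: algebra_simps)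
  then have "pdo_act (pdo_mult (pdo_monom (int (Suc i))) B) n = pdo_act (pdo_mult (pdo_monom (int i)) B) (n + 1) - pdo_act (pdo_mult (pdo_monom (int i)) B) n"
    by (simp add: pdo_act_Delta_mult[OF pdo_deg_le_monom_mult[OF B]])
  then show ?case by (simp add: Suc fdiff_Suc)
qed

theorem pdo_act_mult:
  assumes A: "pdo_deg_le A a" and An: "\<And>k n. k < 0 \<Longrightarrow> A k n = 0" and B: "pdo_deg_le B b" and a: "0 \<le> a"
  shows "pdo_act (pdo_mult A B) n = pdo_apply (pdo_map fls_const A) (pdo_act B) n"
proof -
  have AB: "pdo_deg_le (pdo_mult A B) (a + b)" by (rule pdo_deg_le_mult[OF A B])
  have "pdo_symbol (pdo_mult A B) n = (\<Sum>i\<in>{0..nat a}. fls_const (A (int i) n) * pdo_symbol (pdo_mult (pdo_monom (int i)) B) n)"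
  proof (rule fls_eqI)
    fix c
    show "fls_nth (pdo_symbol (pdo_mult A B) n) c = fls_nth (\<Sum>i\<in>{0..nat a}. fls_const (A (int i) n) * pdo_symbol (pdo_mult (pdo_monom (int i)) B) n) c"
      by (simp add: pdo_symbol_nth[OF AB] fls_nth_sum pdo_symbol_nth[OF pdo_deg_le_monom_mult[OF B]] pdo_mult_eq_sum_nat[OF A An B a])
  qed
  then have "pdo_act (pdo_mult A B) n = (\<Sum>i\<in>{0..nat a}. fls_const (A (int i) n) * pdo_act (pdo_mult (pdo_monom (int i)) B) n)"
    by (simp add: pdo_act_def sum_distrib_right mult.assoc)
  also have "\<dots> = (\<Sum>i\<in>{0..nat a}. fls_const (A (int i) n) * fdiff i (pdo_act B) n)"
    by (simp add: pdo_act_monom_mult[OF B])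
  also have "\<dots> = pdo_apply (pdo_map fls_const A) (pdo_act B) n"
    by (simp add: pdo_apply_eq[OF pdo_deg_le_map[OF A]] pdo_map_def)
  finally show ?thesis .
qed

lemma pdo_act_nth:
  assumes Z: "pdo_deg_le Z 0"
  shows "fls_nth (pdo_act Z a) c = (\<Sum>x\<in>{0..c + a}. Z (- x) a * fls_nth (onepl a) (c - x))"
proof -
  have "fls_nth (pdo_act Z a) c = (\<Sum>x\<in>{0..c - - a}. fls_nth (pdo_symbol Z a) x * fls_nth (onepl a) (c - x))"
    unfolding pdo_act_def by (rule fls_mult_nth_bounded) (auto simp: pdo_symbol_nth[OF Z] pdo_deg_leD[OF Z] onepl_nth)
  then show ?thesis by (simp add: pdo_symbol_nth[OF Z])
qed

lemma pdo_act_nth_below: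
  assumes "pdo_deg_le Z 0" and "c < - a"
  shows "fls_nth (pdo_act Z a) c = 0"
  using assms by (simp add: pdo_act_nth)

lemma pdo_act_mult_onepl_res:
  assumes Z: "pdo_deg_le Z 0"
  shows "fls_nth (pdo_act Z a * onepl (- l)) 1 = shift_exp Z a (l - 1 - a)"
proof -
  have "pdo_act Z a * onepl (- l) = pdo_symbol Z a * onepl (a - l)"
    by (simp add: pdo_act_def mult.assoc onepl_add[symmetric])
  then have "fls_nth (pdo_act Z a * onepl (- l)) 1 = (\<Sum>y\<in>{0..1 - (l - a)}. fls_nth (pdo_symbol Z a) y * fls_nth (onepl (a - l)) (1 - y))"
    by (simp, intro fls_mult_nth_bounded) (auto simp: pdo_symbol_nth[OF Z] pdo_deg_leD[OF Z] onepl_nth)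
  also have "\<dots> = (\<Sum>y\<in>{0..1 - (l - a)}. Z (- y) a * of_int (shift_coeff (- y) (l - 1 - a)))"
  proof (rule sum.cong[OF refl])
    fix y
    have "fls_nth (onepl (a - l)) (1 + - y) = of_int (shift_coeff (- y) (-1 - (a - l)))" by (rule onepl_nth_shift_coeff)
    then show "fls_nth (pdo_symbol Z a) y * fls_nth (onepl (a - l)) (1 - y) = Z (- y) a * of_int (shift_coeff (- y) (l - 1 - a))"
      by (simp add: pdo_symbol_nth[OF Z] algebra_simps)
  qed
  also have "\<dots> = (\<Sum>k\<in>{l - 1 - a..0}. Z k a * of_int (shift_coeff k (l - 1 - a)))"
    by (rule sum.reindex_bij_witness[of _ "\<lambda>k. - k" "\<lambda>y. - y"]) auto
  also have "\<dots> = shift_exp Z a (l - 1 - a)" by (rule shift_exp_eq[OF Z, symmetric])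
  finally show ?thesis .
qed

text \<open>\<open>adj_act\<close> \<open>k g n\<close> and \<open>adj_act_shift\<close> \<open>k g n\<close> both compute \<open>(\<Delta>\<^sup>*)\<^sup>k (g (1 + \<lambda>)\<^sup>-\<^sup>m)\<close> at
  \<open>m = n\<close> for \<open>k \<le> 0\<close>: the first by the expansion formula behind \<open>adj_act_neg\<close>, the second
  through \<open>\<Delta>\<^sup>* = \<Gamma>\<^sup>-\<^sup>1 - 1\<close>.\<close>
definition adj_series :: "int \<Rightarrow> (int \<Rightarrow> real) \<Rightarrow> int \<Rightarrow> real fls" where
  "adj_series k g n = Abs_fls (\<lambda>m. if 0 \<le> m \<and> 0 \<le> k + m then of_int (ibinom k (nat (k + m))) * bdiff (nat (k + m)) g (n + m) else 0)"

lemma adj_series_nth: "fls_nth (adj_series k g n) m = (if 0 \<le> m \<and> 0 \<le> k + m then of_int (ibinom k (nat (k + m))) * bdiff (nat (k + m)) g (n + m) else 0)"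
  unfolding adj_series_def by (rule nth_Abs_fls_lower_bound[where N = 0]) auto

definition adj_act :: "int \<Rightarrow> (int \<Rightarrow> real) \<Rightarrow> int \<Rightarrow> real fls" where
  "adj_act k g n = adj_series k g n * onepl (- n)"

definition adj_act_shift :: "int \<Rightarrow> (int \<Rightarrow> real) \<Rightarrow> int \<Rightarrow> real fls" where
  "adj_act_shift k g n = Abs_fls (\<lambda>c. \<Sum>l\<in>{n - k..c}. g l * of_int (shift_coeff k (n - l)) * fls_nth (onepl (- l)) c)"

lemma adj_act_shift_nth: "fls_nth (adj_act_shift k g n) c = (\<Sum>l\<in>{n - k..c}. g l * of_int (shift_coeff k (n - l)) * fls_nth (onepl (- l)) c)"
  unfolding adj_act_shift_def by (rule nth_Abs_fls_lower_bound[where N = "n - k"]) auto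

lemma adj_series_Suc:
  assumes k: "k \<le> -1"
  shows "adj_series (k + 1) g n = adj_series k g (n - 1) * (1 + fls_X_inv) - adj_series k g n"
proof (rule fls_eqI)
  fix m
  have R: "fls_nth (adj_series k g (n - 1) * (1 + fls_X_inv) - adj_series k g n) m
      = fls_nth (adj_series k g (n - 1)) m + fls_nth (adj_series k g (n - 1)) (m + 1) - fls_nth (adj_series k g n) m"
    by (simp add: distrib_left fls_times_X_inv_nth)
  have M: "fls_nth (adj_series (k + 1) g n) m = fls_nth (adj_series k g (n - 1)) m + fls_nth (adj_series k g (n - 1)) (m + 1) - fls_nth (adj_series k g n) m"
  proof (cases "m < 0")
    case True then show ?thesis using k by (auto simp: adj_series_nth)
  next
    case False
    show ?thesis
    proof (cases "k + m + 1 < 0")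
      case True then show ?thesis using False by (auto simp: adj_series_nth)
    next
      case False2: False
      show ?thesis
      proof (cases "k + m + 1 = 0")
        case True
        then have "k + 1 + m = 0" "k + (m + 1) = 0" "n - 1 + (m + 1) = n + m" by auto
        then show ?thesis using False True by (simp add: adj_series_nth)
      next
        case False3: False
        define r where "r = nat (k + m)"
        have r: "nat (k + 1 + m) = Suc r" "nat (k + (m + 1)) = Suc r" "0 \<le> k + m"
          using False2 False3 by (auto simp: r_def)
        have e: "n - 1 + (m + 1) = n + m" "n - 1 + m = n + m - 1" by auto
        show ?thesis using False r
          by (simp add: adj_series_nth e r_def[symmetric] bdiff_Suc ibinom_pascal ibinom_pascal' algebra_simps)
      qed
    qed
  qed
  show "fls_nth (adj_series (k + 1) g n) m = fls_nth (adj_series k g (n - 1) * (1 + fls_X_inv) - adj_series k g n) m"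
    using M R by simp
qed

lemma adj_act_Suc:
  assumes k: "k \<le> -1"
  shows "adj_act (k + 1) g n = adj_act k g (n - 1) - adj_act k g n"
proof -
  have e: "onepl (- (n - 1)) = (1 + fls_X_inv) * onepl (- n)"
    using onepl_Suc[of "- n"] by simp
  have "adj_act (k + 1) g n = (adj_series k g (n - 1) * (1 + fls_X_inv) - adj_series k g n) * onepl (- n)"
    by (simp only: adj_act_def adj_series_Suc[OF k])
  also have "\<dots> = adj_series k g (n - 1) * ((1 + fls_X_inv) * onepl (- n)) - adj_series k g n * onepl (- n)"
    by (simp add: algebra_simps)
  also have "\<dots> = adj_act k g (n - 1) - adj_act k g n"
    by (simp only: adj_act_def e)
  finally show ?thesis .
qed

lemma adj_act_shift_Suc: "adj_act_shift (k + 1) g n = adj_act_shift k g (n - 1) - adj_act_shift k g n"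
proof (rule fls_eqI)
  fix c
  have 1: "fls_nth (adj_act_shift k g n) c = (\<Sum>l\<in>{n - k - 1..c}. g l * of_int (shift_coeff k (n - l)) * fls_nth (onepl (- l)) c)"
    unfolding adj_act_shift_nth by (rule sum_eq_if_vanishing_outside) (auto simp: shift_coeff_above)
  have 2: "fls_nth (adj_act_shift k g (n - 1)) c = (\<Sum>l\<in>{n - k - 1..c}. g l * of_int (shift_coeff k (n - l - 1)) * fls_nth (onepl (- l)) c)"
    unfolding adj_act_shift_nth by (rule sum.cong) (auto simp: algebra_simps)
  have 3: "fls_nth (adj_act_shift (k + 1) g n) c = (\<Sum>l\<in>{n - k - 1..c}. g l * of_int (shift_coeff k (n - l - 1) - shift_coeff k (n - l)) * fls_nth (onepl (- l)) c)"
    unfolding adj_act_shift_nth shift_coeff_pascal by (rule sum.cong) auto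
  show "fls_nth (adj_act_shift (k + 1) g n) c = fls_nth (adj_act_shift k g (n - 1) - adj_act_shift k g n) c"
    unfolding fls_minus_nth 1 2 3 sum_subtractf[symmetric]
    by (rule sum.cong) (auto simp: algebra_simps)
qed

lemma adj_series_0: "adj_series 0 g n = fls_const (g n)"
proof (rule fls_eqI)
  fix m show "fls_nth (adj_series 0 g n) m = fls_nth (fls_const (g n)) m"
    by (cases "m = 0") (auto simp: adj_series_nth ibinom_def)
qed

lemma adj_act_0_eq_shift: "adj_act 0 g n = adj_act_shift 0 g n"
proof (rule fls_eqI)
  fix c
  have "fls_nth (adj_act_shift 0 g n) c = (\<Sum>l\<in>{n..c}. if l = n then g n * fls_nth (onepl (- n)) c else 0)"
    unfolding adj_act_shift_nth by (rule sum.cong) (auto simp: shift_coeff_0)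
  also have "\<dots> = g n * fls_nth (onepl (- n)) c"
    by (cases "n \<le> c") (auto simp: sum.delta onepl_nth)
  finally show "fls_nth (adj_act 0 g n) c = fls_nth (adj_act_shift 0 g n) c"
    by (simp add: adj_act_def adj_series_0)
qed

lemma adj_act_nth_below:
  assumes "k \<le> 0" "c < n - k"
  shows "fls_nth (adj_act k g n) c = 0"
proof -
  have "fls_nth (adj_act k g n) c = (\<Sum>x\<in>{- k..c - n}. fls_nth (adj_series k g n) x * fls_nth (onepl (- n)) (c - x))"
    unfolding adj_act_def by (rule fls_mult_nth_bounded) (auto simp: adj_series_nth onepl_nth)
  also have "\<dots> = 0" using assms by simp
  finally show ?thesis .
qed

lemma adj_act_shift_nth_below: "c < n - k \<Longrightarrow> fls_nth (adj_act_shift k g n) c = 0"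
  by (simp add: adj_act_shift_nth)

lemma fls_family_eq_0_if_shift_invariant:
  fixes F :: "int \<Rightarrow> 'a::zero fls"
  assumes shift: "\<And>n. F (n - 1) = F n" and below: "\<And>n c. c < n + d \<Longrightarrow> fls_nth (F n) c = 0"
  shows "F n = 0"
proof (rule fls_eqI)
  fix c
  have shifted: "F (n + int j) = F n" for j
  proof (induction j)
    case (Suc j)
    then show ?case using shift[of "n + int (Suc j)"] by simp
  qed simp
  have "fls_nth (F n) c = fls_nth (F (n + int (nat (c - n - d + 1)))) c" by (simp only: shifted)
  also have "\<dots> = 0" by (rule below) simp
  finally show "fls_nth (F n) c = fls_nth 0 c" by simp
qed

lemma adj_act_eq_shift:
  assumes "k \<le> 0"
  shows "adj_act k g n = adj_act_shift k g n"
proof -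
  have "adj_act (- int m) g n = adj_act_shift (- int m) g n" for m n
  proof (induction m arbitrary: n)
    case 0 then show ?case using adj_act_0_eq_shift by simp
  next
    case (Suc m)
    define k where "k = - int (Suc m)"
    have k: "k + 1 = - int m" "k \<le> -1" by (auto simp: k_def)
    have "adj_act k g n - adj_act_shift k g n = 0"
    proof (rule fls_family_eq_0_if_shift_invariant[where F = "\<lambda>n. adj_act k g n - adj_act_shift k g n" and d = "- k"])
      fix n
      have "adj_act (k + 1) g n = adj_act_shift (k + 1) g n" using Suc k by simp
      then have "adj_act k g (n - 1) - adj_act k g n = adj_act_shift k g (n - 1) - adj_act_shift k g n"
        by (simp add: adj_act_Suc[OF k(2)] adj_act_shift_Suc)
      then show "adj_act k g (n - 1) - adj_act_shift k g (n - 1) = adj_act k g n - adj_act_shift k g n"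
        by (simp add: algebra_simps)
    next
      fix n c assume "c < n + - k"
      then show "fls_nth (adj_act k g n - adj_act_shift k g n) c = 0"
        using k by (simp add: adj_act_nth_below adj_act_shift_nth_below)
    qed
    then show ?case by (simp add: k_def)
  qed
  moreover have "k = - int (nat (- k))" using assms by simp
  ultimately show ?thesis by metis
qed

definition adj_neg_series :: "real pdo \<Rightarrow> int \<Rightarrow> real fls" where
  "adj_neg_series C n = fps_to_fls (Abs_fps (\<lambda>m. if m = 0 then 0 else
       (\<Sum>k\<in>{- int m .. -1}. of_int (ibinom k (nat (k + int m))) *
           bdiff (nat (k + int m)) (C k) (n + int m))))"

lemma adj_act_neg_eq: "adj_act_neg C n = adj_neg_series C n * onepl (- n)"
  by (simp add: adj_act_neg_def adj_neg_series_def)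

lemma adj_neg_series_nth:
  "fls_nth (adj_neg_series C n) x
   = (if x \<le> 0 then 0 else (\<Sum>k\<in>{- x .. -1}. of_int (ibinom k (nat (k + x))) * bdiff (nat (k + x)) (C k) (n + x)))"
  by (auto simp: adj_neg_series_def)

lemma adj_neg_series_nth_eq_sum:
  assumes "x \<le> c - n"
  shows "fls_nth (adj_neg_series C n) x = (\<Sum>k\<in>{n - c..-1}. fls_nth (adj_series k (C k) n) x)"
proof (cases "x \<le> 0")
  case True then show ?thesis by (simp add: adj_neg_series_nth adj_series_nth)
next
  case False
  then have "fls_nth (adj_neg_series C n) x = (\<Sum>k\<in>{- x .. -1}. fls_nth (adj_series k (C k) n) x)"
    by (auto simp: adj_neg_series_nth adj_series_nth intro: sum.cong)
  also have "\<dots> = (\<Sum>k\<in>{n - c..-1}. fls_nth (adj_series k (C k) n) x)"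
    by (rule sum_eq_if_vanishing_outside) (use assms in \<open>auto simp: adj_series_nth\<close>)
  finally show ?thesis .
qed

lemma adj_act_neg_nth_adj_act: "fls_nth (adj_act_neg C n) c = (\<Sum>k\<in>{n - c..-1}. fls_nth (adj_act k (C k) n) c)"
proof -
  have "fls_nth (adj_act_neg C n) c = (\<Sum>x\<in>{0..c - n}. fls_nth (adj_neg_series C n) x * fls_nth (onepl (- n)) (c - x))"
    unfolding adj_act_neg_eq by (rule fls_mult_nth_bounded) (auto simp: adj_neg_series_nth onepl_nth)
  also have "\<dots> = (\<Sum>x\<in>{0..c - n}. \<Sum>k\<in>{n - c..-1}. fls_nth (adj_series k (C k) n) x * fls_nth (onepl (- n)) (c - x))"
    by (intro sum.cong refl) (simp add: adj_neg_series_nth_eq_sum[where c = c] sum_distrib_right)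
  also have "\<dots> = (\<Sum>k\<in>{n - c..-1}. \<Sum>x\<in>{0..c - n}. fls_nth (adj_series k (C k) n) x * fls_nth (onepl (- n)) (c - x))"
    by (rule sum.swap)
  also have "\<dots> = (\<Sum>k\<in>{n - c..-1}. fls_nth (adj_act k (C k) n) c)"
    unfolding adj_act_def
    by (intro sum.cong refl fls_mult_nth_bounded[symmetric]) (auto simp: adj_series_nth onepl_nth)
  finally show ?thesis .
qed

lemma adj_act_neg_nth:
  assumes C: "pdo_deg_le C (-1)"
  shows "fls_nth (adj_act_neg C n) c = (\<Sum>l\<in>{n + 1..c}. shift_exp C l (n - l) * fls_nth (onepl (- l)) c)"
proof -
  have "fls_nth (adj_act_neg C n) c = (\<Sum>k\<in>{n - c..-1}. fls_nth (adj_act_shift k (C k) n) c)"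
    unfolding adj_act_neg_nth_adj_act by (rule sum.cong[OF refl]) (simp add: adj_act_eq_shift)
  also have "\<dots> = (\<Sum>k\<in>{n - c..-1}. \<Sum>l\<in>{n + 1..c}. C k l * of_int (shift_coeff k (n - l)) * fls_nth (onepl (- l)) c)"
    unfolding adj_act_shift_nth
  proof (rule sum.cong[OF refl], rule sum_eq_if_vanishing_outside)
    fix k l assume "k \<in> {n - c..-1}" "l \<in> {n + 1..c} - {n - k..c}"
    then show "C k l * of_int (shift_coeff k (n - l)) * fls_nth (onepl (- l)) c = 0" by (auto simp: shift_coeff_above)
  qed auto
  also have "\<dots> = (\<Sum>l\<in>{n + 1..c}. \<Sum>k\<in>{n - c..-1}. C k l * of_int (shift_coeff k (n - l)) * fls_nth (onepl (- l)) c)"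
    by (rule sum.swap)
  also have "\<dots> = (\<Sum>l\<in>{n + 1..c}. shift_exp C l (n - l) * fls_nth (onepl (- l)) c)"
  proof (rule sum.cong[OF refl])
    fix l assume l: "l \<in> {n + 1..c}"
    have "shift_exp C l (n - l) = (\<Sum>k\<in>{n - c..-1}. C k l * of_int (shift_coeff k (n - l)))"
      unfolding shift_exp_eq[OF C] by (rule sum_eq_if_vanishing_outside) (use l in \<open>auto simp: shift_coeff_above\<close>)
    then show "(\<Sum>k\<in>{n - c..-1}. C k l * of_int (shift_coeff k (n - l)) * fls_nth (onepl (- l)) c) = shift_exp C l (n - l) * fls_nth (onepl (- l)) c"
      by (simp add: sum_distrib_right)
  qed
  finally show ?thesis .
qed

lemma adj_act_neg_nth_below:
  assumes C: "pdo_deg_le C (-1)" and c: "c < n + 1"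
  shows "fls_nth (adj_act_neg C n) c = 0"
  using c by (simp add: adj_act_neg_nth[OF C])

lemma res_pdo_act_mult_adj_act_neg:
  assumes Z: "pdo_deg_le Z 0" and C: "pdo_deg_le C (-1)"
  shows "fls_nth (pdo_act Z a * adj_act_neg C b) 1
    = (\<Sum>l\<in>{b + 1..a + 1}. shift_exp C l (b - l) * shift_exp Z a (l - 1 - a))"
proof -
  have "fls_nth (pdo_act Z a * adj_act_neg C b) 1
      = (\<Sum>x\<in>{- a..1 - (b + 1)}. fls_nth (pdo_act Z a) x * fls_nth (adj_act_neg C b) (1 - x))"
    by (rule fls_mult_nth_bounded) (auto simp: pdo_act_nth_below[OF Z] adj_act_neg_nth_below[OF C])
  also have "\<dots> = (\<Sum>x\<in>{- a..- b}. \<Sum>l\<in>{b + 1..a + 1}.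
      fls_nth (pdo_act Z a) x * (shift_exp C l (b - l) * fls_nth (onepl (- l)) (1 - x)))"
  proof (rule sum.cong, simp)
    fix x assume x: "x \<in> {- a..- b}"
    have "fls_nth (adj_act_neg C b) (1 - x) = (\<Sum>l\<in>{b + 1..a + 1}. shift_exp C l (b - l) * fls_nth (onepl (- l)) (1 - x))"
      unfolding adj_act_neg_nth[OF C] by (rule sum_eq_if_vanishing_outside) (use x in \<open>auto simp: onepl_nth\<close>)
    then show "fls_nth (pdo_act Z a) x * fls_nth (adj_act_neg C b) (1 - x)
        = (\<Sum>l\<in>{b + 1..a + 1}. fls_nth (pdo_act Z a) x * (shift_exp C l (b - l) * fls_nth (onepl (- l)) (1 - x)))"
      by (simp add: sum_distrib_left)
  qed
  also have "\<dots> = (\<Sum>l\<in>{b + 1..a + 1}. \<Sum>x\<in>{- a..- b}.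
      fls_nth (pdo_act Z a) x * (shift_exp C l (b - l) * fls_nth (onepl (- l)) (1 - x)))"
    by (rule sum.swap)
  also have "\<dots> = (\<Sum>l\<in>{b + 1..a + 1}. shift_exp C l (b - l) * shift_exp Z a (l - 1 - a))"
  proof (rule sum.cong[OF refl])
    fix l assume l: "l \<in> {b + 1..a + 1}"
    have "fls_nth (pdo_act Z a * onepl (- l)) 1 = (\<Sum>x\<in>{- a..1 - l}. fls_nth (pdo_act Z a) x * fls_nth (onepl (- l)) (1 - x))"
      by (rule fls_mult_nth_bounded) (auto simp: pdo_act_nth_below[OF Z] onepl_nth)
    also have "\<dots> = (\<Sum>x\<in>{- a..- b}. fls_nth (pdo_act Z a) x * fls_nth (onepl (- l)) (1 - x))"
      by (rule sum_eq_if_vanishing_outside) (use l in \<open>auto simp: onepl_nth\<close>)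
    finally have E: "(\<Sum>x\<in>{- a..- b}. fls_nth (pdo_act Z a) x * fls_nth (onepl (- l)) (1 - x)) = shift_exp Z a (l - 1 - a)"
      using pdo_act_mult_onepl_res[OF Z] by simp
    have "(\<Sum>x\<in>{- a..- b}. fls_nth (pdo_act Z a) x * (shift_exp C l (b - l) * fls_nth (onepl (- l)) (1 - x)))
        = shift_exp C l (b - l) * (\<Sum>x\<in>{- a..- b}. fls_nth (pdo_act Z a) x * fls_nth (onepl (- l)) (1 - x))"
      by (simp add: sum_distrib_left mult.left_commute)
    then show "(\<Sum>x\<in>{- a..- b}. fls_nth (pdo_act Z a) x * (shift_exp C l (b - l) * fls_nth (onepl (- l)) (1 - x)))
        = shift_exp C l (b - l) * shift_exp Z a (l - 1 - a)"
      by (simp only: E)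
  qed
  finally show ?thesis .
qed

theorem bilinear_identity:
  assumes Z: "pdo_deg_le Z 0" and Zi: "pdo_deg_le Zi 0" and Z_Zi: "pdo_mult Z Zi = pdo_monom 0"
  shows "fls_nth (pdo_act Z a * adj_act_neg (\<lambda>k m. if k \<le> -1 then Zi (k + 1) (m - 1) else 0) b) 1
         = (if b \<le> a then 1 else 0)"
proof -
  define C where "C = (\<lambda>k m. if k \<le> -1 then Zi (k + 1) (m - 1) else (0::real))"
  define Zi_Delta_inv where "Zi_Delta_inv = pdo_mult Zi (pdo_monom (-1) :: real pdo)"
  have deg_Zi_Delta_inv: "pdo_deg_le Zi_Delta_inv (-1)"
    unfolding Zi_Delta_inv_def using pdo_deg_le_mult[OF Zi pdo_deg_le_monom, of "-1"] by simp
  have deg_C: "pdo_deg_le C (-1)" by (simp add: pdo_deg_le_def C_def)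
  have "C k m = Zi_Delta_inv k (m - 1)" for k m
    using pdo_deg_leD[OF Zi, of "k + 1" "m - 1"] by (auto simp: C_def Zi_Delta_inv_def pdo_mult_monom_eq[OF Zi])
  then have shift_exp_C: "shift_exp C l p = shift_exp Zi_Delta_inv (l - 1) p" for l p
    by (simp add: shift_exp_eq[OF deg_C] shift_exp_eq[OF deg_Zi_Delta_inv])
  have "fls_nth (pdo_act Z a * adj_act_neg C b) 1 = (\<Sum>l\<in>{b + 1..a + 1}. shift_exp C l (b - l) * shift_exp Z a (l - 1 - a))"
    by (rule res_pdo_act_mult_adj_act_neg[OF Z deg_C])
  also have "\<dots> = shift_conv 0 (-1) (shift_exp Z) (shift_exp Zi_Delta_inv) a (b - 1 - a)"
    unfolding shift_conv_def shift_exp_C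
    by (subst sum_int_interval_shift[where d = "a + 1"]) (simp add: algebra_simps)
  also have "\<dots> = shift_exp (pdo_mult Z Zi_Delta_inv) a (b - 1 - a)"
    using shift_exp_mult[OF Z deg_Zi_Delta_inv] by simp
  also have "pdo_mult Z Zi_Delta_inv = pdo_monom (-1)"
    unfolding Zi_Delta_inv_def by (simp add: pdo_mult_assoc[OF Z Zi pdo_deg_le_monom, symmetric] Z_Zi pdo_monom_mult_monom)
  also have "shift_exp (pdo_monom (-1) :: real pdo) a (b - 1 - a) = (if b \<le> a then 1 else 0)"
    by (simp add: shift_exp_monom shift_coeff_minus_1)
  finally show ?thesis by (simp add: C_def)
qed

section \<open>Orders and coefficientwise derivatives of Laurent series\<close>

definition vanishes_below :: "real fls \<Rightarrow> int \<Rightarrow> bool" where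
  "vanishes_below f b \<longleftrightarrow> (\<forall>c<b. fls_nth f c = 0)"

lemma vanishes_below_mult: assumes "vanishes_below f a" "vanishes_below g b" shows "vanishes_below (f * g) (a + b)"
  unfolding vanishes_below_def
proof (intro allI impI)
  fix c assume c: "c < a + b"
  have "fls_nth (f * g) c = (\<Sum>x\<in>{a..c - b}. fls_nth f x * fls_nth g (c - x))"
    by (rule fls_mult_nth_bounded) (use assms in \<open>auto simp: vanishes_below_def\<close>)
  also have "{a..c - b} = {}" using c by auto
  finally show "fls_nth (f * g) c = 0" by simp
qed

lemma vanishes_below_mono: "vanishes_below f a \<Longrightarrow> b \<le> a \<Longrightarrow> vanishes_below f b"
  by (simp add: vanishes_below_def)

lemma vanishes_below_diff: "vanishes_below f a \<Longrightarrow> vanishes_below g a \<Longrightarrow> vanishes_below (f - g) a"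
  by (simp add: vanishes_below_def)

lemma vanishes_below_sum: "(\<And>x. x \<in> S \<Longrightarrow> vanishes_below (f x) a) \<Longrightarrow> vanishes_below (\<Sum>x\<in>S. f x) a"
  by (simp add: vanishes_below_def fls_nth_sum)

lemma vanishes_below_of_int_mult: "vanishes_below f a \<Longrightarrow> vanishes_below (of_int z * f) a"
  by (simp add: vanishes_below_def fls_of_int)

lemma vanishes_below_0: "vanishes_below 0 a"
  by (simp add: vanishes_below_def)

lemma vanishes_below_fls_const: "vanishes_below (fls_const x) 0"
  by (simp add: vanishes_below_def)

lemma vanishes_below_fdiff: "(\<And>s. s \<le> r \<Longrightarrow> vanishes_below (g (x + int s)) b) \<Longrightarrow> vanishes_below (fdiff r g x) b"
  unfolding fdiff_def by (intro vanishes_below_sum vanishes_below_of_int_mult) auto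

lemma vanishes_below_pdo_mult:
  assumes A: "pdo_deg_le A a" and B: "pdo_deg_le B b"
    and oA: "\<And>i. vanishes_below (A i n) (oA i)" and oB: "\<And>k m. vanishes_below (B k m) (oB k m)"
    and cond: "\<And>i r s. i \<le> a \<Longrightarrow> j + int r - b \<le> i \<Longrightarrow> s \<le> r \<Longrightarrow> g \<le> oA i + oB (j - i + int r) (n + i - int r + int s)"
  shows "vanishes_below (pdo_mult A B j n) g"
  unfolding pdo_mult_eq_sum[OF A B] pdo_mult_sum_def pdo_mult_term_def
proof (intro vanishes_below_sum)
  fix r i assume r: "r \<in> {0..nat (a + b - j)}" and i: "i \<in> {j + int r - b..a}"
  have "vanishes_below (A i n * (of_int (ibinom i r) * fdiff r (B (j - i + int r)) (n + i - int r))) (oA i + (g - oA i))"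
  proof (rule vanishes_below_mult[OF oA], rule vanishes_below_of_int_mult, rule vanishes_below_fdiff)
    fix s assume "s \<le> r"
    then show "vanishes_below (B (j - i + int r) (n + i - int r + int s)) (g - oA i)"
      by (intro vanishes_below_mono[OF oB]) (use cond[of i r s] i in auto)
  qed
  then show "vanishes_below (A i n * of_int (ibinom i r) * fdiff r (B (j - i + int r)) (n + i - int r)) g"
    by (simp add: mult.assoc)
qed

lemma vanishes_below_Gamma: "vanishes_below (pdo_Gamma k m) 0"
  by (simp add: pdo_Gamma_def vanishes_below_def)

lemma vanishes_below_Delta_inv: "vanishes_below (pdo_Delta_inv k m) 0"
  by (simp add: pdo_Delta_inv_def vanishes_below_def)

lemma pdo_deg_le_Gamma_Delta_inv: "pdo_deg_le (pdo_mult pdo_Gamma pdo_Delta_inv :: real fls pdo) 0"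
  using pdo_deg_le_mult[OF pdo_deg_le_Gamma pdo_deg_le_Delta_inv] by simp

lemma vanishes_below_Gamma_Delta_inv: "vanishes_below (pdo_mult pdo_Gamma pdo_Delta_inv k m) 0"
  by (rule vanishes_below_pdo_mult[OF pdo_deg_le_Gamma pdo_deg_le_Delta_inv, where oA = "\<lambda>_. 0" and oB = "\<lambda>_ _. 0"]) (auto intro: vanishes_below_Gamma vanishes_below_Delta_inv)

lemma fls_nth_mult_const_left_commute: "fls_nth ((Q :: 'a::comm_ring_1 fls) * (fls_const a * Y)) c = a * fls_nth (Q * Y) c"
proof -
  have e: "Q * (fls_const a * Y) = fls_const a * (Q * Y)" by (simp add: mult.left_commute)
  show ?thesis unfolding e by (rule fls_mult_const_nth(1))
qed

lemma fls_nth_mult_minus_one_power: "fls_nth ((Q :: 'a::comm_ring_1 fls) * ((-1) ^ k * Y)) c = (-1) ^ k * fls_nth (Q * Y) c"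
proof (induction k)
  case 0 then show ?case by simp
next
  case (Suc k)
  have "Q * ((-1) ^ Suc k * Y) = - (Q * ((-1) ^ k * Y))" by simp
  then show ?case using Suc by simp
qed

lemma fls_nth_mult_fdiff:
  fixes Q :: "real fls"
  shows "fls_nth (Q * fdiff r H x) c = fdiff r (\<lambda>m. fls_nth (Q * H m) c) x"
proof -
  have "fls_nth (Q * fdiff r H x) c = (\<Sum>s\<le>r. fls_nth (Q * (fls_const (of_int ((-1) ^ (r - s) * int (r choose s))) * H (x + int s))) c)"
    unfolding fdiff_def by (simp add: sum_distrib_left fls_nth_sum fls_of_int)
  also have "\<dots> = fdiff r (\<lambda>m. fls_nth (Q * H m) c) x"
    unfolding fdiff_def fls_nth_mult_const_left_commute ..
  finally show ?thesis .
qed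

lemma fls_nth_mult_pdo_apply:
  assumes A: "pdo_deg_le (A :: real pdo) d"
  shows "fls_nth (Q * pdo_apply (pdo_map fls_const A) F a) c = pdo_apply A (\<lambda>m. fls_nth (Q * F m) c) a"
proof -
  have "fls_nth (Q * pdo_apply (pdo_map fls_const A) F a) c = (\<Sum>k\<in>{0..nat d}. fls_nth (Q * (fls_const (A (int k) a) * fdiff k F a)) c)"
    by (simp add: pdo_apply_eq[OF pdo_deg_le_map[OF A]] pdo_map_def sum_distrib_left fls_nth_sum)
  also have "\<dots> = pdo_apply A (\<lambda>m. fls_nth (Q * F m) c) a"
    unfolding fls_nth_mult_const_left_commute fls_nth_mult_fdiff pdo_apply_eq[OF A] ..
  finally show ?thesis .
qed

lemma fls_nth_mult_adj_conj_apply: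
  assumes A: "pdo_deg_le (A :: real pdo) d"
  shows "fls_nth (Q * adj_conj_apply (pdo_map fls_const A) F b) c = adj_conj_apply A (\<lambda>m. fls_nth (Q * F m) c) b"
proof -
  have "fls_nth (Q * adj_conj_apply (pdo_map fls_const A) F b) c
      = (\<Sum>k\<in>{1..nat d}. fls_nth (Q * (((-1) ^ k) * fdiff (k - 1) (\<lambda>m. fls_const (A (int k) m) * (F (m + 1) - F m)) (b - int k))) c)"
    by (simp add: adj_conj_apply_eq[OF pdo_deg_le_map[OF A]] pdo_map_def sum_distrib_left fls_nth_sum)
  also have "\<dots> = (\<Sum>k\<in>{1..nat d}. (-1) ^ k * fdiff (k - 1) (\<lambda>m. fls_nth (Q * (fls_const (A (int k) m) * (F (m + 1) - F m))) c) (b - int k))"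
    unfolding fls_nth_mult_minus_one_power fls_nth_mult_fdiff ..
  also have "\<dots> = adj_conj_apply A (\<lambda>m. fls_nth (Q * F m) c) b"
    unfolding adj_conj_apply_eq[OF A] fls_nth_mult_const_left_commute by (simp add: algebra_simps)
  finally show ?thesis .
qed

lemma pdo_apply_cong:
  assumes A: "pdo_deg_le A d" and fg: "\<And>m. m \<ge> a \<Longrightarrow> f m = g m"
  shows "pdo_apply A f a = pdo_apply A g a"
  unfolding pdo_apply_eq[OF A]
proof (rule sum.cong[OF refl])
  fix k
  have "fdiff k f a = fdiff k g a" by (rule fdiff_cong) (simp add: fg)
  then show "A (int k) a * fdiff k f a = A (int k) a * fdiff k g a" by simp
qed

lemma adj_conj_apply_cong:
  assumes A: "pdo_deg_le A d" and fg: "\<And>m. m \<le> b \<Longrightarrow> f m = g m"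
  shows "adj_conj_apply A f b = adj_conj_apply A g b"
  unfolding adj_conj_apply_eq[OF A]
proof (rule sum.cong[OF refl])
  fix k assume k: "k \<in> {1..nat d}"
  have "fdiff (k - 1) (\<lambda>m. A (int k) m * (f (m + 1) - f m)) (b - int k) = fdiff (k - 1) (\<lambda>m. A (int k) m * (g (m + 1) - g m)) (b - int k)"
  proof (rule fdiff_cong)
    fix s assume s: "s \<le> k - 1"
    then have "b - int k + int s + 1 \<le> b" using k by auto
    then show "A (int k) (b - int k + int s) * (f (b - int k + int s + 1) - f (b - int k + int s))
      = A (int k) (b - int k + int s) * (g (b - int k + int s + 1) - g (b - int k + int s))"
      using fg by simp
  qed
  then show "(-1) ^ k * fdiff (k - 1) (\<lambda>m. A (int k) m * (f (m + 1) - f m)) (b - int k) = (-1) ^ k * fdiff (k - 1) (\<lambda>m. A (int k) m * (g (m + 1) - g m)) (b - int k)"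
    by simp
qed

definition has_pd :: "nat \<Rightarrow> ((nat \<Rightarrow> real) \<Rightarrow> real) \<Rightarrow> (nat \<Rightarrow> real) \<Rightarrow> real \<Rightarrow> bool" where
  "has_pd i f t D \<longleftrightarrow> ((\<lambda>s. f (t(i := s))) has_real_derivative D) (at (t i))"

lemma has_pdD: assumes "has_pd i f t D" shows "pdiff i f t" "pd i f t = D"
proof -
  have d: "deriv (\<lambda>s. f (t(i := s))) (t i) = D"
    using assms unfolding has_pd_def by (rule DERIV_imp_deriv)
  then show "pd i f t = D" by (simp add: pd_def)
  have "((\<lambda>s. f (t(i := s))) has_real_derivative deriv (\<lambda>s. f (t(i := s))) (t i)) (at (t i))"
    using assms d unfolding has_pd_def by simp
  then show "pdiff i f t" unfolding pdiff_def by (simp add: DERIV_deriv_iff_real_differentiable)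
qed

lemma pdiff_has_pd: "pdiff i f t \<Longrightarrow> has_pd i f t (pd i f t)"
  unfolding pdiff_def has_pd_def pd_def by (simp add: DERIV_deriv_iff_real_differentiable)

lemma has_pd_const: "has_pd i (\<lambda>t. c) t 0"
  by (simp add: has_pd_def)

lemma pd_const: "pd i (\<lambda>t. c) t = 0"
  using has_pdD(2)[OF has_pd_const] .

lemma has_pd_add: "has_pd i f t Df \<Longrightarrow> has_pd i g t Dg \<Longrightarrow> has_pd i (\<lambda>t. f t + g t) t (Df + Dg)"
  unfolding has_pd_def by (rule DERIV_add)

lemma has_pd_mult: assumes "has_pd i f t Df" "has_pd i g t Dg" shows "has_pd i (\<lambda>t. f t * g t) t (Df * g t + f t * Dg)"
  using DERIV_mult[OF assms[unfolded has_pd_def]] by (simp add: has_pd_def algebra_simps)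

lemma has_pd_sum: "finite S \<Longrightarrow> (\<And>x. x \<in> S \<Longrightarrow> has_pd i (f x) t (D x)) \<Longrightarrow> has_pd i (\<lambda>t. \<Sum>x\<in>S. f x t) t (\<Sum>x\<in>S. D x)"
  unfolding has_pd_def by (rule DERIV_sum)

lemma has_pd_inverse: "has_pd i f t Df \<Longrightarrow> f t \<noteq> 0 \<Longrightarrow> has_pd i (\<lambda>t. inverse (f t)) t (- (Df * inverse (f t) ^ 2))"
  unfolding has_pd_def using DERIV_inverse_fun[of "\<lambda>s. f (t(i := s))" Df "t i" UNIV] by (simp add: power2_eq_square)

lemma has_pd_cong: "(\<And>s. f s = g s) \<Longrightarrow> has_pd i g t D \<Longrightarrow> has_pd i f t D"
  by (metis ext)

lemma pd_cong: "(\<And>s. f s = g s) \<Longrightarrow> pd i f t = pd i g t"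
  by (metis ext)

lemma pd_zero: "(\<And>s. f s = 0) \<Longrightarrow> pd i f t = 0"
  using pd_cong[of f "\<lambda>_. 0"] pd_const by simp

lemma vanish_by_recursion:
  fixes F :: "(nat \<Rightarrow> real) \<Rightarrow> int \<Rightarrow> real"
  assumes below: "\<And>t k. k < d \<Longrightarrow> F t k = 0"
    and rec: "\<And>t k. k < N \<Longrightarrow> F t (k + 1) = e * pd 1 (\<lambda>s. F s k) t"
    and "k \<le> N"
  shows "F t k = 0"
proof -
  have "F t k = 0" if "k < d + int m" "k \<le> N" for m k t
    using that
  proof (induction m arbitrary: k t)
    case 0 then show ?case using below by simp
  next
    case (Suc m)
    show ?case
    proof (cases "k < d + int m")
      case True then show ?thesis using Suc by blast
    next
      case False
      then have "F s (k - 1) = 0" for s using Suc by auto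
      then show ?thesis using rec[of "k - 1" t] False Suc.prems by (simp add: pd_zero)
    qed
  qed
  moreover have "k < d + int (nat (k - d + 1))" by simp
  ultimately show ?thesis using assms(3) by blast
qed

definition pd_series :: "nat \<Rightarrow> ((nat \<Rightarrow> real) \<Rightarrow> real fls) \<Rightarrow> (nat \<Rightarrow> real) \<Rightarrow> real fls" where
  "pd_series j W t = Abs_fls (\<lambda>c. pd j (\<lambda>s. fls_nth (W s) c) t)"

lemma pd_series_nth:
  assumes "\<And>s c. c < d \<Longrightarrow> fls_nth (W s) c = 0"
  shows "fls_nth (pd_series j W t) c = pd j (\<lambda>s. fls_nth (W s) c) t"
  unfolding pd_series_def
  by (rule nth_Abs_fls_lower_bound[where N = d]) (use assms in \<open>auto intro: pd_zero\<close>)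

lemma pd_series_nth_below:
  assumes "\<And>s c. c < d \<Longrightarrow> fls_nth (W s) c = 0" "c < d"
  shows "fls_nth (pd_series j W t) c = 0"
  using assms by (simp add: pd_series_nth[OF assms(1)] pd_zero)

lemma has_pd_fls_nth_mult:
  assumes W: "\<And>s c. c < dW \<Longrightarrow> fls_nth (W s) c = 0" and V: "\<And>s c. c < dV \<Longrightarrow> fls_nth (V s) c = 0"
    and dW: "\<And>c. pdiff j (\<lambda>s. fls_nth (W s) c) t" and dV: "\<And>c. pdiff j (\<lambda>s. fls_nth (V s) c) t"
  shows "has_pd j (\<lambda>s. fls_nth (W s * V s) c) t (fls_nth (pd_series j W t * V t) c + fls_nth (W t * pd_series j V t) c)"
proof -
  have e: "fls_nth (W s * V s) c = (\<Sum>x\<in>{dW..c - dV}. fls_nth (W s) x * fls_nth (V s) (c - x))" for s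
    by (rule fls_mult_nth_bounded) (auto simp: W V)
  have "has_pd j (\<lambda>s. \<Sum>x\<in>{dW..c - dV}. fls_nth (W s) x * fls_nth (V s) (c - x)) t
      (\<Sum>x\<in>{dW..c - dV}. pd j (\<lambda>s. fls_nth (W s) x) t * fls_nth (V t) (c - x) + fls_nth (W t) x * pd j (\<lambda>s. fls_nth (V s) (c - x)) t)"
    by (intro has_pd_sum has_pd_mult pdiff_has_pd dW dV) auto
  moreover have "fls_nth (pd_series j W t * V t) c = (\<Sum>x\<in>{dW..c - dV}. pd j (\<lambda>s. fls_nth (W s) x) t * fls_nth (V t) (c - x))"
    by (subst fls_mult_nth_bounded[where a = dW and b = dV]) (auto simp: pd_series_nth_below[OF W] pd_series_nth[OF W] V)
  moreover have "fls_nth (W t * pd_series j V t) c = (\<Sum>x\<in>{dW..c - dV}. fls_nth (W t) x * pd j (\<lambda>s. fls_nth (V s) (c - x)) t)"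
    by (subst fls_mult_nth_bounded[where a = dW and b = dV]) (auto simp: pd_series_nth_below[OF V] pd_series_nth[OF V] W)
  ultimately show ?thesis
    by (intro has_pd_cong[OF e]) (simp add: sum.distrib)
qed

lemma pd_fls_eq_pd_series: "pd_fls i F t n = pd_series i (\<lambda>s. F s n) t"
  by (simp add: pd_fls_def pd_series_def)

lemma Dtw_nth:
  assumes "\<And>s c. c < d \<Longrightarrow> fls_nth (F s n) c = 0"
  shows "fls_nth (Dtw e j F t n) c = pd j (\<lambda>s. fls_nth (F s n) c) t + e * fls_nth (F t n) (c + int j)"
proof -
  have "fls_nth (fls_X_inv ^ j * F t n) c = fls_nth (F t n) (c + int j)"
    by (simp add: fls_X_inv_power_times_conv_shift)
  then show ?thesis
    by (simp add: Dtw_def pd_fls_eq_pd_series pd_series_nth[where d = d] assms mult.assoc)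
qed

lemma Dtw_nth_below:
  assumes "\<And>s c. c < d \<Longrightarrow> fls_nth (F s n) c = 0" "c < d - int j"
  shows "fls_nth (Dtw e j F t n) c = 0"
  using assms by (simp add: Dtw_nth[of d F n, OF assms(1)] pd_zero)

lemma has_pd_fls_nth_mult_Dtw:
  assumes W: "\<And>s c. c < dW \<Longrightarrow> fls_nth (W s a) c = 0" and V: "\<And>s c. c < dV \<Longrightarrow> fls_nth (V s n) c = 0"
    and dW: "\<And>c. pdiff j (\<lambda>s. fls_nth (W s a) c) t" and dV: "\<And>c. pdiff j (\<lambda>s. fls_nth (V s n) c) t"
  shows "has_pd j (\<lambda>s. fls_nth (W s a * V s n) c) t
           (fls_nth (Dtw e j W t a * V t n) c + fls_nth (W t a * Dtw (- e) j V t n) c)"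
proof -
  have "fls_nth (Dtw e j W t a * V t n) c + fls_nth (W t a * Dtw (- e) j V t n) c
      = fls_nth (pd_series j (\<lambda>s. W s a) t * V t n) c + fls_nth (W t a * pd_series j (\<lambda>s. V s n) t) c"
  proof -
    have "Dtw e j W t a * V t n + W t a * Dtw (- e) j V t n
        = pd_series j (\<lambda>s. W s a) t * V t n + W t a * pd_series j (\<lambda>s. V s n) t"
      by (simp add: Dtw_def pd_fls_eq_pd_series algebra_simps fls_const_uminus)
    then show ?thesis by (metis fls_plus_nth)
  qed
  then show ?thesis using has_pd_fls_nth_mult[of dW "\<lambda>s. W s a" dV "\<lambda>s. V s n", OF W V dW dV] by simp
qed

section \<open>The dmKP hierarchy\<close>

locale dmKP_data =
  fixes Z Zi :: tpdo
    and \<phi> \<psi> :: "(nat \<Rightarrow> real) \<Rightarrow> int \<Rightarrow> real"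
    and \<sigma> \<rho> :: "(nat \<Rightarrow> real) \<Rightarrow> int \<Rightarrow> real fls"
  assumes dress: "dmKP_dressing Z Zi"
    and eig: "eigenfunction (Lax Z Zi) \<phi>"
    and adj: "adjoint_eigenfunction (Lax Z Zi) \<psi>"
    and S1: "sq_pot (Lax Z Zi) (-1) (\<lambda>t n. fls_const (\<phi> t n)) (wstarhat Zi) \<sigma>"
    and S2: "sq_pot (Lax Z Zi) 1 (what Z) (\<lambda>t n. fls_const (\<psi> t n)) \<rho>"
begin

abbreviation L :: "(nat \<Rightarrow> real) \<Rightarrow> real pdo" where "L t \<equiv> Lax Z Zi t"

abbreviation Lpos :: "nat \<Rightarrow> (nat \<Rightarrow> real) \<Rightarrow> real pdo" where "Lpos j t \<equiv> pdo_pos (pdo_pow (L t) j)"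

abbreviation Lneg :: "nat \<Rightarrow> (nat \<Rightarrow> real) \<Rightarrow> real pdo" where "Lneg j t \<equiv> pdo_nonpos (pdo_pow (L t) j)"

lemma Z_pos_eq_0: "k > 0 \<Longrightarrow> Z t k n = 0" and Zi_pos_eq_0: "k > 0 \<Longrightarrow> Zi t k n = 0"
  using dress by (auto simp: dmKP_dressing_def)

lemma Z_deg_le: "pdo_deg_le (Z t) 0" and Zi_deg_le: "pdo_deg_le (Zi t) 0"
  using Z_pos_eq_0 Zi_pos_eq_0 by (auto simp: pdo_deg_le_def)

lemma Z_mult_Zi: "pdo_mult (Z t) (Zi t) = pdo_monom 0" and Zi_mult_Z: "pdo_mult (Zi t) (Z t) = pdo_monom 0"
  using dress by (auto simp: dmKP_dressing_def pdo_one_eq_monom)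

lemma Lax_eq: "L t = pdo_mult (pdo_mult (Z t) (pdo_monom 1)) (Zi t)"
  by (simp add: Lax_def pdo_Delta_eq_monom)

lemma L_deg_le: "pdo_deg_le (L t) 1"
  unfolding Lax_eq using pdo_deg_le_mult[OF pdo_deg_le_mult[OF Z_deg_le pdo_deg_le_monom] Zi_deg_le] by simp

lemma L_pow_deg_le: "pdo_deg_le (pdo_pow (L t) j) (int j)"
  using pdo_deg_le_pow[OF L_deg_le, where j = j] by simp

lemma Lpos_deg_le: "pdo_deg_le (Lpos j t) (int j)"
  by (rule pdo_deg_le_pos[OF L_pow_deg_le])

lemma Lpos_nonpos_eq_0: "k \<le> 0 \<Longrightarrow> Lpos j t k n = 0"
  by (simp add: pdo_pos_def)

lemma Lneg_deg_le: "pdo_deg_le (Lneg j t) 0"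
  by (rule pdo_deg_le_nonpos)

lemma Zi0_mult_Z0: "Zi t 0 n * Z t 0 n = 1"
proof -
  have "pdo_mult (Zi t) (Z t) 0 n = 1" using Zi_mult_Z by (simp add: pdo_monom_def)
  moreover have "pdo_mult (Zi t) (Z t) 0 n = Zi t 0 n * Z t 0 n"
    by (simp add: pdo_mult_eq_sum[OF Zi_deg_le Z_deg_le] pdo_mult_sum_def pdo_mult_term_def)
  ultimately show ?thesis by simp
qed

lemma Z0_nonzero: "Z t 0 n \<noteq> 0"
  using Zi0_mult_Z0[of t n] by auto

lemma L_pow_mult_Z: "pdo_mult (pdo_pow (L t) j) (Z t) = pdo_mult (Z t) (pdo_monom (int j))"
proof (induction j)
  case 0 then show ?case by (simp add: pdo_one_eq_monom pdo_one_mult[OF Z_deg_le] pdo_mult_one[OF Z_deg_le])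
next
  case (Suc j)
  have LZ: "pdo_mult (L t) (Z t) = pdo_mult (Z t) (pdo_monom 1)"
  proof -
    have "pdo_mult (L t) (Z t) = pdo_mult (pdo_mult (Z t) (pdo_monom 1)) (pdo_mult (Zi t) (Z t))"
      unfolding Lax_eq by (rule pdo_mult_assoc[OF pdo_deg_le_mult[OF Z_deg_le pdo_deg_le_monom] Zi_deg_le Z_deg_le])
    also have "\<dots> = pdo_mult (Z t) (pdo_monom 1)"
      by (simp add: Zi_mult_Z pdo_mult_one[OF pdo_deg_le_mult[OF Z_deg_le pdo_deg_le_monom]])
    finally show ?thesis .
  qed
  have "pdo_mult (pdo_pow (L t) (Suc j)) (Z t) = pdo_mult (pdo_pow (L t) j) (pdo_mult (L t) (Z t))"
    by (simp add: pdo_mult_assoc[OF L_pow_deg_le L_deg_le Z_deg_le])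
  also have "\<dots> = pdo_mult (pdo_mult (pdo_pow (L t) j) (Z t)) (pdo_monom 1)"
    unfolding LZ by (rule pdo_mult_assoc[OF L_pow_deg_le Z_deg_le pdo_deg_le_monom, symmetric])
  also have "\<dots> = pdo_mult (Z t) (pdo_mult (pdo_monom (int j)) (pdo_monom 1))"
    unfolding Suc by (rule pdo_mult_assoc[OF Z_deg_le pdo_deg_le_monom pdo_deg_le_monom])
  also have "\<dots> = pdo_mult (Z t) (pdo_monom (int (Suc j)))"
    by (simp add: pdo_monom_mult_monom algebra_simps)
  finally show ?case .
qed

lemma what_eq_pdo_act_Z: "what Z t n = pdo_act (Z t) n"
  by (rule what_eq_pdo_act) (rule Z_pos_eq_0)

lemma what_nth: "fls_nth (what Z s a) c = (\<Sum>x\<in>{0..c + a}. Z s (- x) a * fls_nth (onepl a) (c - x))"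
  by (simp add: what_eq_pdo_act_Z pdo_act_nth[OF Z_deg_le])

lemma what_nth_below: "c < - a \<Longrightarrow> fls_nth (what Z s a) c = 0"
  by (simp add: what_eq_pdo_act_Z pdo_act_nth_below[OF Z_deg_le])

lemma what_nth_lowest: "fls_nth (what Z s a) (- a) = Z s 0 a"
  by (simp add: what_nth onepl_nth)

lemma has_pd_Z: "1 \<le> j \<Longrightarrow> has_pd j (\<lambda>s. Z s k n) t (- pdo_mult (Lneg j t) (Z t) k n)"
proof -
  assume j: "1 \<le> j"
  have "pdiff j (\<lambda>s. Z s k n) t" and "pd j (\<lambda>s. Z s k n) t = - pdo_mult (Lneg j t) (Z t) k n"
    using dress j by (auto simp: dmKP_dressing_def)
  then show ?thesis using pdiff_has_pd by fastforce
qed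

lemma pd_fls_what:
  assumes j: "1 \<le> j"
  shows "pd_fls j (what Z) t a = - pdo_act (pdo_mult (Lneg j t) (Z t)) a"
proof (rule fls_eqI)
  fix c
  have LnZ: "pdo_deg_le (pdo_mult (Lneg j t) (Z t)) 0" using pdo_deg_le_mult[OF Lneg_deg_le Z_deg_le] by simp
  have "has_pd j (\<lambda>s. \<Sum>x\<in>{0..c + a}. Z s (- x) a * fls_nth (onepl a) (c - x)) t
      (\<Sum>x\<in>{0..c + a}. - pdo_mult (Lneg j t) (Z t) (- x) a * fls_nth (onepl a) (c - x) + Z t (- x) a * 0)"
    by (intro has_pd_sum has_pd_mult has_pd_Z[OF j] has_pd_const) auto
  then have "has_pd j (\<lambda>s. fls_nth (what Z s a) c) t (fls_nth (- pdo_act (pdo_mult (Lneg j t) (Z t)) a) c)"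
    by (intro has_pd_cong[OF what_nth]) (simp add: pdo_act_nth[OF LnZ] sum_negf)
  then show "fls_nth (pd_fls j (what Z) t a) c = fls_nth (- pdo_act (pdo_mult (Lneg j t) (Z t)) a) c"
    unfolding pd_fls_eq_pd_series by (simp add: pd_series_nth[where d = "- a"] what_nth_below has_pdD(2))
qed

lemma pdo_act_L_pow_mult_Z:
  "pdo_act (pdo_mult (pdo_pow (L t) j) (Z t)) a
     = pdo_act (pdo_mult (Lpos j t) (Z t)) a + pdo_act (pdo_mult (Lneg j t) (Z t)) a"
proof -
  have LpZ: "pdo_deg_le (pdo_mult (Lpos j t) (Z t)) (int j)" using pdo_deg_le_mult[OF Lpos_deg_le Z_deg_le] by simp
  have LnZ: "pdo_deg_le (pdo_mult (Lneg j t) (Z t)) (int j)"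
    using pdo_deg_le_mult[OF Lneg_deg_le Z_deg_le] by (rule pdo_deg_le_mono) simp
  have "pdo_mult (pdo_pow (L t) j) (Z t) k n = pdo_mult (Lpos j t) (Z t) k n + pdo_mult (Lneg j t) (Z t) k n" for k n
    by (subst pdo_pos_add_nonpos[symmetric], rule pdo_mult_add_left[OF Lpos_deg_le pdo_deg_le_mono[OF Lneg_deg_le] Z_deg_le]) simp
  then have "pdo_mult (pdo_pow (L t) j) (Z t) = (\<lambda>k n. pdo_mult (Lpos j t) (Z t) k n + pdo_mult (Lneg j t) (Z t) k n)"
    by (intro ext)
  then show ?thesis by (simp add: pdo_act_add[OF LpZ LnZ])
qed

theorem Dtw_what:
  assumes j: "1 \<le> j"
  shows "Dtw 1 j (what Z) t a = pdo_apply (pdo_map fls_const (Lpos j t)) (what Z t) a"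
proof -
  have "Dtw 1 j (what Z) t a = - pdo_act (pdo_mult (Lneg j t) (Z t)) a + fls_X_inv ^ j * pdo_act (Z t) a"
    by (simp add: Dtw_def pd_fls_what[OF j] what_eq_pdo_act_Z)
  also have "fls_X_inv ^ j * pdo_act (Z t) a = pdo_act (pdo_mult (pdo_pow (L t) j) (Z t)) a"
    by (simp add: L_pow_mult_Z pdo_act_mult_monom[OF Z_deg_le])
  finally have "Dtw 1 j (what Z) t a = pdo_act (pdo_mult (Lpos j t) (Z t)) a"
    by (simp add: pdo_act_L_pow_mult_Z)
  also have "\<dots> = pdo_apply (pdo_map fls_const (Lpos j t)) (pdo_act (Z t)) a"
    by (rule pdo_act_mult[OF Lpos_deg_le _ Z_deg_le]) (auto simp: Lpos_nonpos_eq_0)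
  finally show ?thesis by (simp add: what_eq_pdo_act_Z[abs_def])
qed

lemma wstarhat_eq: "wstarhat Zi t b = adj_act_neg (\<lambda>k m. if k \<le> -1 then Zi t (k + 1) (m - 1) else 0) b"
  by (simp add: wstarhat_def)

lemma wstarhat_coeffs_deg_le: "pdo_deg_le (\<lambda>k m. if k \<le> -1 then Zi t (k + 1) (m - 1) else 0) (-1)"
  by (simp add: pdo_deg_le_def)

lemma wstarhat_nth_below: "c < b + 1 \<Longrightarrow> fls_nth (wstarhat Zi t b) c = 0"
  unfolding wstarhat_eq by (rule adj_act_neg_nth_below[OF wstarhat_coeffs_deg_le])

lemma res_what_wstarhat: "fls_nth (what Z t a * wstarhat Zi t b) 1 = (if b \<le> a then 1 else 0)"
  unfolding what_eq_pdo_act_Z wstarhat_eq by (rule bilinear_identity[OF Z_deg_le Zi_deg_le Z_mult_Zi])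

definition sq_pot_rhs :: "((nat \<Rightarrow> real) \<Rightarrow> int \<Rightarrow> real fls) \<Rightarrow> ((nat \<Rightarrow> real) \<Rightarrow> int \<Rightarrow> real fls) \<Rightarrow> nat \<Rightarrow> (nat \<Rightarrow> real) \<Rightarrow> real fls pdo" where
  "sq_pot_rhs f g i t = pdo_mult (pdo_mult (pdo_mult (pdo_mult pdo_Gamma pdo_Delta_inv)
                      (pdo_fun (\<lambda>m. g t (m + 1) - g t m)))
                   (pdo_mult (pdo_map fls_const (pdo_pos (pdo_pow (L t) i))) (pdo_fun (f t))))
                 pdo_Delta_inv"

abbreviation sigma_rhs :: "nat \<Rightarrow> (nat \<Rightarrow> real) \<Rightarrow> int \<Rightarrow> int \<Rightarrow> real" where
  "sigma_rhs i t n k \<equiv> fls_nth (pdo_res (sq_pot_rhs (\<lambda>t n. fls_const (\<phi> t n)) (wstarhat Zi) i t) n) k"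

abbreviation rho_rhs :: "nat \<Rightarrow> (nat \<Rightarrow> real) \<Rightarrow> int \<Rightarrow> int \<Rightarrow> real" where
  "rho_rhs i t n k \<equiv> fls_nth (pdo_res (sq_pot_rhs (what Z) (\<lambda>t n. fls_const (\<psi> t n)) i t) n) k"

lemma has_pd_sigma_nth:
  assumes "1 \<le> i"
  shows "has_pd i (\<lambda>s. fls_nth (\<sigma> s n) k) t (sigma_rhs i t n k + fls_nth (\<sigma> t n) (k + int i))"
proof -
  have "pdiff i (\<lambda>s. fls_nth (\<sigma> s n) k) t"
    and "pd i (\<lambda>s. fls_nth (\<sigma> s n) k) t = sigma_rhs i t n k + fls_nth (\<sigma> t n) (k + int i)"
    using S1 assms unfolding sq_pot_def sq_pot_rhs_def by (auto simp: algebra_simps)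
  then show ?thesis using pdiff_has_pd by metis
qed

lemma has_pd_rho_nth:
  assumes "1 \<le> i"
  shows "has_pd i (\<lambda>s. fls_nth (\<rho> s n) k) t (rho_rhs i t n k - fls_nth (\<rho> t n) (k + int i))"
proof -
  have "pdiff i (\<lambda>s. fls_nth (\<rho> s n) k) t"
    and "pd i (\<lambda>s. fls_nth (\<rho> s n) k) t = rho_rhs i t n k - fls_nth (\<rho> t n) (k + int i)"
    using S2 assms unfolding sq_pot_def sq_pot_rhs_def by (auto simp: algebra_simps)
  then show ?thesis using pdiff_has_pd by metis
qed

lemma has_pd_phi: "1 \<le> i \<Longrightarrow> has_pd i (\<lambda>s. \<phi> s n) t (pdo_apply (Lpos i t) (\<phi> t) n)"
  using eig pdiff_has_pd unfolding eigenfunction_def by metis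

lemma has_pd_psi: "1 \<le> i \<Longrightarrow> has_pd i (\<lambda>s. \<psi> s n) t (- adj_conj_apply (Lpos i t) (\<psi> t) n)"
  using adj pdiff_has_pd unfolding adjoint_eigenfunction_def by metis

lemma sigma_diff: "\<sigma> t (n + 1) - \<sigma> t n = fls_const (\<phi> t n) * (wstarhat Zi t (n + 1) - wstarhat Zi t n)"
  using S1 unfolding sq_pot_def by auto

lemma rho_diff: "\<rho> t (n + 1) - \<rho> t n = what Z t n * (fls_const (\<psi> t (n + 1)) - fls_const (\<psi> t n))"
  using S2 unfolding sq_pot_def by auto

lemma sigma_bounded_below: "\<exists>d. \<forall>t k. k < d \<longrightarrow> fls_nth (\<sigma> t n) k = 0"
  using S1 unfolding sq_pot_def by auto

lemma rho_bounded_below: "\<exists>d. \<forall>t k. k < d \<longrightarrow> fls_nth (\<rho> t n) k = 0"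
  using S2 unfolding sq_pot_def by auto

text \<open>The class is closed under every
  \<open>\<partial>\<^sub>t\<^sub>j\<close> (\<open>admissible_has_pd\<close>), which is how the iterated \<open>t'\<close>-derivatives in the theorem are
  shown to exist.\<close>
inductive admissible :: "((nat \<Rightarrow> real) \<Rightarrow> real) \<Rightarrow> bool" where
  adm_Z: "admissible (\<lambda>t. Z t k n)"
| adm_Z0_inverse: "admissible (\<lambda>t. inverse (Z t 0 n))"
| adm_phi: "admissible (\<lambda>t. \<phi> t n)"
| adm_psi: "admissible (\<lambda>t. \<psi> t n)"
| adm_sigma: "admissible (\<lambda>t. fls_nth (\<sigma> t n) c)"
| adm_rho: "admissible (\<lambda>t. fls_nth (\<rho> t n) c)"
| adm_const: "admissible (\<lambda>t. c)"
| adm_add: "admissible f \<Longrightarrow> admissible g \<Longrightarrow> admissible (\<lambda>t. f t + g t)"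
| adm_mult: "admissible f \<Longrightarrow> admissible g \<Longrightarrow> admissible (\<lambda>t. f t * g t)"

lemma admissible_neg: "admissible f \<Longrightarrow> admissible (\<lambda>t. - f t)"
  using adm_mult[OF adm_const[of "-1"]] by simp

lemma admissible_diff: "admissible f \<Longrightarrow> admissible g \<Longrightarrow> admissible (\<lambda>t. f t - g t)"
  using adm_add[OF _ admissible_neg] by simp

lemma admissible_sum: "finite S \<Longrightarrow> (\<And>x. x \<in> S \<Longrightarrow> admissible (f x)) \<Longrightarrow> admissible (\<lambda>t. \<Sum>x\<in>S. f x t)"
proof (induction S rule: finite_induct)
  case empty then show ?case by (simp add: adm_const)
next
  case (insert x S) then show ?case by (simp add: adm_add)
qed

lemma admissible_fdiff: "(\<And>m. admissible (\<lambda>t. g t m)) \<Longrightarrow> admissible (\<lambda>t. fdiff r (g t) x)"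
  unfolding fdiff_def by (intro admissible_sum adm_mult adm_const) auto

lemma admissible_bdiff: "(\<And>m. admissible (\<lambda>t. g t m)) \<Longrightarrow> admissible (\<lambda>t. bdiff r (g t) x)"
  unfolding bdiff_def by (intro admissible_sum adm_mult adm_const) auto

definition admissible_pdo :: "((nat \<Rightarrow> real) \<Rightarrow> real pdo) \<Rightarrow> int \<Rightarrow> bool" where
  "admissible_pdo A d \<longleftrightarrow> (\<forall>t. pdo_deg_le (A t) d) \<and> (\<forall>k n. admissible (\<lambda>t. A t k n))"

lemma admissible_pdo_mult:
  assumes A: "admissible_pdo A a" and B: "admissible_pdo B b"
  shows "admissible_pdo (\<lambda>t. pdo_mult (A t) (B t)) (a + b)"
  unfolding admissible_pdo_def
proof (intro conjI allI)
  fix t show "pdo_deg_le (pdo_mult (A t) (B t)) (a + b)" using A B by (intro pdo_deg_le_mult) (auto simp: admissible_pdo_def)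
next
  fix k n
  have e: "pdo_mult (A t) (B t) k n = pdo_mult_sum (A t) (B t) a b k n" for t
    using A B by (intro pdo_mult_eq_sum) (auto simp: admissible_pdo_def)
  show "admissible (\<lambda>t. pdo_mult (A t) (B t) k n)"
    unfolding e pdo_mult_sum_def pdo_mult_term_def using A B
    by (intro admissible_sum adm_mult adm_const admissible_fdiff) (auto simp: admissible_pdo_def)
qed

lemma admissible_pdo_const: "pdo_deg_le A d \<Longrightarrow> admissible_pdo (\<lambda>t. A) d"
  by (simp add: admissible_pdo_def adm_const)

lemma admissible_pdo_Z: "admissible_pdo Z 0"
  by (simp add: admissible_pdo_def Z_deg_le adm_Z)

text \<open>Solving \<open>Zi Z = 1\<close> for the coefficient of \<open>\<Delta>\<^sup>-\<^sup>K\<close> expresses it through \<open>z\<^sub>0\<^sup>-\<^sup>1\<close> and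
  coefficients of \<open>Zi\<close> of lower order.\<close>
lemma admissible_Zi_neg: "admissible (\<lambda>t. Zi t (- int K) n)"
proof (induction K arbitrary: n rule: less_induct)
  case (less K)
  define Sg where "Sg = Sigma {0..K} (\<lambda>r. {- int K + int r..0})"
  have fin: "finite Sg" by (simp add: Sg_def)
  have mem: "(0, - int K) \<in> Sg" by (simp add: Sg_def)
  define Rest where "Rest t = (\<Sum>ri\<in>Sg - {(0, - int K)}. pdo_mult_term (Zi t) (Z t) (- int K) n (fst ri) (snd ri))" for t
  have eq: "Zi t (- int K) n * Z t 0 (n - int K) + Rest t = (if K = 0 then 1 else 0)" for t
  proof -
    have "pdo_mult (Zi t) (Z t) (- int K) n = (if K = 0 then 1 else 0)"
      using Zi_mult_Z[of t] by (simp add: pdo_monom_def)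
    moreover have "pdo_mult (Zi t) (Z t) (- int K) n = (\<Sum>ri\<in>Sg. pdo_mult_term (Zi t) (Z t) (- int K) n (fst ri) (snd ri))"
      unfolding pdo_mult_eq_sum[OF Zi_deg_le Z_deg_le] pdo_mult_sum_Sigma Sg_def by (simp add: case_prod_beta')
    moreover have "(\<Sum>ri\<in>Sg. pdo_mult_term (Zi t) (Z t) (- int K) n (fst ri) (snd ri))
        = pdo_mult_term (Zi t) (Z t) (- int K) n 0 (- int K) + Rest t"
      unfolding Rest_def using sum.remove[OF fin mem, of "\<lambda>ri. pdo_mult_term (Zi t) (Z t) (- int K) n (fst ri) (snd ri)"] by simp
    moreover have "pdo_mult_term (Zi t) (Z t) (- int K) n 0 (- int K) = Zi t (- int K) n * Z t 0 (n - int K)"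
      by (simp add: pdo_mult_term_def)
    ultimately show ?thesis by simp
  qed
  have "Zi t (- int K) n = ((if K = 0 then 1 else 0) - Rest t) * inverse (Z t 0 (n - int K))" for t
    using eq[of t] Z0_nonzero[of t "n - int K"] by (simp add: field_simps)
  then have fe: "(\<lambda>t. Zi t (- int K) n) = (\<lambda>t. ((if K = 0 then 1 else 0) - Rest t) * inverse (Z t 0 (n - int K)))"
    by (intro ext)
  have gR: "admissible Rest"
    unfolding Rest_def[abs_def]
  proof (intro admissible_sum)
    fix ri assume ri: "ri \<in> Sg - {(0, - int K)}"
    obtain r i where rip: "ri = (r, i)" by fastforce
    have i: "i \<le> 0" "i > - int K" using ri rip by (auto simp: Sg_def)
    then have "i = - int (nat (- i))" "nat (- i) < K" by auto
    then have gi: "admissible (\<lambda>t. Zi t i n)" using less[of "nat (- i)" n] by simp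
    show "admissible (\<lambda>t. pdo_mult_term (Zi t) (Z t) (- int K) n (fst ri) (snd ri))"
      unfolding rip pdo_mult_term_def by (simp, intro adm_mult gi adm_const admissible_fdiff adm_Z)
  qed (use fin in auto)
  show ?case unfolding fe by (intro adm_mult admissible_diff adm_const gR adm_Z0_inverse)
qed

lemma admissible_Zi: "admissible (\<lambda>t. Zi t k n)"
proof (cases "k > 0")
  case True then show ?thesis using Zi_pos_eq_0 adm_const[of 0] by simp
next
  case False
  then have "k = - int (nat (- k))" by simp
  then show ?thesis using admissible_Zi_neg[of "nat (- k)" n] by simp
qed

lemma admissible_pdo_Zi: "admissible_pdo Zi 0"
  by (simp add: admissible_pdo_def Zi_deg_le admissible_Zi)

lemma admissible_pdo_L: "admissible_pdo L 1"
  unfolding Lax_eq[abs_def] using admissible_pdo_mult[OF admissible_pdo_mult[OF admissible_pdo_Z admissible_pdo_const[OF pdo_deg_le_monom]] admissible_pdo_Zi] by simp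

lemma admissible_pdo_L_pow: "admissible_pdo (\<lambda>t. pdo_pow (L t) j) (int j)"
proof (induction j)
  case 0 then show ?case by (simp add: pdo_one_eq_monom admissible_pdo_const pdo_deg_le_monom)
next
  case (Suc j)
  show ?case using admissible_pdo_mult[OF Suc admissible_pdo_L] by (simp add: algebra_simps)
qed

lemma admissible_pdo_pos: assumes "admissible_pdo A d" shows "admissible_pdo (\<lambda>t. pdo_pos (A t)) d"
  unfolding admissible_pdo_def
proof (intro conjI allI)
  fix t show "pdo_deg_le (pdo_pos (A t)) d" using assms by (simp add: admissible_pdo_def pdo_deg_le_pos)
next
  fix k n show "admissible (\<lambda>t. pdo_pos (A t) k n)"
    using assms by (cases "1 \<le> k") (simp_all add: admissible_pdo_def pdo_pos_def adm_const)
qed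

lemma admissible_pdo_nonpos: assumes "admissible_pdo A d" shows "admissible_pdo (\<lambda>t. pdo_nonpos (A t)) 0"
  unfolding admissible_pdo_def
proof (intro conjI allI)
  fix t show "pdo_deg_le (pdo_nonpos (A t)) 0" by (rule pdo_deg_le_nonpos)
next
  fix k n show "admissible (\<lambda>t. pdo_nonpos (A t) k n)"
    using assms by (cases "k \<le> 0") (simp_all add: admissible_pdo_def pdo_nonpos_def adm_const)
qed

lemma admissible_pdo_Lpos: "admissible_pdo (Lpos j) (int j)"
  using admissible_pdo_pos[OF admissible_pdo_L_pow] .

lemma admissible_pdo_Lneg: "admissible_pdo (Lneg j) 0"
  using admissible_pdo_nonpos[OF admissible_pdo_L_pow] .

lemma admissible_pdo_apply:
  assumes A: "admissible_pdo A d" and f: "\<And>m. admissible (\<lambda>t. f t m)"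
  shows "admissible (\<lambda>t. pdo_apply (A t) (f t) n)"
proof -
  have e: "pdo_apply (A t) (f t) n = (\<Sum>k\<in>{0..nat d}. A t (int k) n * fdiff k (f t) n)" for t
    using A by (intro pdo_apply_eq) (auto simp: admissible_pdo_def)
  show ?thesis unfolding e using A f by (intro admissible_sum adm_mult admissible_fdiff) (auto simp: admissible_pdo_def)
qed

lemma admissible_adj_conj_apply:
  assumes A: "admissible_pdo A d" and f: "\<And>m. admissible (\<lambda>t. f t m)"
  shows "admissible (\<lambda>t. adj_conj_apply (A t) (f t) n)"
proof -
  have e: "adj_conj_apply (A t) (f t) n = (\<Sum>k\<in>{1..nat d}. (-1) ^ k * fdiff (k - 1) (\<lambda>m. A t (int k) m * (f t (m + 1) - f t m)) (n - int k))" for t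
    using A by (intro adj_conj_apply_eq) (auto simp: admissible_pdo_def)
  show ?thesis unfolding e using A f
    by (intro admissible_sum adm_mult adm_const admissible_fdiff admissible_diff) (auto simp: admissible_pdo_def)
qed

definition admissible_fls :: "((nat \<Rightarrow> real) \<Rightarrow> real fls) \<Rightarrow> bool" where
  "admissible_fls F \<longleftrightarrow> (\<exists>d. \<forall>t c. c < d \<longrightarrow> fls_nth (F t) c = 0) \<and> (\<forall>c. admissible (\<lambda>t. fls_nth (F t) c))"

lemma admissible_flsI: "(\<And>t c. c < d \<Longrightarrow> fls_nth (F t) c = 0) \<Longrightarrow> (\<And>c. admissible (\<lambda>t. fls_nth (F t) c)) \<Longrightarrow> admissible_fls F"
  unfolding admissible_fls_def by blast

lemma admissible_fls_bounded_below: "admissible_fls F \<Longrightarrow> \<exists>d. \<forall>t c. c < d \<longrightarrow> fls_nth (F t) c = 0"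
  by (simp add: admissible_fls_def)

lemma admissible_fls_nth: "admissible_fls F \<Longrightarrow> admissible (\<lambda>t. fls_nth (F t) c)"
  by (simp add: admissible_fls_def)

lemma admissible_fls_mult:
  assumes F: "admissible_fls F" and H: "admissible_fls H"
  shows "admissible_fls (\<lambda>t. F t * H t)"
proof -
  obtain a where a: "\<And>t c. c < a \<Longrightarrow> fls_nth (F t) c = 0" using admissible_fls_bounded_below[OF F] by blast
  obtain b where b: "\<And>t c. c < b \<Longrightarrow> fls_nth (H t) c = 0" using admissible_fls_bounded_below[OF H] by blast
  have e: "fls_nth (F t * H t) c = (\<Sum>x\<in>{a..c - b}. fls_nth (F t) x * fls_nth (H t) (c - x))" for t c
    by (rule fls_mult_nth_bounded) (auto simp: a b)
  show ?thesis
  proof (rule admissible_flsI[where d = "a + b"])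
    fix t c assume "c < a + b" then show "fls_nth (F t * H t) c = 0" by (simp add: e)
  next
    fix c show "admissible (\<lambda>t. fls_nth (F t * H t) c)"
      unfolding e by (intro admissible_sum adm_mult admissible_fls_nth[OF F] admissible_fls_nth[OF H]) auto
  qed
qed

lemma admissible_fls_add:
  assumes F: "admissible_fls F" and H: "admissible_fls H"
  shows "admissible_fls (\<lambda>t. F t + H t)"
proof -
  obtain a where a: "\<And>t c. c < a \<Longrightarrow> fls_nth (F t) c = 0" using admissible_fls_bounded_below[OF F] by blast
  obtain b where b: "\<And>t c. c < b \<Longrightarrow> fls_nth (H t) c = 0" using admissible_fls_bounded_below[OF H] by blast
  show ?thesis
    by (rule admissible_flsI[where d = "min a b"]) (auto simp: a b intro: adm_add admissible_fls_nth[OF F] admissible_fls_nth[OF H])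
qed

lemma admissible_fls_const: "admissible_fls (\<lambda>t. K)"
  by (rule admissible_flsI[where d = "fls_subdegree K"]) (auto simp: fls_eq0_below_subdegree adm_const)

lemma admissible_fls_diff:
  assumes F: "admissible_fls F" and H: "admissible_fls H"
  shows "admissible_fls (\<lambda>t. F t - H t)"
  using admissible_fls_add[OF F admissible_fls_mult[OF admissible_fls_const[of "-1"] H]] by simp

lemma admissible_fls_sum: "finite S \<Longrightarrow> (\<And>x. x \<in> S \<Longrightarrow> admissible_fls (F x)) \<Longrightarrow> admissible_fls (\<lambda>t. \<Sum>x\<in>S. F x t)"
proof (induction S rule: finite_induct)
  case empty then show ?case using admissible_fls_const[of 0] by simp
next
  case (insert x S) then show ?case by (simp add: admissible_fls_add)
qed

lemma admissible_fls_fls_const: assumes "admissible f" shows "admissible_fls (\<lambda>t. fls_const (f t))"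
proof (rule admissible_flsI[where d = 0])
  fix t and c :: int assume "c < 0" then show "fls_nth (fls_const (f t)) c = 0" by simp
next
  fix c :: int show "admissible (\<lambda>t. fls_nth (fls_const (f t)) c)"
    using assms by (cases "c = 0") (simp_all add: adm_const)
qed

lemma admissible_fls_fdiff: "(\<And>m. admissible_fls (\<lambda>t. g t m)) \<Longrightarrow> admissible_fls (\<lambda>t. fdiff r (g t) x)"
  unfolding fdiff_def by (intro admissible_fls_sum admissible_fls_mult admissible_fls_const) auto

lemma admissible_fls_what: "admissible_fls (\<lambda>t. what Z t a)"
  by (rule admissible_flsI[where d = "- a"]) (auto simp: what_nth_below what_nth intro!: admissible_sum adm_mult adm_Z adm_const)

lemma admissible_fls_adj_neg_series:
  assumes C: "\<And>k m. k \<le> -1 \<Longrightarrow> admissible (\<lambda>t. C t k m)"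
  shows "admissible_fls (\<lambda>t. adj_neg_series (C t) b)"
proof (rule admissible_flsI[where d = 0])
  fix c
  have "admissible (\<lambda>t. \<Sum>k\<in>{- c .. -1}. of_int (ibinom k (nat (k + c))) * bdiff (nat (k + c)) (C t k) (b + c))"
    by (intro admissible_sum adm_mult adm_const admissible_bdiff C) auto
  then show "admissible (\<lambda>t. fls_nth (adj_neg_series (C t) b) c)"
    by (cases "c \<le> 0") (simp_all add: adj_neg_series_nth adm_const)
qed (simp add: adj_neg_series_nth)

lemma admissible_fls_wstarhat: "admissible_fls (\<lambda>t. wstarhat Zi t b)"
  unfolding wstarhat_eq adj_act_neg_eq
  by (intro admissible_fls_mult admissible_fls_const admissible_fls_adj_neg_series) (simp add: admissible_Zi)

definition admissible_fls_pdo :: "((nat \<Rightarrow> real) \<Rightarrow> real fls pdo) \<Rightarrow> int \<Rightarrow> bool" where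
  "admissible_fls_pdo A d \<longleftrightarrow> (\<forall>t. pdo_deg_le (A t) d) \<and> (\<forall>k n. admissible_fls (\<lambda>t. A t k n))"

lemma admissible_fls_pdo_mult:
  assumes A: "admissible_fls_pdo A a" and B: "admissible_fls_pdo B b"
  shows "admissible_fls_pdo (\<lambda>t. pdo_mult (A t) (B t)) (a + b)"
  unfolding admissible_fls_pdo_def
proof (intro conjI allI)
  fix t show "pdo_deg_le (pdo_mult (A t) (B t)) (a + b)" using A B by (intro pdo_deg_le_mult) (auto simp: admissible_fls_pdo_def)
next
  fix k n
  have e: "pdo_mult (A t) (B t) k n = pdo_mult_sum (A t) (B t) a b k n" for t
    using A B by (intro pdo_mult_eq_sum) (auto simp: admissible_fls_pdo_def)
  show "admissible_fls (\<lambda>t. pdo_mult (A t) (B t) k n)"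
    unfolding e pdo_mult_sum_def pdo_mult_term_def using A B
    by (intro admissible_fls_sum admissible_fls_mult admissible_fls_const admissible_fls_fdiff) (auto simp: admissible_fls_pdo_def)
qed

lemma admissible_fls_pdo_const: "pdo_deg_le A d \<Longrightarrow> admissible_fls_pdo (\<lambda>t. A) d"
  by (simp add: admissible_fls_pdo_def admissible_fls_const)

lemma admissible_fls_pdo_fun: "(\<And>m. admissible_fls (\<lambda>t. F t m)) \<Longrightarrow> admissible_fls_pdo (\<lambda>t. pdo_fun (F t)) 0"
  unfolding admissible_fls_pdo_def
proof (intro conjI allI)
  fix t show "pdo_deg_le (pdo_fun (F t)) 0" by (simp add: pdo_deg_le_def pdo_fun_def)
next
  fix k n assume "\<And>m. admissible_fls (\<lambda>t. F t m)"
  then show "admissible_fls (\<lambda>t. pdo_fun (F t) k n)"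
    by (cases "k = 0") (simp_all add: pdo_fun_def admissible_fls_const)
qed

lemma admissible_fls_pdo_map: "admissible_pdo A d \<Longrightarrow> admissible_fls_pdo (\<lambda>t. pdo_map fls_const (A t)) d"
  by (auto simp: admissible_fls_pdo_def admissible_pdo_def pdo_deg_le_map pdo_map_def intro: admissible_fls_fls_const)

lemma admissible_fls_pdo_sq_pot_rhs:
  assumes f: "\<And>m. admissible_fls (\<lambda>t. f t m)" and g: "\<And>m. admissible_fls (\<lambda>t. g t m)"
  shows "admissible_fls_pdo (sq_pot_rhs f g i) (int i - 1)"
proof -
  have 1: "admissible_fls_pdo (\<lambda>t. pdo_mult pdo_Gamma pdo_Delta_inv) 0"
    using admissible_fls_pdo_const[OF pdo_deg_le_mult[OF pdo_deg_le_Gamma pdo_deg_le_monom[of "-1"]]] by (simp add: pdo_Delta_inv_eq_monom)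
  have 2: "admissible_fls_pdo (\<lambda>t. pdo_fun (\<lambda>m. g t (m + 1) - g t m)) 0" by (intro admissible_fls_pdo_fun admissible_fls_diff g)
  have 3: "admissible_fls_pdo (\<lambda>t. pdo_mult (pdo_map fls_const (pdo_pos (pdo_pow (L t) i))) (pdo_fun (f t))) (int i)"
    using admissible_fls_pdo_mult[OF admissible_fls_pdo_map[OF admissible_pdo_Lpos] admissible_fls_pdo_fun[OF f]] by simp
  have 4: "admissible_fls_pdo (\<lambda>t. pdo_Delta_inv :: real fls pdo) (-1)"
    by (simp add: pdo_Delta_inv_eq_monom admissible_fls_pdo_const pdo_deg_le_monom)
  show ?thesis unfolding sq_pot_rhs_def[abs_def]
    using admissible_fls_pdo_mult[OF admissible_fls_pdo_mult[OF admissible_fls_pdo_mult[OF 1 2] 3] 4] by simp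
qed

lemma admissible_sq_pot_rhs_res:
  assumes f: "\<And>m. admissible_fls (\<lambda>t. f t m)" and g: "\<And>m. admissible_fls (\<lambda>t. g t m)"
  shows "admissible (\<lambda>t. fls_nth (pdo_res (sq_pot_rhs f g i t) n) c)"
  using admissible_fls_pdo_sq_pot_rhs[OF f g, where i = i] unfolding admissible_fls_pdo_def pdo_res_def by (auto intro: admissible_fls_nth)

lemma admissible_sq_pot_rhs_sigma: "admissible (\<lambda>t. fls_nth (pdo_res (sq_pot_rhs (\<lambda>t n. fls_const (\<phi> t n)) (wstarhat Zi) i t) n) c)"
  by (rule admissible_sq_pot_rhs_res) (auto intro: admissible_fls_fls_const adm_phi admissible_fls_wstarhat)

lemma admissible_sq_pot_rhs_rho: "admissible (\<lambda>t. fls_nth (pdo_res (sq_pot_rhs (what Z) (\<lambda>t n. fls_const (\<psi> t n)) i t) n) c)"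
  by (rule admissible_sq_pot_rhs_res) (auto intro: admissible_fls_fls_const adm_psi admissible_fls_what)

lemma admissible_Lneg_mult_Z: "admissible (\<lambda>t. pdo_mult (Lneg j t) (Z t) k n)"
  using admissible_pdo_mult[OF admissible_pdo_Lneg admissible_pdo_Z] by (simp add: admissible_pdo_def)

lemma admissible_has_pd:
  assumes "admissible f" and j: "1 \<le> j"
  shows "\<exists>D. admissible D \<and> (\<forall>t. has_pd j f t (D t))"
  using assms(1)
proof (induction rule: admissible.induct)
  case (adm_Z k n)
  show ?case using has_pd_Z[OF j] by (blast intro: admissible_neg admissible_Lneg_mult_Z)
next
  case (adm_Z0_inverse n)
  have "has_pd j (\<lambda>t. inverse (Z t 0 n)) t (- ((- pdo_mult (Lneg j t) (Z t) 0 n) * inverse (Z t 0 n) ^ 2))" for t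
    by (rule has_pd_inverse[OF has_pd_Z[OF j] Z0_nonzero])
  moreover have "admissible (\<lambda>t. - ((- pdo_mult (Lneg j t) (Z t) 0 n) * inverse (Z t 0 n) ^ 2))"
    unfolding power2_eq_square by (intro admissible_neg adm_mult admissible_Lneg_mult_Z admissible.adm_Z0_inverse)
  ultimately show ?case by blast
next
  case (adm_phi n)
  have "admissible (\<lambda>t. pdo_apply (Lpos j t) (\<phi> t) n)"
    by (rule admissible_pdo_apply[OF admissible_pdo_Lpos]) (rule admissible.adm_phi)
  then show ?case using has_pd_phi[OF j] by blast
next
  case (adm_psi n)
  have "admissible (\<lambda>t. adj_conj_apply (Lpos j t) (\<psi> t) n)"
    by (rule admissible_adj_conj_apply[OF admissible_pdo_Lpos]) (rule admissible.adm_psi)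
  then show ?case using has_pd_psi[OF j] by (blast intro: admissible_neg)
next
  case (adm_sigma n c)
  show ?case
    using has_pd_sigma_nth[OF j] by (blast intro: adm_add admissible_sq_pot_rhs_sigma admissible.adm_sigma)
next
  case (adm_rho n c)
  show ?case
    using has_pd_rho_nth[OF j] by (blast intro: admissible_diff admissible_sq_pot_rhs_rho admissible.adm_rho)
next
  case (adm_const c)
  show ?case by (blast intro: admissible.adm_const has_pd_const)
next
  case (adm_add f g)
  then show ?case by (blast intro: admissible.adm_add has_pd_add)
next
  case (adm_mult f g)
  then obtain Df Dg where "admissible Df" "\<And>t. has_pd j f t (Df t)" "admissible Dg" "\<And>t. has_pd j g t (Dg t)" by blast
  then show ?case using adm_mult.hyps
    by (intro exI[of _ "\<lambda>t. Df t * g t + f t * Dg t"]) (auto intro: admissible.adm_add admissible.adm_mult has_pd_mult)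
qed

lemma admissible_pdiff: "admissible f \<Longrightarrow> 1 \<le> j \<Longrightarrow> pdiff j f t"
  using admissible_has_pd has_pdD(1) by blast

lemma admissible_pd: "admissible f \<Longrightarrow> 1 \<le> j \<Longrightarrow> admissible (\<lambda>t. pd j f t)"
proof -
  assume "admissible f" "1 \<le> j"
  then obtain D where D: "admissible D" "\<And>t. has_pd j f t (D t)" using admissible_has_pd by blast
  then have "(\<lambda>t. pd j f t) = D" using has_pdD(2) by blast
  then show ?thesis using D by simp
qed

lemma admissible_fls_sigma: "admissible_fls (\<lambda>t. \<sigma> t n)"
proof -
  obtain d where d: "\<forall>t k. k < d \<longrightarrow> fls_nth (\<sigma> t n) k = 0" using sigma_bounded_below[of n] by blast
  show ?thesis by (rule admissible_flsI[where d = d]) (use d in simp, rule adm_sigma)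
qed

lemma admissible_fls_rho: "admissible_fls (\<lambda>t. \<rho> t n)"
proof -
  obtain d where d: "\<forall>t k. k < d \<longrightarrow> fls_nth (\<rho> t n) k = 0" using rho_bounded_below[of n] by blast
  show ?thesis by (rule admissible_flsI[where d = d]) (use d in simp, rule adm_rho)
qed

lemma admissible_fls_rho_term: "admissible_fls (\<lambda>t. what Z t n * fls_const (\<psi> t n) - \<rho> t n)"
  by (intro admissible_fls_diff admissible_fls_mult admissible_fls_what admissible_fls_fls_const adm_psi admissible_fls_rho)

lemma admissible_fls_Dtw:
  assumes F: "admissible_fls (\<lambda>t. F t n)" and j: "1 \<le> j"
  shows "admissible_fls (\<lambda>t. Dtw e j F t n)"
proof -
  obtain d where d: "\<And>t c. c < d \<Longrightarrow> fls_nth (F t n) c = 0" using admissible_fls_bounded_below[OF F] by blast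
  show ?thesis
  proof (rule admissible_flsI[where d = "d - int j"])
    fix t c assume "c < d - int j" then show "fls_nth (Dtw e j F t n) c = 0" using Dtw_nth_below[of d F n] d by blast
  next
    fix c
    have "(\<lambda>t. fls_nth (Dtw e j F t n) c) = (\<lambda>t. pd j (\<lambda>s. fls_nth (F s n) c) t + e * fls_nth (F t n) (c + int j))"
      by (intro ext Dtw_nth[of d F n, OF d])
    then show "admissible (\<lambda>t. fls_nth (Dtw e j F t n) c)"
      using F j by (simp add: adm_add adm_mult adm_const admissible_pd admissible_fls_nth)
  qed
qed

lemma admissible_fls_Dtw_list:
  assumes "\<forall>i\<in>set is. 1 \<le> i" and "\<And>n. admissible_fls (\<lambda>t. F t n)"
  shows "admissible_fls (\<lambda>t. Dtw_list e is F t n)"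
  using assms
proof (induction "is" arbitrary: n)
  case Nil then show ?case by simp
next
  case (Cons i "is")
  then have "\<And>n. admissible_fls (\<lambda>t. Dtw_list e is F t n)" "1 \<le> i" by auto
  then show ?case by (simp add: admissible_fls_Dtw)
qed

lemma has_pd_res_mult_Dtw:
  assumes W: "admissible_fls (\<lambda>t. W t a)" and V: "admissible_fls (\<lambda>t. V t n)" and j: "1 \<le> j"
  shows "has_pd j (\<lambda>s. fls_nth (W s a * V s n) c) t
           (fls_nth (Dtw e j W t a * V t n) c + fls_nth (W t a * Dtw (- e) j V t n) c)"
proof -
  obtain dW where dW: "\<And>s c. c < dW \<Longrightarrow> fls_nth (W s a) c = 0" using admissible_fls_bounded_below[OF W] by blast
  obtain dV where dV: "\<And>s c. c < dV \<Longrightarrow> fls_nth (V s n) c = 0" using admissible_fls_bounded_below[OF V] by blast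
  have pW: "\<And>c. pdiff j (\<lambda>s. fls_nth (W s a) c) t" by (rule admissible_pdiff[OF admissible_fls_nth[OF W] j])
  have pV: "\<And>c. pdiff j (\<lambda>s. fls_nth (V s n) c) t" by (rule admissible_pdiff[OF admissible_fls_nth[OF V] j])
  show ?thesis
    by (rule has_pd_fls_nth_mult_Dtw[where dW = dW and W = W and a = a and dV = dV and V = V and n = n, OF dW dV pW pV])
qed

lemma sq_pot_rhs_sigma_nth_below:
  assumes c: "c < n"
  shows "fls_nth (pdo_res (sq_pot_rhs (\<lambda>t n. fls_const (\<phi> t n)) (wstarhat Zi) 1 t) n) c = 0"
proof -
  define H where "H = pdo_fun (\<lambda>m. wstarhat Zi t (m + 1) - wstarhat Zi t m)"
  have deg_H: "pdo_deg_le H 0" by (simp add: H_def pdo_deg_le_def pdo_fun_def)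
  have ord_H: "vanishes_below (H k m) (m + k + 1)" for k m
  proof (cases "k = 0")
    case True
    have "vanishes_below (wstarhat Zi t (m + 1)) (m + 1)" by (auto simp: vanishes_below_def wstarhat_nth_below)
    moreover have "vanishes_below (wstarhat Zi t m) (m + 1)" by (auto simp: vanishes_below_def wstarhat_nth_below)
    ultimately show ?thesis using True by (simp add: H_def pdo_fun_def vanishes_below_diff)
  next
    case False then show ?thesis by (simp add: H_def pdo_fun_def vanishes_below_0)
  qed
  define P2 where "P2 = pdo_mult (pdo_mult pdo_Gamma pdo_Delta_inv) H"
  have deg_P2: "pdo_deg_le P2 0" unfolding P2_def using pdo_deg_le_mult[OF pdo_deg_le_Gamma_Delta_inv deg_H] by simp
  have ord_P2: "vanishes_below (P2 k m) (m + k + 1)" for k m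
    unfolding P2_def by (rule vanishes_below_pdo_mult[OF pdo_deg_le_Gamma_Delta_inv deg_H, where oA = "\<lambda>_. 0" and oB = "\<lambda>k m. m + k + 1"]) (auto intro: vanishes_below_Gamma_Delta_inv ord_H)
  define P3 where "P3 = pdo_mult (pdo_map fls_const (Lpos 1 t)) (pdo_fun (\<lambda>m. fls_const (\<phi> t m)))"
  have deg_F: "pdo_deg_le (pdo_fun (\<lambda>m. fls_const (\<phi> t m))) 0" by (simp add: pdo_deg_le_def pdo_fun_def)
  have deg_P3: "pdo_deg_le P3 1" unfolding P3_def using pdo_deg_le_mult[OF pdo_deg_le_map[OF Lpos_deg_le[where j = 1 and t = t]] deg_F] by simp
  have ord_P3: "vanishes_below (P3 k m) 0" for k m
    unfolding P3_def
    by (rule vanishes_below_pdo_mult[OF pdo_deg_le_map[OF Lpos_deg_le] deg_F, where oA = "\<lambda>_. 0" and oB = "\<lambda>_ _. 0"])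
      (auto simp: pdo_map_def pdo_fun_def vanishes_below_fls_const vanishes_below_0)
  define P4 where "P4 = pdo_mult P2 P3"
  have deg_P4: "pdo_deg_le P4 1" unfolding P4_def using pdo_deg_le_mult[OF deg_P2 deg_P3] by simp
  have ord_P4: "vanishes_below (P4 k m) (m + k)" for k m
    unfolding P4_def by (rule vanishes_below_pdo_mult[OF deg_P2 deg_P3, where oA = "\<lambda>i. m + i + 1" and oB = "\<lambda>_ _. 0"]) (auto intro: ord_P2 ord_P3)
  have ord_P5: "vanishes_below (pdo_mult P4 pdo_Delta_inv k m) (m + k + 1)" for k m
    by (rule vanishes_below_pdo_mult[OF deg_P4 pdo_deg_le_Delta_inv, where oA = "\<lambda>i. m + i" and oB = "\<lambda>_ _. 0"]) (auto intro: ord_P4 vanishes_below_Delta_inv)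
  have "sq_pot_rhs (\<lambda>t n. fls_const (\<phi> t n)) (wstarhat Zi) 1 t = pdo_mult P4 pdo_Delta_inv"
    by (simp add: sq_pot_rhs_def P4_def P3_def P2_def H_def)
  then show ?thesis using ord_P5[of "-1" n] c by (simp add: pdo_res_def vanishes_below_def)
qed

lemma sq_pot_rhs_rho_nth_below:
  assumes c: "c < - n - 1"
  shows "fls_nth (pdo_res (sq_pot_rhs (what Z) (\<lambda>t n. fls_const (\<psi> t n)) 1 t) n) c = 0"
proof -
  define H where "H = pdo_fun (\<lambda>m. fls_const (\<psi> t (m + 1)) - fls_const (\<psi> t m))"
  have deg_H: "pdo_deg_le H 0" by (simp add: H_def pdo_deg_le_def pdo_fun_def)
  have ord_H: "vanishes_below (H k m) 0" for k m
    by (simp add: H_def pdo_fun_def vanishes_below_diff vanishes_below_fls_const vanishes_below_0)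
  define P2 where "P2 = pdo_mult (pdo_mult pdo_Gamma pdo_Delta_inv) H"
  have deg_P2: "pdo_deg_le P2 0" unfolding P2_def using pdo_deg_le_mult[OF pdo_deg_le_Gamma_Delta_inv deg_H] by simp
  have ord_P2: "vanishes_below (P2 k m) 0" for k m
    unfolding P2_def by (rule vanishes_below_pdo_mult[OF pdo_deg_le_Gamma_Delta_inv deg_H, where oA = "\<lambda>_. 0" and oB = "\<lambda>_ _. 0"]) (auto intro: vanishes_below_Gamma_Delta_inv ord_H)
  have deg_W: "pdo_deg_le (pdo_fun (what Z t)) 0" by (simp add: pdo_deg_le_def pdo_fun_def)
  have ord_W: "vanishes_below (pdo_fun (what Z t) k m) (- m)" for k m
    by (auto simp: pdo_fun_def vanishes_below_def what_nth_below)
  define P3 where "P3 = pdo_mult (pdo_map fls_const (Lpos 1 t)) (pdo_fun (what Z t))"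
  have deg_P3: "pdo_deg_le P3 1" unfolding P3_def using pdo_deg_le_mult[OF pdo_deg_le_map[OF Lpos_deg_le[where j = 1 and t = t]] deg_W] by simp
  have ord_P3: "vanishes_below (P3 k m) (- m - 1)" for k m
    unfolding P3_def
    by (rule vanishes_below_pdo_mult[OF pdo_deg_le_map[OF Lpos_deg_le] deg_W, where oA = "\<lambda>_. 0" and oB = "\<lambda>k m. - m"])
      (auto simp: pdo_map_def vanishes_below_fls_const intro: ord_W)
  define P4 where "P4 = pdo_mult P2 P3"
  have deg_P4: "pdo_deg_le P4 1" unfolding P4_def using pdo_deg_le_mult[OF deg_P2 deg_P3] by simp
  have ord_P4: "vanishes_below (P4 k m) (- m - 1)" for k m
    unfolding P4_def by (rule vanishes_below_pdo_mult[OF deg_P2 deg_P3, where oA = "\<lambda>_. 0" and oB = "\<lambda>k m. - m - 1"]) (auto intro: ord_P2 ord_P3)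
  have ord_P5: "vanishes_below (pdo_mult P4 pdo_Delta_inv k m) (- m - 1)" for k m
    by (rule vanishes_below_pdo_mult[OF deg_P4 pdo_deg_le_Delta_inv, where oA = "\<lambda>i. - m - 1" and oB = "\<lambda>_ _. 0"]) (auto intro: ord_P4 vanishes_below_Delta_inv)
  have "sq_pot_rhs (what Z) (\<lambda>t n. fls_const (\<psi> t n)) 1 t = pdo_mult P4 pdo_Delta_inv"
    by (simp add: sq_pot_rhs_def P4_def P3_def P2_def H_def)
  then show ?thesis using ord_P5[of "-1" n] c by (simp add: pdo_res_def vanishes_below_def)
qed

text \<open>The \<open>t\<^sub>1\<close>-flow of a potential expresses coefficient \<open>k + 1\<close> through \<open>\<partial>\<^sub>t\<^sub>1\<close> of coefficient \<open>k\<close>,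
  up to a right-hand side that vanishes in low degrees.\<close>
lemma sigma_nth_below:
  assumes c: "c \<le> n"
  shows "fls_nth (\<sigma> t n) c = 0"
proof -
  obtain d where "\<forall>t k. k < d \<longrightarrow> fls_nth (\<sigma> t n) k = 0" using sigma_bounded_below[of n] by blast
  moreover have "fls_nth (\<sigma> t n) (k + 1) = 1 * pd 1 (\<lambda>s. fls_nth (\<sigma> s n) k) t" if "k < n" for t k
    using has_pdD(2)[OF has_pd_sigma_nth[of 1 n k t]] sq_pot_rhs_sigma_nth_below[OF that, of t] by simp
  ultimately show ?thesis using vanish_by_recursion[where F = "\<lambda>t k. fls_nth (\<sigma> t n) k", OF _ _ c] by blast
qed

lemma rho_nth_below:
  assumes c: "c < - n"
  shows "fls_nth (\<rho> t n) c = 0"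
proof -
  obtain d where "\<forall>t k. k < d \<longrightarrow> fls_nth (\<rho> t n) k = 0" using rho_bounded_below[of n] by blast
  moreover have "fls_nth (\<rho> t n) (k + 1) = -1 * pd 1 (\<lambda>s. fls_nth (\<rho> s n) k) t" if "k < - n - 1" for t k
    using has_pdD(2)[OF has_pd_rho_nth[of 1 n k t]] sq_pot_rhs_rho_nth_below[OF that, of t] by simp
  moreover have "c \<le> - n - 1" using c by simp
  ultimately show ?thesis using vanish_by_recursion[where F = "\<lambda>t k. fls_nth (\<rho> t n) k"] by blast
qed

lemma res_what_sigma_diff:
  "fls_nth (what Z t a * \<sigma> t (m + 1)) 1 - fls_nth (what Z t a * \<sigma> t m) 1
   = \<phi> t m * (fls_nth (what Z t a * wstarhat Zi t (m + 1)) 1 - fls_nth (what Z t a * wstarhat Zi t m) 1)"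
proof -
  have "what Z t a * \<sigma> t (m + 1) - what Z t a * \<sigma> t m = what Z t a * (\<sigma> t (m + 1) - \<sigma> t m)"
    by (simp add: right_diff_distrib)
  also have "\<dots> = what Z t a * (fls_const (\<phi> t m) * (wstarhat Zi t (m + 1) - wstarhat Zi t m))"
    by (simp only: sigma_diff)
  also have "\<dots> = fls_const (\<phi> t m) * (what Z t a * wstarhat Zi t (m + 1) - what Z t a * wstarhat Zi t m)"
    by (simp add: algebra_simps)
  finally have e: "what Z t a * \<sigma> t (m + 1) - what Z t a * \<sigma> t m = fls_const (\<phi> t m) * (what Z t a * wstarhat Zi t (m + 1) - what Z t a * wstarhat Zi t m)" .
  have "fls_nth (what Z t a * \<sigma> t (m + 1) - what Z t a * \<sigma> t m) 1 = fls_nth (fls_const (\<phi> t m) * (what Z t a * wstarhat Zi t (m + 1) - what Z t a * wstarhat Zi t m)) 1"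
    by (simp only: e)
  then show ?thesis by simp
qed

lemma res_what_sigma:
  assumes "n \<le> a"
  shows "fls_nth (what Z t a * \<sigma> t n) 1 = \<phi> t a"
proof -
  have top: "fls_nth (what Z t a * \<sigma> t (a + 1)) 1 = 0"
  proof -
    have "vanishes_below (what Z t a) (- a)" by (auto simp: vanishes_below_def what_nth_below)
    moreover have "vanishes_below (\<sigma> t (a + 1)) (a + 2)" by (auto simp: vanishes_below_def sigma_nth_below)
    ultimately have "vanishes_below (what Z t a * \<sigma> t (a + 1)) (- a + (a + 2))" by (rule vanishes_below_mult)
    then show ?thesis by (simp add: vanishes_below_def)
  qed
  have at: "fls_nth (what Z t a * \<sigma> t a) 1 = \<phi> t a"
    using res_what_sigma_diff[of t a a] top by (simp add: res_what_wstarhat)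
  show ?thesis
    using assms
  proof (induction n rule: int_le_induct)
    case (step n)
    then show ?case using res_what_sigma_diff[of t a "n - 1"] by (simp add: res_what_wstarhat)
  qed (rule at)
qed

lemma res_wstarhat_rho_term_diff:
  "fls_nth (wstarhat Zi t b * (what Z t (m + 1) * fls_const (\<psi> t (m + 1)) - \<rho> t (m + 1))) 1
   - fls_nth (wstarhat Zi t b * (what Z t m * fls_const (\<psi> t m) - \<rho> t m)) 1
   = \<psi> t (m + 1) * (fls_nth (what Z t (m + 1) * wstarhat Zi t b) 1 - fls_nth (what Z t m * wstarhat Zi t b) 1)"
proof -
  have r: "\<rho> t (m + 1) = \<rho> t m + what Z t m * (fls_const (\<psi> t (m + 1)) - fls_const (\<psi> t m))"
    using rho_diff[of t m] by (simp add: algebra_simps)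
  have e: "wstarhat Zi t b * (what Z t (m + 1) * fls_const (\<psi> t (m + 1)) - \<rho> t (m + 1))
     - wstarhat Zi t b * (what Z t m * fls_const (\<psi> t m) - \<rho> t m)
     = fls_const (\<psi> t (m + 1)) * (what Z t (m + 1) * wstarhat Zi t b - what Z t m * wstarhat Zi t b)"
    unfolding r by (simp add: algebra_simps)
  have "fls_nth (wstarhat Zi t b * (what Z t (m + 1) * fls_const (\<psi> t (m + 1)) - \<rho> t (m + 1))
     - wstarhat Zi t b * (what Z t m * fls_const (\<psi> t m) - \<rho> t m)) 1
     = fls_nth (fls_const (\<psi> t (m + 1)) * (what Z t (m + 1) * wstarhat Zi t b - what Z t m * wstarhat Zi t b)) 1"
    by (simp only: e)
  then show ?thesis by simp
qed

lemma res_wstarhat_rho_term: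
  assumes "b \<le> n"
  shows "fls_nth (wstarhat Zi t b * (what Z t n * fls_const (\<psi> t n) - \<rho> t n)) 1 = \<psi> t b"
proof -
  have bot: "fls_nth (wstarhat Zi t b * (what Z t (b - 1) * fls_const (\<psi> t (b - 1)) - \<rho> t (b - 1))) 1 = 0"
  proof -
    have "vanishes_below (wstarhat Zi t b) (b + 1)" by (auto simp: vanishes_below_def wstarhat_nth_below)
    moreover have "vanishes_below (what Z t (b - 1) * fls_const (\<psi> t (b - 1)) - \<rho> t (b - 1)) (1 - b)"
    proof (rule vanishes_below_diff)
      have "vanishes_below (what Z t (b - 1)) (1 - b)" by (auto simp: vanishes_below_def what_nth_below)
      then show "vanishes_below (what Z t (b - 1) * fls_const (\<psi> t (b - 1))) (1 - b)"
        using vanishes_below_mult[OF _ vanishes_below_fls_const] by fastforce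
      show "vanishes_below (\<rho> t (b - 1)) (1 - b)" by (auto simp: vanishes_below_def rho_nth_below)
    qed
    ultimately have "vanishes_below (wstarhat Zi t b * (what Z t (b - 1) * fls_const (\<psi> t (b - 1)) - \<rho> t (b - 1))) (b + 1 + (1 - b))"
      by (rule vanishes_below_mult)
    then show ?thesis by (simp add: vanishes_below_def)
  qed
  have at: "fls_nth (wstarhat Zi t b * (what Z t b * fls_const (\<psi> t b) - \<rho> t b)) 1 = \<psi> t b"
    using res_wstarhat_rho_term_diff[of t b "b - 1"] bot by (simp add: res_what_wstarhat)
  show ?thesis
    using assms
  proof (induction n rule: int_ge_induct)
    case (step n)
    then show ?case using res_wstarhat_rho_term_diff[of t b n] by (simp add: res_what_wstarhat)
  qed (rule at)
qed

lemma res_Dtw_product_rule: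
  assumes W: "admissible_fls (\<lambda>t. W t a)" and V: "admissible_fls (\<lambda>t. V t n)" and j: "1 \<le> j"
    and f: "\<And>s. fls_nth (W s a * V s n) 1 = f s"
  shows "fls_nth (Dtw e j W t a * V t n) 1 + fls_nth (W t a * Dtw (- e) j V t n) 1 = pd j f t"
  using has_pdD(2)[OF has_pd_cong[OF f[symmetric] has_pd_res_mult_Dtw[where W = W and V = V and a = a and n = n, OF W V j]]]
  by simp

lemma res_Dtw_what_mult:
  assumes "1 \<le> j"
  shows "fls_nth (Dtw 1 j (what Z) t a * V) 1 = pdo_apply (Lpos j t) (\<lambda>m. fls_nth (what Z t m * V) 1) a"
proof -
  have "fls_nth (Dtw 1 j (what Z) t a * V) 1 = fls_nth (V * pdo_apply (pdo_map fls_const (Lpos j t)) (what Z t) a) 1"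
    by (simp add: Dtw_what[OF assms] mult.commute)
  also have "\<dots> = pdo_apply (Lpos j t) (\<lambda>m. fls_nth (V * what Z t m) 1) a"
    by (rule fls_nth_mult_pdo_apply[OF Lpos_deg_le])
  finally show ?thesis by (simp add: mult.commute)
qed

lemma res_what_mult_eq_0D:
  assumes "\<And>a. fls_nth (what Z t a * F) 1 = 0"
  shows "F = 0"
proof (rule ccontr)
  assume "F \<noteq> 0"
  define c0 where "c0 = fls_subdegree F"
  have "fls_nth (what Z t (c0 - 1) * F) 1
      = (\<Sum>x\<in>{- (c0 - 1)..1 - c0}. fls_nth (what Z t (c0 - 1)) x * fls_nth F (1 - x))"
    by (rule fls_mult_nth_bounded) (auto simp: what_nth_below c0_def fls_eq0_below_subdegree)
  also have "\<dots> = Z t 0 (c0 - 1) * fls_nth F c0"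
    using what_nth_lowest[of t "c0 - 1"] by simp
  finally have "fls_nth (what Z t (c0 - 1) * F) 1 \<noteq> 0"
    using \<open>F \<noteq> 0\<close> Z0_nonzero by (simp add: c0_def nth_fls_subdegree_nonzero)
  then show False using assms by simp
qed

text \<open>Deduced from the flow of \<open>w\<close> through the bilinear identity rather than computed directly.\<close>
theorem Dtw_wstarhat:
  assumes j: "1 \<le> j"
  shows "Dtw (-1) j (wstarhat Zi) t b = - adj_conj_apply (pdo_map fls_const (Lpos j t)) (wstarhat Zi t) b"
proof -
  have res_zero: "fls_nth (what Z t a * (Dtw (-1) j (wstarhat Zi) t b + adj_conj_apply (pdo_map fls_const (Lpos j t)) (wstarhat Zi t) b)) 1 = 0"
    for a
  proof -
    have "fls_nth (Dtw 1 j (what Z) t a * wstarhat Zi t b) 1 + fls_nth (what Z t a * Dtw (- 1) j (wstarhat Zi) t b) 1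
        = pd j (\<lambda>s. if b \<le> a then 1 else 0) t"
      by (rule res_Dtw_product_rule[OF admissible_fls_what admissible_fls_wstarhat j res_what_wstarhat])
    moreover have "fls_nth (Dtw 1 j (what Z) t a * wstarhat Zi t b) 1 = pdo_apply (Lpos j t) (\<lambda>m. if b \<le> m then 1 else 0) a"
      by (simp add: res_Dtw_what_mult[OF j] res_what_wstarhat)
    moreover have "fls_nth (what Z t a * adj_conj_apply (pdo_map fls_const (Lpos j t)) (wstarhat Zi t) b) 1
        = adj_conj_apply (Lpos j t) (\<lambda>m. if m \<le> a then 1 else 0) b"
      by (simp add: fls_nth_mult_adj_conj_apply[OF Lpos_deg_le] res_what_wstarhat)
    ultimately show ?thesis
      by (simp add: distrib_left pd_const adj_conj_apply_indicator[OF Lpos_deg_le Lpos_nonpos_eq_0])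
  qed
  show ?thesis using res_what_mult_eq_0D[OF res_zero] by (simp add: eq_neg_iff_add_eq_0)
qed

lemma res_Dtw_wstarhat_mult:
  assumes "1 \<le> j"
  shows "fls_nth (Dtw (-1) j (wstarhat Zi) t b * V) 1 = - adj_conj_apply (Lpos j t) (\<lambda>m. fls_nth (wstarhat Zi t m * V) 1) b"
proof -
  have "fls_nth (Dtw (-1) j (wstarhat Zi) t b * V) 1 = - fls_nth (V * adj_conj_apply (pdo_map fls_const (Lpos j t)) (wstarhat Zi t) b) 1"
    by (simp add: Dtw_wstarhat[OF assms] mult.commute)
  also have "fls_nth (V * adj_conj_apply (pdo_map fls_const (Lpos j t)) (wstarhat Zi t) b) 1
      = adj_conj_apply (Lpos j t) (\<lambda>m. fls_nth (V * wstarhat Zi t m) 1) b"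
    by (rule fls_nth_mult_adj_conj_apply[OF Lpos_deg_le])
  finally show ?thesis by (simp add: mult.commute)
qed

theorem res_what_Dtw_list_sigma:
  assumes "\<forall>i\<in>set is. 1 \<le> i" and "n \<le> a"
  shows "fls_nth (what Z t a * Dtw_list (-1) is \<sigma> t n) 1 = (if is = [] then \<phi> t a else 0)"
  using assms
proof (induction "is" arbitrary: t n a)
  case Nil then show ?case using res_what_sigma by simp
next
  case (Cons j "is")
  have j: "1 \<le> j" and "is": "\<forall>i\<in>set is. 1 \<le> i" using Cons.prems by auto
  define V where "V = Dtw_list (-1) is \<sigma>"
  define f where "f = (\<lambda>s m. if is = [] then \<phi> s m else 0)"
  have IH: "fls_nth (what Z s m * V s n) 1 = f s m" if "n \<le> m" for s m
    unfolding V_def f_def using Cons.IH[OF "is" that] .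
  have "fls_nth (Dtw 1 j (what Z) t a * V t n) 1 + fls_nth (what Z t a * Dtw (- 1) j V t n) 1 = pd j (\<lambda>s. f s a) t"
    using Cons.prems IH
    by (intro res_Dtw_product_rule[OF admissible_fls_what _ j]) (simp_all add: V_def admissible_fls_Dtw_list[OF "is" admissible_fls_sigma])
  moreover have "pd j (\<lambda>s. f s a) t = pdo_apply (Lpos j t) (f t) a"
    by (cases "is = []") (simp_all add: f_def has_pdD(2)[OF has_pd_phi[OF j]] pd_const pdo_apply_eq[OF Lpos_deg_le])
  moreover have "fls_nth (Dtw 1 j (what Z) t a * V t n) 1 = pdo_apply (Lpos j t) (f t) a"
    unfolding res_Dtw_what_mult[OF j] using Cons.prems by (intro pdo_apply_cong[OF Lpos_deg_le]) (simp add: IH)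
  ultimately show ?case by (simp add: V_def)
qed

theorem res_wstarhat_Dtw_list_rho_term:
  assumes "\<forall>i\<in>set is. 1 \<le> i" and "b \<le> n"
  shows "fls_nth (wstarhat Zi t b * Dtw_list 1 is (\<lambda>s m. what Z s m * fls_const (\<psi> s m) - \<rho> s m) t n) 1
         = (if is = [] then \<psi> t b else 0)"
  using assms
proof (induction "is" arbitrary: t n b)
  case Nil then show ?case using res_wstarhat_rho_term by simp
next
  case (Cons j "is")
  have j: "1 \<le> j" and "is": "\<forall>i\<in>set is. 1 \<le> i" using Cons.prems by auto
  define V where "V = Dtw_list 1 is (\<lambda>s m. what Z s m * fls_const (\<psi> s m) - \<rho> s m)"
  define f where "f = (\<lambda>s m. if is = [] then \<psi> s m else 0)"
  have IH: "fls_nth (wstarhat Zi s m * V s n) 1 = f s m" if "m \<le> n" for s m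
    unfolding V_def f_def using Cons.IH[OF "is" that] .
  have "fls_nth (Dtw (-1) j (wstarhat Zi) t b * V t n) 1 + fls_nth (wstarhat Zi t b * Dtw (- (-1)) j V t n) 1
      = pd j (\<lambda>s. f s b) t"
    using Cons.prems IH
    by (intro res_Dtw_product_rule[OF admissible_fls_wstarhat _ j]) (simp_all add: V_def admissible_fls_Dtw_list[OF "is" admissible_fls_rho_term])
  moreover have "pd j (\<lambda>s. f s b) t = - adj_conj_apply (Lpos j t) (f t) b"
    by (cases "is = []") (simp_all add: f_def has_pdD(2)[OF has_pd_psi[OF j]] pd_const adj_conj_apply_eq[OF Lpos_deg_le])
  moreover have "fls_nth (Dtw (-1) j (wstarhat Zi) t b * V t n) 1 = - adj_conj_apply (Lpos j t) (f t) b"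
    unfolding res_Dtw_wstarhat_mult[OF j] using Cons.prems by (intro arg_cong[where f = uminus] adj_conj_apply_cong[OF Lpos_deg_le]) (simp add: IH)
  ultimately show ?case by (simp add: V_def)
qed

end

theorem proposition3p3:
  fixes Z Zi :: tpdo
    and \<phi> \<psi> :: "(nat \<Rightarrow> real) \<Rightarrow> int \<Rightarrow> real"
    and \<sigma> \<rho> :: "(nat \<Rightarrow> real) \<Rightarrow> int \<Rightarrow> real fls"
  assumes dress: "dmKP_dressing Z Zi"
    and eig: "eigenfunction (Lax Z Zi) \<phi>"
    and adj: "adjoint_eigenfunction (Lax Z Zi) \<psi>"
    and S1: "sq_pot (Lax Z Zi) (-1) (\<lambda>t n. fls_const (\<phi> t n)) (wstarhat Zi) \<sigma>"
    and S2: "sq_pot (Lax Z Zi) 1 (what Z) (\<lambda>t n. fls_const (\<psi> t n)) \<rho>"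
  shows "\<forall>is t n. (\<forall>i\<in>set is. i \<ge> 1) \<longrightarrow>
           fls_nth (what Z t n * Dtw_list (-1) is \<sigma> t n) 1
             = (if is = [] then \<phi> t n else 0)
         \<and> fls_nth (wstarhat Zi t n *
              Dtw_list 1 is (\<lambda>s m. what Z s m * fls_const (\<psi> s m) - \<rho> s m) t n) 1
             = (if is = [] then \<psi> t n else 0)"
proof -
  interpret dmKP_data Z Zi \<phi> \<psi> \<sigma> \<rho>
    using dress eig adj S1 S2 by unfold_locales
  show ?thesis
    using res_what_Dtw_list_sigma res_wstarhat_Dtw_list_rho_term by simp
qed

end
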